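(* Let $\Lambda=k(\Gamma,\mathcal{A},I)$ be a generalized bound path algebra, $i\in\Gamma_0$, $1\le j\le s_i$. Let $((M_l)_{l\in\Gamma_0},(\phi_\alpha)_{\alpha\in\Gamma_1})$ be the representation of $P(i,j)=\overline{e_{ij}}\Lambda$, so that $M_i=P_i^j=e_{ij}A_i$. Then $\operatorname{rad}P(i,j)$ is given by the representation $((N_l)_{l\in\Gamma_0},(\psi_\alpha)_{\alpha\in\Gamma_1})$, where: - $N_i=\operatorname{rad}P_i^j$; - $N_l=M_l$ for $l\neq i$; - $\psi_\alpha=\phi_\alpha|_{N_{s(\alpha)}}$ for every $\alpha\in\Gamma_1$.
   Context: $k$ is an algebraically closed field, $\Gamma$ a finite acyclic quiver, and $\mathcal{A}=\{A_i:i\in\Gamma_0\}$ finite-dimensional basic $k$-algebras with $A_i\cong k\Sigma_i/\Omega_i$. $I$ is a finite set of relations in $\Gamma$ generating an admissible ideal. $\Lambda=k(\Gamma,\mathcal{A},I)=k(\Gamma,\mathcal{A})/(\mathcal{A}(I))$ is the generalized bound path algebra: - $k(\Gamma,\mathcal{A})$ is spanned by $\mathcal{A}$-paths $a_1\beta_1\cdots a_n\beta_na_{n+1}$ ($a_i\in A_{s(\beta_i)}$, $a_{n+1}\in A_{e(\beta_n)}$) modulo multilinearity, with concatenation product; - $\mathcal{A}(I)$ consists of the elements $\sum_r\lambda_r\beta_{r1}\overline{\gamma_{r1}}\cdots\overline{\gamma_{r(m_r-1)}}\beta_{rm_r}$ with $\sum_r\lambda_r\beta_{r1}\cdots\beta_{rm_r}\in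 I$ and $\gamma_{rj}$ paths in $\Sigma_{e(\beta_{rj})}$. For each $i$, $\{e_{i1},\dots,e_{is_i}\}$ is a complete set of primitive pairwise orthogonal idempotents of $A_i$, and $P_i^j=e_{ij}A_i$. Right $\Lambda$-modules are identified with representations: $X_l=X\cdot1_l$ (an $A_l$-module) and $\phi_\alpha(x)=x\alpha$ for $\alpha:l\to l'$. A subrepresentation corresponds to a submodule. *)

theory Defs
  imports "HOL-Computational_Algebra.Polynomial" "HOL-Library.FuncSet"
begin

record ('k, 'a) alg =
  acar :: "'a set"
  aadd :: "'a \<Rightarrow> 'a \<Rightarrow> 'a"
  amul :: "'a \<Rightarrow> 'a \<Rightarrow> 'a"
  asmul :: "'k \<Rightarrow> 'a \<Rightarrow> 'a"
  azero :: "'a"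
  aone :: "'a"

definition is_subspace :: "('k, 'a) alg \<Rightarrow> 'a set \<Rightarrow> bool" where
  "is_subspace A J \<longleftrightarrow> J \<subseteq> acar A \<and> azero A \<in> J \<and>
     (\<forall>x\<in>J. \<forall>y\<in>J. aadd A x y \<in> J) \<and> (\<forall>c. \<forall>x\<in>J. asmul A c x \<in> J)"

definition is_ideal :: "('k, 'a) alg \<Rightarrow> 'a set \<Rightarrow> bool" where
  "is_ideal A J \<longleftrightarrow> is_subspace A J \<and>
     (\<forall>x\<in>J. \<forall>r\<in>acar A. amul A r x \<in> J \<and> amul A x r \<in> J)"

definition span :: "('k, 'a) alg \<Rightarrow> 'a set \<Rightarrow> 'a set" where
  "span A S = \<Inter>{J. is_subspace A J \<and> S \<subseteq> J}"

definition ideal_gen :: "('k, 'a) alg \<Rightarrow> 'a set \<Rightarrow> 'a set" where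
  "ideal_gen A S = \<Inter>{J. is_ideal A J \<and> S \<subseteq> J}"

definition cos :: "('k, 'a) alg \<Rightarrow> 'a set \<Rightarrow> 'a \<Rightarrow> 'a set" where
  "cos A J x = {y \<in> acar A. \<exists>j\<in>J. y = aadd A x j}"

definition rep :: "'a set \<Rightarrow> 'a" where
  "rep X = (SOME x. x \<in> X)"

definition quot :: "('k, 'a) alg \<Rightarrow> 'a set \<Rightarrow> ('k, 'a set) alg" where
  "quot A J = \<lparr> acar = cos A J ` acar A,
     aadd = (\<lambda>X Y. cos A J (aadd A (rep X) (rep Y))),
     amul = (\<lambda>X Y. cos A J (amul A (rep X) (rep Y))),
     asmul = (\<lambda>c X. cos A J (asmul A c (rep X))),
     azero = cos A J (azero A),
     aone = cos A J (aone A) \<rparr>"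

text \<open>Algebra with basis B and partial multiplication of basis elements
  (finitely supported functions B \<Rightarrow> k); the unit is the sum of the elements of U.\<close>
definition fsupp :: "('b \<Rightarrow> 'k::zero) \<Rightarrow> 'b set" where
  "fsupp f = {x. f x \<noteq> 0}"

definition delta :: "'b \<Rightarrow> 'b \<Rightarrow> 'k::{zero,one}" where
  "delta w = (\<lambda>x. if x = w then 1 else 0)"

definition salg :: "'b set \<Rightarrow> ('b \<Rightarrow> 'b \<Rightarrow> 'b option) \<Rightarrow> 'b set \<Rightarrow> ('k::field, 'b \<Rightarrow> 'k) alg" where
  "salg B pp U = \<lparr> acar = {f. finite (fsupp f) \<and> fsupp f \<subseteq> B},
     aadd = (\<lambda>f g x. f x + g x),
     amul = (\<lambda>f g w. \<Sum>u\<in>fsupp f. \<Sum>v\<in>fsupp g. (if pp u v = Some w then f u * g v else 0)),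
     asmul = (\<lambda>c f x. c * f x),
     azero = (\<lambda>x. 0),
     aone = (\<lambda>x. if x \<in> U then 1 else 0) \<rparr>"

record ('v, 'e) quiver =
  qV :: "'v set"
  qE :: "'e set"
  qs :: "'e \<Rightarrow> 'v"
  qt :: "'e \<Rightarrow> 'v"

definition finite_quiver :: "('v, 'e) quiver \<Rightarrow> bool" where
  "finite_quiver Q \<longleftrightarrow> finite (qV Q) \<and> finite (qE Q) \<and>
     (\<forall>a\<in>qE Q. qs Q a \<in> qV Q \<and> qt Q a \<in> qV Q)"

text \<open>A path is (start vertex, list of arrows), composed left to right
  (the end of an arrow is the start of the next one); (v, []) is the trivial path.\<close>
definition is_path :: "('v, 'e) quiver \<Rightarrow> 'v \<times> 'e list \<Rightarrow> bool" where
  "is_path Q p \<longleftrightarrow> fst p \<in> qV Q \<and> set (snd p) \<subseteq> qE Q \<and>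
     (snd p \<noteq> [] \<longrightarrow> qs Q (hd (snd p)) = fst p) \<and>
     (\<forall>r. Suc r < length (snd p) \<longrightarrow> qs Q (snd p ! Suc r) = qt Q (snd p ! r))"

definition pend :: "('v, 'e) quiver \<Rightarrow> 'v \<times> 'e list \<Rightarrow> 'v" where
  "pend Q p = (if snd p = [] then fst p else qt Q (last (snd p)))"

text \<open>r-th vertex visited by the path (r = 0 .. length).\<close>
definition vtx :: "('v, 'e) quiver \<Rightarrow> 'v \<times> 'e list \<Rightarrow> nat \<Rightarrow> 'v" where
  "vtx Q p r = (if r = 0 then fst p else qt Q (snd p ! (r - 1)))"

definition pcat :: "('v, 'e) quiver \<Rightarrow> 'v \<times> 'e list \<Rightarrow> 'v \<times> 'e list \<Rightarrow> ('v \<times> 'e list) option" where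
  "pcat Q p q = (if pend Q p = fst q then Some (fst p, snd p @ snd q) else None)"

definition acyclic_quiver :: "('v, 'e) quiver \<Rightarrow> bool" where
  "acyclic_quiver Q \<longleftrightarrow> (\<forall>p. is_path Q p \<and> snd p \<noteq> [] \<longrightarrow> pend Q p \<noteq> fst p)"

definition path_alg :: "('v, 'e) quiver \<Rightarrow> ('k::field, 'v \<times> 'e list \<Rightarrow> 'k) alg" where
  "path_alg Q = salg {p. is_path Q p} (pcat Q) {(v, []) | v. v \<in> qV Q}"

definition arrow_pow :: "('v, 'e) quiver \<Rightarrow> nat \<Rightarrow> ('v \<times> 'e list \<Rightarrow> 'k::field) set" where
  "arrow_pow Q m = {f \<in> acar (path_alg Q). \<forall>p\<in>fsupp f. m \<le> length (snd p)}"

definition admissible :: "('v, 'e) quiver \<Rightarrow> ('v \<times> 'e list \<Rightarrow> 'k::field) set \<Rightarrow> bool" where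
  "admissible Q J \<longleftrightarrow> is_ideal (path_alg Q) J \<and>
     (\<exists>m\<ge>2. arrow_pow Q m \<subseteq> J) \<and> J \<subseteq> arrow_pow Q 2"

definition is_relation :: "('v, 'e) quiver \<Rightarrow> ('v \<times> 'e list \<Rightarrow> 'k::field) \<Rightarrow> bool" where
  "is_relation Q \<rho> \<longleftrightarrow> \<rho> \<in> acar (path_alg Q) \<and>
     (\<exists>a b. \<forall>p\<in>fsupp \<rho>. fst p = a \<and> pend Q p = b \<and> 2 \<le> length (snd p))"

definition Aalg :: "('v \<Rightarrow> ('w, 'f) quiver) \<Rightarrow> ('v \<Rightarrow> ('w \<times> 'f list \<Rightarrow> 'k::field) set) \<Rightarrow> 'v
     \<Rightarrow> ('k, ('w \<times> 'f list \<Rightarrow> 'k) set) alg" where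
  "Aalg \<Sigma> \<Omega> l = quot (path_alg (\<Sigma> l)) (\<Omega> l)"

text \<open>Formal A-paths a_1 beta_1 a_2 ... beta_n a_(n+1): (path in Gamma, [a_1, ..., a_(n+1)]).\<close>
definition valid_word :: "('v, 'e) quiver \<Rightarrow> ('v \<Rightarrow> ('k, 'a) alg) \<Rightarrow> ('v \<times> 'e list) \<times> 'a list \<Rightarrow> bool" where
  "valid_word \<Gamma> A w \<longleftrightarrow> is_path \<Gamma> (fst w) \<and> length (snd w) = Suc (length (snd (fst w))) \<and>
     (\<forall>r\<le>length (snd (fst w)). snd w ! r \<in> acar (A (vtx \<Gamma> (fst w) r)))"

definition wprod :: "('v, 'e) quiver \<Rightarrow> ('v \<Rightarrow> ('k, 'a) alg) \<Rightarrow> ('v \<times> 'e list) \<times> 'a list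
     \<Rightarrow> ('v \<times> 'e list) \<times> 'a list \<Rightarrow> (('v \<times> 'e list) \<times> 'a list) option" where
  "wprod \<Gamma> A u v = (if pend \<Gamma> (fst u) = fst (fst v)
     then Some ((fst (fst u), snd (fst u) @ snd (fst v)),
                butlast (snd u) @ [amul (A (fst (fst v))) (last (snd u)) (hd (snd v))] @ tl (snd v))
     else None)"

definition free_alg :: "('v, 'e) quiver \<Rightarrow> ('v \<Rightarrow> ('k::field, 'a) alg)
     \<Rightarrow> ('k, ('v \<times> 'e list) \<times> 'a list \<Rightarrow> 'k) alg" where
  "free_alg \<Gamma> A = salg {w. valid_word \<Gamma> A w} (wprod \<Gamma> A) {((l, []), [aone (A l)]) | l. l \<in> qV \<Gamma>}"

definition multilin_gens :: "('v, 'e) quiver \<Rightarrow> ('v \<Rightarrow> ('k::field, 'a) alg)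
     \<Rightarrow> (('v \<times> 'e list) \<times> 'a list \<Rightarrow> 'k) set" where
  "multilin_gens \<Gamma> A =
     {f. \<exists>p as r a a'. valid_word \<Gamma> A (p, as) \<and> r < length as \<and>
          a \<in> acar (A (vtx \<Gamma> p r)) \<and> a' \<in> acar (A (vtx \<Gamma> p r)) \<and>
          f = (\<lambda>x. delta (p, as[r := aadd (A (vtx \<Gamma> p r)) a a']) x
                    - delta (p, as[r := a]) x - delta (p, as[r := a']) x)}
   \<union> {f. \<exists>p as r a c. valid_word \<Gamma> A (p, as) \<and> r < length as \<and>
          a \<in> acar (A (vtx \<Gamma> p r)) \<and>
          f = (\<lambda>x. delta (p, as[r := asmul (A (vtx \<Gamma> p r)) c a]) x - c * delta (p, as[r := a]) x)}"

definition kGA :: "('v, 'e) quiver \<Rightarrow> ('v \<Rightarrow> ('k::field, 'a) alg)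
     \<Rightarrow> ('k, (('v \<times> 'e list) \<times> 'a list \<Rightarrow> 'k) set) alg" where
  "kGA \<Gamma> A = quot (free_alg \<Gamma> A) (span (free_alg \<Gamma> A) (multilin_gens \<Gamma> A))"

definition wcls :: "('v, 'e) quiver \<Rightarrow> ('v \<Rightarrow> ('k::field, 'a) alg) \<Rightarrow> ('v \<times> 'e list) \<times> 'a list
     \<Rightarrow> (('v \<times> 'e list) \<times> 'a list \<Rightarrow> 'k) set" where
  "wcls \<Gamma> A w = cos (free_alg \<Gamma> A) (span (free_alg \<Gamma> A) (multilin_gens \<Gamma> A)) (delta w)"

text \<open>The A-path beta_1 gamma_1bar beta_2 ... gamma_(m-1)bar beta_m attached to a path p of Gamma
  and a choice g of paths gamma_j in Sigma_(vtx p j).\<close>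
definition rel_word :: "('v, 'e) quiver \<Rightarrow> ('v \<Rightarrow> ('w, 'f) quiver) \<Rightarrow> ('v \<Rightarrow> ('w \<times> 'f list \<Rightarrow> 'k::field) set)
     \<Rightarrow> ('v \<times> 'e list) \<Rightarrow> (nat \<Rightarrow> 'w \<times> 'f list)
     \<Rightarrow> ('v \<times> 'e list) \<times> ('w \<times> 'f list \<Rightarrow> 'k) set list" where
  "rel_word \<Gamma> \<Sigma> \<Omega> p g = (p, map (\<lambda>r. if r = 0 \<or> r = length (snd p)
        then aone (Aalg \<Sigma> \<Omega> (vtx \<Gamma> p r))
        else cos (path_alg (\<Sigma> (vtx \<Gamma> p r))) (\<Omega> (vtx \<Gamma> p r)) (delta (g r)))
      [0..<Suc (length (snd p))])"

definition AI :: "('v, 'e) quiver \<Rightarrow> ('v \<Rightarrow> ('w, 'f) quiver) \<Rightarrow> ('v \<Rightarrow> ('w \<times> 'f list \<Rightarrow> 'k::field) set)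
     \<Rightarrow> ('v \<times> 'e list \<Rightarrow> 'k) set
     \<Rightarrow> (('v \<times> 'e list) \<times> ('w \<times> 'f list \<Rightarrow> 'k) set list \<Rightarrow> 'k) set set" where
  "AI \<Gamma> \<Sigma> \<Omega> I = {cos (free_alg \<Gamma> (Aalg \<Sigma> \<Omega>)) (span (free_alg \<Gamma> (Aalg \<Sigma> \<Omega>)) (multilin_gens \<Gamma> (Aalg \<Sigma> \<Omega>)))
        (\<lambda>x. \<Sum>p\<in>fsupp \<rho>. if x = rel_word \<Gamma> \<Sigma> \<Omega> p (G p) then \<rho> p else 0)
      | \<rho> G. \<rho> \<in> I \<and> (\<forall>p\<in>fsupp \<rho>. \<forall>r. 0 < r \<and> r < length (snd p) \<longrightarrow>
                                   is_path (\<Sigma> (vtx \<Gamma> p r)) (G p r))}"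

definition gbpa :: "('v, 'e) quiver \<Rightarrow> ('v \<Rightarrow> ('w, 'f) quiver) \<Rightarrow> ('v \<Rightarrow> ('w \<times> 'f list \<Rightarrow> 'k::field) set)
     \<Rightarrow> ('v \<times> 'e list \<Rightarrow> 'k) set
     \<Rightarrow> ('k, (('v \<times> 'e list) \<times> ('w \<times> 'f list \<Rightarrow> 'k) set list \<Rightarrow> 'k) set set) alg" where
  "gbpa \<Gamma> \<Sigma> \<Omega> I = quot (kGA \<Gamma> (Aalg \<Sigma> \<Omega>)) (ideal_gen (kGA \<Gamma> (Aalg \<Sigma> \<Omega>)) (AI \<Gamma> \<Sigma> \<Omega> I))"

definition lcls :: "('v, 'e) quiver \<Rightarrow> ('v \<Rightarrow> ('w, 'f) quiver) \<Rightarrow> ('v \<Rightarrow> ('w \<times> 'f list \<Rightarrow> 'k::field) set)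
     \<Rightarrow> ('v \<times> 'e list \<Rightarrow> 'k) set
     \<Rightarrow> ('v \<times> 'e list) \<times> ('w \<times> 'f list \<Rightarrow> 'k) set list
     \<Rightarrow> (('v \<times> 'e list) \<times> ('w \<times> 'f list \<Rightarrow> 'k) set list \<Rightarrow> 'k) set set" where
  "lcls \<Gamma> \<Sigma> \<Omega> I w = cos (kGA \<Gamma> (Aalg \<Sigma> \<Omega>)) (ideal_gen (kGA \<Gamma> (Aalg \<Sigma> \<Omega>)) (AI \<Gamma> \<Sigma> \<Omega> I))
                         (wcls \<Gamma> (Aalg \<Sigma> \<Omega>) w)"

definition iota where
  "iota \<Gamma> \<Sigma> \<Omega> I l a = lcls \<Gamma> \<Sigma> \<Omega> I ((l, []), [a])"

definition unit_at where
  "unit_at \<Gamma> \<Sigma> \<Omega> I l = iota \<Gamma> \<Sigma> \<Omega> I l (aone (Aalg \<Sigma> \<Omega> l))"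

definition arrow_el where
  "arrow_el \<Gamma> \<Sigma> \<Omega> I \<alpha> = lcls \<Gamma> \<Sigma> \<Omega> I ((qs \<Gamma> \<alpha>, [\<alpha>]),
       [aone (Aalg \<Sigma> \<Omega> (qs \<Gamma> \<alpha>)), aone (Aalg \<Sigma> \<Omega> (qt \<Gamma> \<alpha>))])"

definition idem :: "('k, 'a) alg \<Rightarrow> 'a \<Rightarrow> bool" where
  "idem A e \<longleftrightarrow> e \<in> acar A \<and> amul A e e = e"

definition primitive_idem :: "('k, 'a) alg \<Rightarrow> 'a \<Rightarrow> bool" where
  "primitive_idem A e \<longleftrightarrow> idem A e \<and> e \<noteq> azero A \<and>
     (\<forall>u v. idem A u \<and> idem A v \<and> amul A u v = azero A \<and> amul A v u = azero A \<and>
            aadd A u v = e \<longrightarrow> u = azero A \<or> v = azero A)"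

definition complete_prim_idems :: "('k, 'a) alg \<Rightarrow> (nat \<Rightarrow> 'a) \<Rightarrow> nat \<Rightarrow> bool" where
  "complete_prim_idems A es s \<longleftrightarrow>
     (\<forall>r\<in>{1..s}. primitive_idem A (es r)) \<and>
     (\<forall>r\<in>{1..s}. \<forall>r'\<in>{1..s}. r \<noteq> r' \<longrightarrow> amul A (es r) (es r') = azero A) \<and>
     foldr (aadd A) (map es [1..<Suc s]) (azero A) = aone A"

text \<open>Right submodules of a right ideal M of A (viewed as right A-module).\<close>
definition submod :: "('k, 'a) alg \<Rightarrow> 'a set \<Rightarrow> 'a set \<Rightarrow> bool" where
  "submod A M N \<longleftrightarrow> N \<subseteq> M \<and> azero A \<in> N \<and> (\<forall>x\<in>N. \<forall>y\<in>N. aadd A x y \<in> N) \<and>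
     (\<forall>x\<in>N. \<forall>r\<in>acar A. amul A x r \<in> N)"

definition maxsub :: "('k, 'a) alg \<Rightarrow> 'a set \<Rightarrow> 'a set \<Rightarrow> bool" where
  "maxsub A M N \<longleftrightarrow> submod A M N \<and> N \<noteq> M \<and>
     (\<forall>N'. submod A M N' \<and> N \<subseteq> N' \<longrightarrow> N' = N \<or> N' = M)"

definition mod_rad :: "('k, 'a) alg \<Rightarrow> 'a set \<Rightarrow> 'a set" where
  "mod_rad A M = M \<inter> \<Inter>{N. maxsub A M N}"

definition eA :: "('k, 'a) alg \<Rightarrow> 'a \<Rightarrow> 'a set" where
  "eA A e = {amul A e x | x. x \<in> acar A}"

text \<open>Representation of a submodule X of Lambda_Lambda: X_l = X 1_l, phi_alpha(x) = x alpha.\<close>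
definition rspace where
  "rspace \<Gamma> \<Sigma> \<Omega> I X l = {amul (gbpa \<Gamma> \<Sigma> \<Omega> I) x (unit_at \<Gamma> \<Sigma> \<Omega> I l) | x. x \<in> X}"

definition rmap where
  "rmap \<Gamma> \<Sigma> \<Omega> I X \<alpha> = restrict (\<lambda>x. amul (gbpa \<Gamma> \<Sigma> \<Omega> I) x (arrow_el \<Gamma> \<Sigma> \<Omega> I \<alpha>))
                          (rspace \<Gamma> \<Sigma> \<Omega> I X (qs \<Gamma> \<alpha>))"

end

theory Submission
  imports Defs
begin

text \<open>Let \<open>\<epsilon>\<close> be the unit of \<open>\<Lambda>\<close> at the vertex \<open>i\<close>, \<open>e = e\<^sub>i\<^sub>j\<close> viewed in \<open>\<Lambda>\<close> and
  \<open>P = e\<Lambda>\<close>. Since \<open>\<Gamma>\<close> is acyclic, no path leaves \<open>i\<close> and comes back, which in \<open>\<Lambda>\<close> reads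
  \<open>\<epsilon> \<Lambda> (1 - \<epsilon>) \<Lambda> \<epsilon> = 0\<close>. Hence for a vertex \<open>l \<noteq> i\<close> and \<open>x \<in> P\<close> the element \<open>x \<epsilon>\<^sub>l\<close> can
  never reach the generator (\<open>x \<epsilon>\<^sub>l r e = 0\<close>), so it lies in every maximal submodule:
  \<open>(rad P) \<epsilon>\<^sub>l = P \<epsilon>\<^sub>l\<close>. At \<open>i\<close> itself the corner \<open>\<epsilon> \<Lambda> \<epsilon>\<close> is a copy of \<open>A\<^sub>i\<close>; it is an
  injective copy because the relations \<open>\<A>(I)\<close> only involve paths of length at least two. Through
  \<open>x \<mapsto> x \<epsilon>\<close> the maximal submodules of \<open>P\<close> and of \<open>P\<^sub>i\<^sup>j = e\<^sub>i\<^sub>j A\<^sub>i\<close> correspond, which gives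
  \<open>(rad P) \<epsilon> = rad P\<^sub>i\<^sup>j\<close>. The arrow maps of \<open>rad P\<close> are restrictions since \<open>rad P \<subseteq> P\<close>.\<close>

section \<open>Algebras over a field\<close>

locale kalg =
  fixes A :: "('k::field, 'a) alg"
  assumes add_closed: "x \<in> acar A \<Longrightarrow> y \<in> acar A \<Longrightarrow> aadd A x y \<in> acar A"
    and mul_closed: "x \<in> acar A \<Longrightarrow> y \<in> acar A \<Longrightarrow> amul A x y \<in> acar A"
    and sm_closed: "x \<in> acar A \<Longrightarrow> asmul A c x \<in> acar A"
    and zero_closed: "azero A \<in> acar A"
    and one_closed: "aone A \<in> acar A"
    and add_assoc: "x \<in> acar A \<Longrightarrow> y \<in> acar A \<Longrightarrow> z \<in> acar A \<Longrightarrow>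
        aadd A (aadd A x y) z = aadd A x (aadd A y z)"
    and add_comm: "x \<in> acar A \<Longrightarrow> y \<in> acar A \<Longrightarrow> aadd A x y = aadd A y x"
    and add_zero: "x \<in> acar A \<Longrightarrow> aadd A (azero A) x = x"
    and add_neg: "x \<in> acar A \<Longrightarrow> aadd A (asmul A (-1) x) x = azero A"
    and mul_assoc: "x \<in> acar A \<Longrightarrow> y \<in> acar A \<Longrightarrow> z \<in> acar A \<Longrightarrow>
        amul A (amul A x y) z = amul A x (amul A y z)"
    and one_mul: "x \<in> acar A \<Longrightarrow> amul A (aone A) x = x"
    and mul_one: "x \<in> acar A \<Longrightarrow> amul A x (aone A) = x"
    and distl: "x \<in> acar A \<Longrightarrow> y \<in> acar A \<Longrightarrow> z \<in> acar A \<Longrightarrow>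
        amul A x (aadd A y z) = aadd A (amul A x y) (amul A x z)"
    and distr: "x \<in> acar A \<Longrightarrow> y \<in> acar A \<Longrightarrow> z \<in> acar A \<Longrightarrow>
        amul A (aadd A x y) z = aadd A (amul A x z) (amul A y z)"
    and sm_add: "x \<in> acar A \<Longrightarrow> y \<in> acar A \<Longrightarrow>
        asmul A c (aadd A x y) = aadd A (asmul A c x) (asmul A c y)"
    and add_sm: "x \<in> acar A \<Longrightarrow> asmul A (c + d) x = aadd A (asmul A c x) (asmul A d x)"
    and sm_sm: "x \<in> acar A \<Longrightarrow> asmul A (c * d) x = asmul A c (asmul A d x)"
    and sm_one: "x \<in> acar A \<Longrightarrow> asmul A 1 x = x"
    and sm_mul: "x \<in> acar A \<Longrightarrow> y \<in> acar A \<Longrightarrow> amul A (asmul A c x) y = asmul A c (amul A x y)"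
    and mul_sm: "x \<in> acar A \<Longrightarrow> y \<in> acar A \<Longrightarrow> amul A x (asmul A c y) = asmul A c (amul A x y)"
begin

abbreviation "neg x \<equiv> asmul A (-1) x"
abbreviation "sub x y \<equiv> aadd A x (neg y)"

lemma sub_closed: "x \<in> acar A \<Longrightarrow> y \<in> acar A \<Longrightarrow> sub x y \<in> acar A" by (simp add: add_closed sm_closed)

lemma add_zero_r: "x \<in> acar A \<Longrightarrow> aadd A x (azero A) = x"
  by (simp add: add_comm[of x "azero A"] zero_closed add_zero)

lemma add_neg_r: "x \<in> acar A \<Longrightarrow> aadd A x (neg x) = azero A"
  by (simp add: add_comm[of x "neg x"] sm_closed add_neg)

lemma add_left_cancel:
  assumes "x \<in> acar A" "y \<in> acar A" "z \<in> acar A" "aadd A x y = aadd A x z"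
  shows "y = z"
proof -
  have "aadd A (neg x) (aadd A x y) = aadd A (neg x) (aadd A x z)" using assms by simp
  moreover have "aadd A (neg x) (aadd A x y) = y"
    using assms add_assoc[of "neg x" x y, symmetric] by (simp add: sm_closed add_neg add_zero)
  moreover have "aadd A (neg x) (aadd A x z) = z"
    using assms add_assoc[of "neg x" x z, symmetric] by (simp add: sm_closed add_neg add_zero)
  ultimately show ?thesis by simp
qed

lemma sub_self: "x \<in> acar A \<Longrightarrow> sub x x = azero A" by (rule add_neg_r)

lemma mul_zero: "x \<in> acar A \<Longrightarrow> amul A x (azero A) = azero A"
proof -
  assume x: "x \<in> acar A"
  have "aadd A (amul A x (azero A)) (amul A x (azero A)) = aadd A (amul A x (azero A)) (azero A)"
    using x by (simp add: distl[symmetric] zero_closed add_zero add_zero_r mul_closed)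
  then show ?thesis using x by (meson add_left_cancel mul_closed zero_closed)
qed

lemma zero_mul: "x \<in> acar A \<Longrightarrow> amul A (azero A) x = azero A"
proof -
  assume x: "x \<in> acar A"
  have "aadd A (amul A (azero A) x) (amul A (azero A) x) = aadd A (amul A (azero A) x) (azero A)"
    using x by (simp add: distr[symmetric] zero_closed add_zero add_zero_r mul_closed)
  then show ?thesis using x by (meson add_left_cancel mul_closed zero_closed)
qed

lemma sm_zero_scalar: "x \<in> acar A \<Longrightarrow> asmul A 0 x = azero A"
proof -
  assume x: "x \<in> acar A"
  have "aadd A (asmul A 0 x) (asmul A 0 x) = aadd A (asmul A 0 x) (azero A)"
    using x add_sm[of x 0 0] by (simp add: add_zero_r sm_closed)
  then show ?thesis using x by (meson add_left_cancel sm_closed zero_closed)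
qed

lemma sm_zero: "asmul A c (azero A) = azero A"
proof -
  have "asmul A c (azero A) = asmul A c (asmul A 0 (azero A))" by (simp add: sm_zero_scalar zero_closed)
  also have "\<dots> = asmul A (c * 0) (azero A)" by (rule sm_sm[symmetric], rule zero_closed)
  also have "\<dots> = azero A" using sm_zero_scalar[OF zero_closed] by simp
  finally show ?thesis .
qed

lemma mul_sub: "x \<in> acar A \<Longrightarrow> y \<in> acar A \<Longrightarrow> z \<in> acar A \<Longrightarrow>
   amul A x (sub y z) = sub (amul A x y) (amul A x z)"
  by (simp add: distl sm_closed mul_sm)
lemma sub_mul: "x \<in> acar A \<Longrightarrow> y \<in> acar A \<Longrightarrow> z \<in> acar A \<Longrightarrow>
   amul A (sub x y) z = sub (amul A x z) (amul A y z)"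
  by (simp add: distr sm_closed sm_mul)

lemma neg_neg: "x \<in> acar A \<Longrightarrow> neg (neg x) = x"
  by (simp add: sm_sm[symmetric] sm_one)

lemma add_ac:
  "x \<in> acar A \<Longrightarrow> y \<in> acar A \<Longrightarrow> z \<in> acar A \<Longrightarrow> aadd A x (aadd A y z) = aadd A y (aadd A x z)"
  by (simp add: add_assoc[symmetric] add_comm[of x y])

lemma add_eq_sub: "x \<in> acar A \<Longrightarrow> y \<in> acar A \<Longrightarrow> z \<in> acar A \<Longrightarrow> x = aadd A y z \<Longrightarrow> sub x z = y"
  by (simp add: add_assoc add_neg_r add_zero_r sm_closed)

lemmas ac_closed = add_assoc add_comm add_ac add_closed sm_closed mul_closed zero_closed one_closed

lemma sub_add_cancel: "x \<in> acar A \<Longrightarrow> j \<in> acar A \<Longrightarrow> sub (aadd A x j) x = j"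
  by (simp add: sm_add ac_closed add_neg_r add_zero_r)

lemma add_sub_cancel: "x \<in> acar A \<Longrightarrow> z \<in> acar A \<Longrightarrow> aadd A x (sub z x) = z"
  by (metis add_ac add_neg_r add_zero_r sm_closed)

lemma neg_add_cancel_left: "x \<in> acar A \<Longrightarrow> y \<in> acar A \<Longrightarrow> aadd A (neg x) (aadd A x y) = y"
  by (simp add: add_assoc[symmetric] sm_closed add_neg add_zero)

lemma sub_eq_add_sub: "x \<in> acar A \<Longrightarrow> y \<in> acar A \<Longrightarrow> z \<in> acar A \<Longrightarrow>
   sub z y = aadd A (sub z x) (sub x y)"
  by (simp add: add_assoc sm_closed add_closed neg_add_cancel_left)

lemma neg_sub: "x \<in> acar A \<Longrightarrow> y \<in> acar A \<Longrightarrow> neg (sub x y) = sub y x"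
  by (simp add: sm_add neg_neg ac_closed)

lemma add_add_swap: "a \<in> acar A \<Longrightarrow> b \<in> acar A \<Longrightarrow> c \<in> acar A \<Longrightarrow> d \<in> acar A \<Longrightarrow>
   aadd A (aadd A a b) (aadd A c d) = aadd A (aadd A a c) (aadd A b d)"
  by (simp add: add_assoc add_closed add_ac[of b c d])

lemma sub_add_add: "a \<in> acar A \<Longrightarrow> b \<in> acar A \<Longrightarrow> c \<in> acar A \<Longrightarrow> d \<in> acar A \<Longrightarrow>
   sub (aadd A a b) (aadd A c d) = aadd A (sub a c) (sub b d)"
  by (simp add: sm_add ac_closed)

lemma sub_mul_mul: "a \<in> acar A \<Longrightarrow> b \<in> acar A \<Longrightarrow> c \<in> acar A \<Longrightarrow> d \<in> acar A \<Longrightarrow>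
   sub (amul A a b) (amul A c d) = aadd A (amul A (sub a c) b) (amul A c (sub b d))"
  using sub_eq_add_sub[of "amul A c b" "amul A c d" "amul A a b"] by (simp add: sub_mul mul_sub mul_closed)

lemma sub_sm_sm: "a \<in> acar A \<Longrightarrow> c \<in> acar A \<Longrightarrow>
   sub (asmul A k a) (asmul A k c) = asmul A k (sub a c)"
  by (simp add: sm_add sm_sm[symmetric] mult.commute sm_closed)

end

locale kalg_ideal = kalg +
  fixes J assumes ideal: "is_ideal A J"
begin

lemma ideal_subset: "J \<subseteq> acar A" using ideal by (simp add: is_ideal_def is_subspace_def)
lemma ideal_zero: "azero A \<in> J" using ideal by (simp add: is_ideal_def is_subspace_def)
lemma ideal_add: "x \<in> J \<Longrightarrow> y \<in> J \<Longrightarrow> aadd A x y \<in> J" using ideal by (simp add: is_ideal_def is_subspace_def)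
lemma ideal_sm: "x \<in> J \<Longrightarrow> asmul A c x \<in> J" using ideal by (simp add: is_ideal_def is_subspace_def)
lemma ideal_mul_left: "x \<in> J \<Longrightarrow> r \<in> acar A \<Longrightarrow> amul A r x \<in> J" using ideal by (simp add: is_ideal_def)
lemma ideal_mul_right: "x \<in> J \<Longrightarrow> r \<in> acar A \<Longrightarrow> amul A x r \<in> J" using ideal by (simp add: is_ideal_def)

lemma mem_coset_iff: "z \<in> cos A J x \<longleftrightarrow> z \<in> acar A \<and> sub z x \<in> J" if "x \<in> acar A"
proof
  assume "z \<in> cos A J x"
  then obtain j where "z \<in> acar A" "j \<in> J" "z = aadd A x j" by (auto simp: cos_def)
  then show "z \<in> acar A \<and> sub z x \<in> J" using that ideal_subset sub_add_cancel by auto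
next
  assume "z \<in> acar A \<and> sub z x \<in> J"
  then show "z \<in> cos A J x" using that add_sub_cancel unfolding cos_def by force
qed

lemma mem_own_coset: "x \<in> acar A \<Longrightarrow> x \<in> cos A J x"
  using mem_coset_iff sub_self ideal_zero by simp

lemma coset_eq_iff: "x \<in> acar A \<Longrightarrow> y \<in> acar A \<Longrightarrow> cos A J x = cos A J y \<longleftrightarrow> sub x y \<in> J"
proof
  assume "x \<in> acar A" "y \<in> acar A" "cos A J x = cos A J y"
  then show "sub x y \<in> J" using mem_own_coset mem_coset_iff by blast
next
  assume a: "x \<in> acar A" "y \<in> acar A" "sub x y \<in> J"
  then have b: "sub y x \<in> J" using neg_sub ideal_sm by metis
  show "cos A J x = cos A J y"
  proof (rule set_eqI)
    fix z show "z \<in> cos A J x \<longleftrightarrow> z \<in> cos A J y"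
    proof
      assume "z \<in> cos A J x"
      then have "z \<in> acar A" "sub z x \<in> J" using a mem_coset_iff by auto
      then show "z \<in> cos A J y" using a ideal_add sub_eq_add_sub[of x y z] mem_coset_iff by metis
    next
      assume "z \<in> cos A J y"
      then have "z \<in> acar A" "sub z y \<in> J" using a mem_coset_iff by auto
      then show "z \<in> cos A J x" using a b ideal_add sub_eq_add_sub[of y x z] mem_coset_iff by metis
    qed
  qed
qed

lemma rep_mem_coset: "x \<in> acar A \<Longrightarrow> rep (cos A J x) \<in> cos A J x"
  unfolding rep_def by (rule someI, rule mem_own_coset)

lemma rep_coset_closed: "x \<in> acar A \<Longrightarrow> rep (cos A J x) \<in> acar A"
  using rep_mem_coset mem_coset_iff by blast

lemma rep_coset_sub: "x \<in> acar A \<Longrightarrow> sub (rep (cos A J x)) x \<in> J"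
  using rep_mem_coset mem_coset_iff by blast

lemma coset_rep: "x \<in> acar A \<Longrightarrow> cos A J (rep (cos A J x)) = cos A J x"
  using coset_eq_iff rep_coset_closed rep_coset_sub by blast

lemma quot_add: "x \<in> acar A \<Longrightarrow> y \<in> acar A \<Longrightarrow>
   aadd (quot A J) (cos A J x) (cos A J y) = cos A J (aadd A x y)"
  unfolding quot_def apply simp
  apply (subst coset_eq_iff)
  by (auto simp: rep_coset_closed add_closed sub_add_add rep_coset_sub ideal_add)

lemma quot_mul: "x \<in> acar A \<Longrightarrow> y \<in> acar A \<Longrightarrow>
   amul (quot A J) (cos A J x) (cos A J y) = cos A J (amul A x y)"
  unfolding quot_def apply simp
  apply (subst coset_eq_iff)
  by (auto simp: rep_coset_closed mul_closed sub_mul_mul rep_coset_sub ideal_add ideal_mul_left ideal_mul_right)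

lemma quot_sm: "x \<in> acar A \<Longrightarrow> asmul (quot A J) c (cos A J x) = cos A J (asmul A c x)"
  unfolding quot_def apply simp
  apply (subst coset_eq_iff)
  by (auto simp: rep_coset_closed sm_closed sub_sm_sm rep_coset_sub ideal_sm)

lemma quot_zero: "azero (quot A J) = cos A J (azero A)" by (simp add: quot_def)
lemma quot_one: "aone (quot A J) = cos A J (aone A)" by (simp add: quot_def)
lemma quot_carrier: "acar (quot A J) = cos A J ` acar A" by (simp add: quot_def)

lemma quot_kalg: "kalg (quot A J)"
proof -
  note qs = quot_add quot_mul quot_sm quot_zero quot_one quot_carrier
  show ?thesis
  proof (unfold_locales, goal_cases)
    case 1 then show ?case by (auto simp: qs add_closed)
  next case 2 then show ?case by (auto simp: qs mul_closed)
  next case 3 then show ?case by (auto simp: qs sm_closed)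
  next case 4 then show ?case by (auto simp: qs zero_closed)
  next case 5 then show ?case by (auto simp: qs one_closed)
  next case 6 then show ?case by (auto simp: qs add_closed add_assoc)
  next case 7 then show ?case by (auto simp: qs add_comm)
  next case 8 then show ?case by (auto simp: qs add_zero zero_closed)
  next case 9 then show ?case by (auto simp: qs add_neg sm_closed)
  next case 10 then show ?case by (auto simp: qs mul_closed mul_assoc)
  next case 11 then show ?case by (auto simp: qs one_mul one_closed)
  next case 12 then show ?case by (auto simp: qs mul_one one_closed)
  next case 13 then show ?case by (auto simp: qs distl add_closed mul_closed)
  next case 14 then show ?case by (auto simp: qs distr add_closed mul_closed)
  next case 15 then show ?case by (auto simp: qs sm_add add_closed sm_closed)
  next case 16 then show ?case by (auto simp: qs add_sm sm_closed)
  next case 17 then show ?case by (auto simp: qs sm_sm sm_closed)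
  next case 18 then show ?case by (auto simp: qs sm_one)
  next case 19 then show ?case by (auto simp: qs sm_mul sm_closed mul_closed)
  next case 20 then show ?case by (auto simp: qs mul_sm sm_closed mul_closed)
  qed
qed

end

context kalg begin

lemma acar_subspace: "is_subspace A (acar A)"
  by (auto simp: is_subspace_def add_closed sm_closed zero_closed)

lemma acar_ideal: "is_ideal A (acar A)"
  by (auto simp: is_ideal_def acar_subspace mul_closed)

lemma span_inc: "S \<subseteq> span A S" by (auto simp: span_def)

lemma span_least: "is_subspace A T \<Longrightarrow> S \<subseteq> T \<Longrightarrow> span A S \<subseteq> T" by (auto simp: span_def)

lemma span_subspace: assumes "S \<subseteq> acar A" shows "is_subspace A (span A S)"
proof -
  have ne: "acar A \<in> {J. is_subspace A J \<and> S \<subseteq> J}" using assms acar_subspace by auto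
  have 1: "span A S \<subseteq> acar A" using ne unfolding span_def by blast
  have 2: "azero A \<in> span A S" unfolding span_def by (auto simp: is_subspace_def)
  have 3: "\<forall>x\<in>span A S. \<forall>y\<in>span A S. aadd A x y \<in> span A S" unfolding span_def by (auto simp: is_subspace_def)
  have 4: "\<forall>c. \<forall>x\<in>span A S. asmul A c x \<in> span A S" unfolding span_def by (auto simp: is_subspace_def)
  show ?thesis using 1 2 3 4 by (simp add: is_subspace_def)
qed

lemma ideal_gen_least: "is_ideal A T \<Longrightarrow> S \<subseteq> T \<Longrightarrow> ideal_gen A S \<subseteq> T" by (auto simp: ideal_gen_def)

lemma ideal_gen_ideal: assumes "S \<subseteq> acar A" shows "is_ideal A (ideal_gen A S)"
proof -
  have ne: "acar A \<in> {J. is_ideal A J \<and> S \<subseteq> J}" using assms acar_ideal by auto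
  have 1: "ideal_gen A S \<subseteq> acar A" using ne unfolding ideal_gen_def by blast
  have 2: "azero A \<in> ideal_gen A S" unfolding ideal_gen_def by (auto simp: is_ideal_def is_subspace_def)
  have 3: "\<forall>x\<in>ideal_gen A S. \<forall>y\<in>ideal_gen A S. aadd A x y \<in> ideal_gen A S"
    unfolding ideal_gen_def by (auto simp: is_ideal_def is_subspace_def)
  have 4: "\<forall>c. \<forall>x\<in>ideal_gen A S. asmul A c x \<in> ideal_gen A S"
    unfolding ideal_gen_def by (auto simp: is_ideal_def is_subspace_def)
  have 5: "\<forall>x\<in>ideal_gen A S. \<forall>r\<in>acar A. amul A r x \<in> ideal_gen A S \<and> amul A x r \<in> ideal_gen A S"
    unfolding ideal_gen_def by (auto simp: is_ideal_def)
  show ?thesis using 1 2 3 4 5 by (simp add: is_ideal_def is_subspace_def)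
qed

end

section \<open>Algebras with a basis closed under a partial product\<close>

lemma fsupp_iff: "x \<in> fsupp f \<longleftrightarrow> f x \<noteq> 0" by (simp add: fsupp_def)

lemma salg_simps:
  "acar (salg B pp U) = {f. finite (fsupp f) \<and> fsupp f \<subseteq> B}"
  "aadd (salg B pp U) = (\<lambda>f g x. f x + g x)"
  "asmul (salg B pp U) = (\<lambda>c f x. c * f x)"
  "azero (salg B pp U) = (\<lambda>x. 0)"
  "aone (salg B pp U) = (\<lambda>x. if x \<in> U then 1 else 0)"
  by (simp_all add: salg_def)

lemma salg_mul_eq:
  fixes f g :: "'b \<Rightarrow> 'k::field"
  assumes "finite S" "fsupp f \<subseteq> S" "finite T" "fsupp g \<subseteq> T"
  shows "amul (salg B pp U) f g w = (\<Sum>u\<in>S. \<Sum>v\<in>T. if pp u v = Some w then f u * g v else 0)"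
proof -
  have fs: "finite (fsupp f)" "finite (fsupp g)" using assms finite_subset by auto
  have "amul (salg B pp U) f g w = (\<Sum>u\<in>fsupp f. \<Sum>v\<in>fsupp g. if pp u v = Some w then f u * g v else 0)"
    by (simp add: salg_def)
  also have "\<dots> = (\<Sum>u\<in>fsupp f. \<Sum>v\<in>T. if pp u v = Some w then f u * g v else 0)"
    by (rule sum.cong[OF refl], rule sum.mono_neutral_left[OF assms(3,4)]) (auto simp: fsupp_iff intro!: sum.neutral)
  also have "\<dots> = (\<Sum>u\<in>S. \<Sum>v\<in>T. if pp u v = Some w then f u * g v else 0)"
    by (rule sum.mono_neutral_left[OF assms(1,2)]) (auto simp: fsupp_iff intro!: sum.neutral)
  finally show ?thesis .
qed

lemma salg_mul_supp:
  fixes f g :: "'b \<Rightarrow> 'k::field"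
  shows "fsupp (amul (salg B pp U) f g) \<subseteq> {w. \<exists>u\<in>fsupp f. \<exists>v\<in>fsupp g. pp u v = Some w}"
proof
  fix w assume w: "w \<in> fsupp (amul (salg B pp U) f g)"
  show "w \<in> {w. \<exists>u\<in>fsupp f. \<exists>v\<in>fsupp g. pp u v = Some w}"
  proof (rule ccontr)
    assume "w \<notin> {w. \<exists>u\<in>fsupp f. \<exists>v\<in>fsupp g. pp u v = Some w}"
    then have "amul (salg B pp U) f g w = 0"
      by (auto simp: salg_def intro!: sum.neutral)
    then show False using w by (simp add: fsupp_iff)
  qed
qed

lemma finite_partial_products:
  assumes "finite S" "finite T"
  shows "finite {w. \<exists>u\<in>S. \<exists>v\<in>T. pp u v = Some w}"
proof -
  have "{w. \<exists>u\<in>S. \<exists>v\<in>T. pp u v = Some w} \<subseteq> (\<lambda>(u,v). the (pp u v)) ` (S \<times> T)"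
    by (force simp: image_iff)
  then show ?thesis using assms finite_subset by blast
qed

lemma sum_opt_delta:
  fixes c :: "'k::field"
  assumes "finite X" "\<And>x. ob = Some x \<Longrightarrow> x \<in> X"
  shows "(\<Sum>x\<in>X. if ob = Some x \<and> Q x then c else 0) = (if (\<exists>x. ob = Some x \<and> Q x) then c else 0)"
proof (cases ob)
  case None then show ?thesis by simp
next
  case (Some x0)
  then have "(\<Sum>x\<in>X. if ob = Some x \<and> Q x then c else 0) = (\<Sum>x\<in>X. if x = x0 then (if Q x0 then c else 0) else 0)"
    by (intro sum.cong) auto
  also have "\<dots> = (if Q x0 then c else 0)" using assms Some by (simp add: sum.delta)
  finally show ?thesis using Some by auto
qed

lemma sum_rotate3: "(\<Sum>y\<in>Y. \<Sum>v\<in>V. \<Sum>z\<in>Z. G y v z) = (\<Sum>v\<in>V. \<Sum>z\<in>Z. \<Sum>y\<in>Y. G y v z)"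
proof -
  have "(\<Sum>y\<in>Y. \<Sum>v\<in>V. \<Sum>z\<in>Z. G y v z) = (\<Sum>v\<in>V. \<Sum>y\<in>Y. \<Sum>z\<in>Z. G y v z)"
    by (rule sum.swap)
  also have "\<dots> = (\<Sum>v\<in>V. \<Sum>z\<in>Z. \<Sum>y\<in>Y. G y v z)"
    by (rule sum.cong[OF refl], rule sum.swap)
  finally show ?thesis .
qed

lemma sum_rotate4: "(\<Sum>x\<in>X. \<Sum>z\<in>Z. \<Sum>u\<in>U. \<Sum>v\<in>V. F x z u v) = (\<Sum>u\<in>U. \<Sum>v\<in>V. \<Sum>z\<in>Z. \<Sum>x\<in>X. F x z u v)"
proof -
  have "(\<Sum>x\<in>X. \<Sum>z\<in>Z. \<Sum>u\<in>U. \<Sum>v\<in>V. F x z u v) = (\<Sum>x\<in>X. \<Sum>u\<in>U. \<Sum>v\<in>V. \<Sum>z\<in>Z. F x z u v)"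
    by (rule sum.cong[OF refl], rule sum_rotate3)
  also have "\<dots> = (\<Sum>u\<in>U. \<Sum>v\<in>V. \<Sum>x\<in>X. \<Sum>z\<in>Z. F x z u v)"
    by (rule sum_rotate3)
  also have "\<dots> = (\<Sum>u\<in>U. \<Sum>v\<in>V. \<Sum>z\<in>Z. \<Sum>x\<in>X. F x z u v)"
    by (rule sum.cong[OF refl], rule sum.cong[OF refl], rule sum.swap)
  finally show ?thesis .
qed

lemma salg_assoc_l:
  fixes f g h :: "'b \<Rightarrow> 'k::field"
  assumes "finite (fsupp f)" "finite (fsupp g)" "finite (fsupp h)"
  shows "amul (salg B pp U) (amul (salg B pp U) f g) h w =
    (\<Sum>u\<in>fsupp f. \<Sum>v\<in>fsupp g. \<Sum>z\<in>fsupp h.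
        if Option.bind (pp u v) (\<lambda>x. pp x z) = Some w then f u * g v * h z else 0)"
proof -
  let ?M = "amul (salg B pp U)"
  define X where "X = {w. \<exists>u\<in>fsupp f. \<exists>v\<in>fsupp g. pp u v = Some w}"
  have fX: "finite X" unfolding X_def by (rule finite_partial_products[OF assms(1,2)])
  have sX: "fsupp (?M f g) \<subseteq> X" unfolding X_def by (rule salg_mul_supp)
  have "?M (?M f g) h w = (\<Sum>x\<in>X. \<Sum>z\<in>fsupp h. if pp x z = Some w then ?M f g x * h z else 0)"
    by (rule salg_mul_eq[OF fX sX assms(3) subset_refl])
  also have "\<dots> = (\<Sum>x\<in>X. \<Sum>z\<in>fsupp h. \<Sum>u\<in>fsupp f. \<Sum>v\<in>fsupp g.
       if pp u v = Some x \<and> pp x z = Some w then f u * g v * h z else 0)"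
    apply (intro sum.cong refl)
    subgoal for x z
      apply (subst salg_mul_eq[OF assms(1) subset_refl assms(2) subset_refl])
      apply (cases "pp x z = Some w")
       apply (simp add: sum_distrib_right)
       apply (intro sum.cong refl, simp)
      by simp
    done
  also have "\<dots> = (\<Sum>u\<in>fsupp f. \<Sum>v\<in>fsupp g. \<Sum>z\<in>fsupp h. \<Sum>x\<in>X.
       if pp u v = Some x \<and> pp x z = Some w then f u * g v * h z else 0)"
    by (rule sum_rotate4)
  also have "\<dots> = (\<Sum>u\<in>fsupp f. \<Sum>v\<in>fsupp g. \<Sum>z\<in>fsupp h.
        if Option.bind (pp u v) (\<lambda>x. pp x z) = Some w then f u * g v * h z else 0)"
  proof (intro sum.cong refl)
    fix u v z assume uv: "u \<in> fsupp f" "v \<in> fsupp g" "z \<in> fsupp h"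
    have "(\<Sum>x\<in>X. if pp u v = Some x \<and> pp x z = Some w then f u * g v * h z else 0)
       = (if (\<exists>x. pp u v = Some x \<and> pp x z = Some w) then f u * g v * h z else 0)"
      by (rule sum_opt_delta[OF fX]) (use uv in \<open>auto simp: X_def\<close>)
    also have "\<dots> = (if Option.bind (pp u v) (\<lambda>x. pp x z) = Some w then f u * g v * h z else 0)"
      by (cases "pp u v") auto
    finally show "(\<Sum>x\<in>X. if pp u v = Some x \<and> pp x z = Some w then f u * g v * h z else 0)
       = (if Option.bind (pp u v) (\<lambda>x. pp x z) = Some w then f u * g v * h z else 0)" .
  qed
  finally show ?thesis .
qed

lemma salg_assoc_r:
  fixes f g h :: "'b \<Rightarrow> 'k::field"
  assumes "finite (fsupp f)" "finite (fsupp g)" "finite (fsupp h)"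
  shows "amul (salg B pp U) f (amul (salg B pp U) g h) w =
    (\<Sum>u\<in>fsupp f. \<Sum>v\<in>fsupp g. \<Sum>z\<in>fsupp h.
        if Option.bind (pp v z) (\<lambda>y. pp u y) = Some w then f u * g v * h z else 0)"
proof -
  let ?M = "amul (salg B pp U)"
  define Y where "Y = {w. \<exists>u\<in>fsupp g. \<exists>v\<in>fsupp h. pp u v = Some w}"
  have fY: "finite Y" unfolding Y_def by (rule finite_partial_products[OF assms(2,3)])
  have sY: "fsupp (?M g h) \<subseteq> Y" unfolding Y_def by (rule salg_mul_supp)
  have "?M f (?M g h) w = (\<Sum>u\<in>fsupp f. \<Sum>y\<in>Y. if pp u y = Some w then f u * ?M g h y else 0)"
    by (rule salg_mul_eq[OF assms(1) subset_refl fY sY])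
  also have "\<dots> = (\<Sum>u\<in>fsupp f. \<Sum>y\<in>Y. \<Sum>v\<in>fsupp g. \<Sum>z\<in>fsupp h.
       if pp v z = Some y \<and> pp u y = Some w then f u * g v * h z else 0)"
    apply (intro sum.cong refl)
    subgoal for u y
      apply (subst salg_mul_eq[OF assms(2) subset_refl assms(3) subset_refl])
      apply (cases "pp u y = Some w")
       apply (simp add: sum_distrib_left mult.assoc)
       apply (intro sum.cong refl, simp)
      by simp
    done
  also have "\<dots> = (\<Sum>u\<in>fsupp f. \<Sum>v\<in>fsupp g. \<Sum>z\<in>fsupp h. \<Sum>y\<in>Y.
       if pp v z = Some y \<and> pp u y = Some w then f u * g v * h z else 0)"
    by (rule sum.cong[OF refl], rule sum_rotate3)
  also have "\<dots> = (\<Sum>u\<in>fsupp f. \<Sum>v\<in>fsupp g. \<Sum>z\<in>fsupp h.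
        if Option.bind (pp v z) (\<lambda>y. pp u y) = Some w then f u * g v * h z else 0)"
  proof (intro sum.cong refl)
    fix u v z assume uv: "u \<in> fsupp f" "v \<in> fsupp g" "z \<in> fsupp h"
    have "(\<Sum>y\<in>Y. if pp v z = Some y \<and> pp u y = Some w then f u * g v * h z else 0)
       = (if (\<exists>y. pp v z = Some y \<and> pp u y = Some w) then f u * g v * h z else 0)"
      by (rule sum_opt_delta[OF fY]) (use uv in \<open>auto simp: Y_def\<close>)
    also have "\<dots> = (if Option.bind (pp v z) (\<lambda>y. pp u y) = Some w then f u * g v * h z else 0)"
      by (cases "pp v z") auto
    finally show "(\<Sum>y\<in>Y. if pp v z = Some y \<and> pp u y = Some w then f u * g v * h z else 0)
       = (if Option.bind (pp v z) (\<lambda>y. pp u y) = Some w then f u * g v * h z else 0)" .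
  qed
  finally show ?thesis .
qed

lemma fsupp_add: "fsupp (\<lambda>x. f x + g x) \<subseteq> fsupp f \<union> fsupp (g :: _ \<Rightarrow> 'k::field)" by (auto simp: fsupp_iff)
lemma fsupp_sm: "fsupp (\<lambda>x. c * f x) \<subseteq> fsupp (f :: _ \<Rightarrow> 'k::field)" by (auto simp: fsupp_iff)
lemma fsupp_zero[simp]: "fsupp (\<lambda>x. 0 :: 'k::field) = {}" by (auto simp: fsupp_iff)
lemma fsupp_ind[simp]: "fsupp (\<lambda>x. if x \<in> U then (1::'k::field) else 0) = U" by (auto simp: fsupp_iff split: if_splits)
lemma sum_unique_defined:
  fixes c :: "'k::field"
  assumes "finite U" "t0 \<in> U" "\<forall>t'\<in>U. t' \<noteq> t0 \<longrightarrow> ob t' = None"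
  shows "(\<Sum>t\<in>U. if ob t = Some w then c else 0) = (if ob t0 = Some w then c else 0)"
proof -
  have "(\<Sum>t\<in>U. if ob t = Some w then c else 0) = (\<Sum>t\<in>U. if t = t0 then (if ob t0 = Some w then c else 0) else 0)"
    using assms by (intro sum.cong) auto
  also have "\<dots> = (if ob t0 = Some w then c else 0)" using assms by (simp add: sum.delta)
  finally show ?thesis .
qed

lemma if_add_zero: "(if P then a + b else 0) = (if P then a else 0) + (if P then b else (0::'a::monoid_add))"
  by simp

locale partial_product =
  fixes B :: "'b set" and pp :: "'b \<Rightarrow> 'b \<Rightarrow> 'b option" and U :: "'b set"
  assumes closed: "\<And>u v w. u \<in> B \<Longrightarrow> v \<in> B \<Longrightarrow> pp u v = Some w \<Longrightarrow> w \<in> B"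
    and assoc: "\<And>u v z. u \<in> B \<Longrightarrow> v \<in> B \<Longrightarrow> z \<in> B \<Longrightarrow>
        Option.bind (pp u v) (\<lambda>x. pp x z) = Option.bind (pp v z) (\<lambda>y. pp u y)"
    and fU: "finite U" and UB: "U \<subseteq> B"
    and lunit: "\<And>v. v \<in> B \<Longrightarrow> \<exists>t\<in>U. pp t v = Some v \<and> (\<forall>t'\<in>U. t' \<noteq> t \<longrightarrow> pp t' v = None)"
    and runit: "\<And>v. v \<in> B \<Longrightarrow> \<exists>t\<in>U. pp v t = Some v \<and> (\<forall>t'\<in>U. t' \<noteq> t \<longrightarrow> pp v t' = None)"
begin

lemma salg_mul_closed:
  fixes f g :: "'b \<Rightarrow> 'k::field"
  assumes f: "f \<in> acar (salg B pp U)" and g: "g \<in> acar (salg B pp U)"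
  shows "amul (salg B pp U) f g \<in> acar (salg B pp U)"
proof -
  let ?W = "{w. \<exists>u\<in>fsupp f. \<exists>v\<in>fsupp g. pp u v = Some w}"
  have fin: "finite (fsupp f)" "finite (fsupp g)" "fsupp f \<subseteq> B" "fsupp g \<subseteq> B"
    using f g by (auto simp: salg_simps)
  have "finite ?W" by (rule finite_partial_products) (use fin in auto)
  moreover have "?W \<subseteq> B" using fin closed by blast
  ultimately show ?thesis using salg_mul_supp[of B pp U f g] by (auto simp: salg_simps intro: finite_subset)
qed

lemma salg_mul_assoc:
  fixes f g h :: "'b \<Rightarrow> 'k::field"
  assumes f: "f \<in> acar (salg B pp U)" and g: "g \<in> acar (salg B pp U)" and h: "h \<in> acar (salg B pp U)"
  shows "amul (salg B pp U) (amul (salg B pp U) f g) h = amul (salg B pp U) f (amul (salg B pp U) g h)"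
proof
  fix w
  have fin: "finite (fsupp f)" "finite (fsupp g)" "finite (fsupp h)"
    "fsupp f \<subseteq> B" "fsupp g \<subseteq> B" "fsupp h \<subseteq> B" using f g h by (auto simp: salg_simps)
  show "amul (salg B pp U) (amul (salg B pp U) f g) h w = amul (salg B pp U) f (amul (salg B pp U) g h) w"
    unfolding salg_assoc_l[OF fin(1-3)] salg_assoc_r[OF fin(1-3)]
    using fin(4-6) assoc by (intro sum.cong refl) (simp add: subset_iff)
qed

lemma salg_one_mul:
  fixes f :: "'b \<Rightarrow> 'k::field"
  assumes f: "f \<in> acar (salg B pp U)"
  shows "amul (salg B pp U) (aone (salg B pp U)) f = f"
proof
  fix w
  have fin: "finite (fsupp f)" "fsupp f \<subseteq> B" using f by (auto simp: salg_simps)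
  have "amul (salg B pp U) (aone (salg B pp U)) f w = (\<Sum>t\<in>U. \<Sum>v\<in>fsupp f. if pp t v = Some w then 1 * f v else 0)"
    by (subst salg_mul_eq[OF fU _ fin(1) subset_refl]) (auto simp: salg_simps intro!: sum.cong)
  also have "\<dots> = (\<Sum>v\<in>fsupp f. \<Sum>t\<in>U. if pp t v = Some w then f v else 0)"
    by (subst sum.swap) (simp add: cong: if_cong)
  also have "\<dots> = (\<Sum>v\<in>fsupp f. if v = w then f v else 0)"
  proof (rule sum.cong[OF refl])
    fix v assume "v \<in> fsupp f"
    then obtain t0 where t0: "t0 \<in> U" "pp t0 v = Some v" "\<forall>t'\<in>U. t' \<noteq> t0 \<longrightarrow> pp t' v = None"
      using lunit fin(2) by blast
    show "(\<Sum>t\<in>U. if pp t v = Some w then f v else 0) = (if v = w then f v else 0)"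
      using sum_unique_defined[OF fU t0(1) t0(3), where w=w and c="f v"] t0(2) by simp
  qed
  also have "\<dots> = f w" using fin(1) by (simp add: sum.delta fsupp_iff)
  finally show "amul (salg B pp U) (aone (salg B pp U)) f w = f w" .
qed

lemma salg_mul_one:
  fixes f :: "'b \<Rightarrow> 'k::field"
  assumes f: "f \<in> acar (salg B pp U)"
  shows "amul (salg B pp U) f (aone (salg B pp U)) = f"
proof
  fix w
  have fin: "finite (fsupp f)" "fsupp f \<subseteq> B" using f by (auto simp: salg_simps)
  have "amul (salg B pp U) f (aone (salg B pp U)) w = (\<Sum>v\<in>fsupp f. \<Sum>t\<in>U. if pp v t = Some w then f v * 1 else 0)"
    by (subst salg_mul_eq[OF fin(1) subset_refl fU]) (auto simp: salg_simps intro!: sum.cong)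
  also have "\<dots> = (\<Sum>v\<in>fsupp f. if v = w then f v else 0)"
  proof (rule sum.cong[OF refl])
    fix v assume "v \<in> fsupp f"
    then obtain t0 where t0: "t0 \<in> U" "pp v t0 = Some v" "\<forall>t'\<in>U. t' \<noteq> t0 \<longrightarrow> pp v t' = None"
      using runit fin(2) by blast
    show "(\<Sum>t\<in>U. if pp v t = Some w then f v * 1 else 0) = (if v = w then f v else 0)"
      using sum_unique_defined[OF fU t0(1) t0(3), where w=w and c="f v * 1"] t0(2) by simp
  qed
  also have "\<dots> = f w" using fin(1) by (simp add: sum.delta fsupp_iff)
  finally show "amul (salg B pp U) f (aone (salg B pp U)) w = f w" .
qed

end

lemma salg_distl:
  fixes f g h :: "'b \<Rightarrow> 'k::field"
  assumes "finite (fsupp f)" "finite (fsupp g)" "finite (fsupp h)"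
  shows "amul (salg B pp U) f (\<lambda>x. g x + h x) = (\<lambda>x. amul (salg B pp U) f g x + amul (salg B pp U) f h x)"
proof
  fix w
  let ?T = "fsupp g \<union> fsupp h"
  have fT: "finite ?T" using assms by simp
  have "amul (salg B pp U) f (\<lambda>x. g x + h x) w =
      (\<Sum>u\<in>fsupp f. \<Sum>v\<in>?T. if pp u v = Some w then f u * (g v + h v) else 0)"
    by (rule salg_mul_eq[OF assms(1) subset_refl fT]) (use fsupp_add[of g h] in auto)
  also have "\<dots> = (\<Sum>u\<in>fsupp f. \<Sum>v\<in>?T. if pp u v = Some w then f u * g v else 0)
      + (\<Sum>u\<in>fsupp f. \<Sum>v\<in>?T. if pp u v = Some w then f u * h v else 0)"
    by (simp add: sum.distrib[symmetric] distrib_left if_add_zero cong: if_cong)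
  finally show "amul (salg B pp U) f (\<lambda>x. g x + h x) w = amul (salg B pp U) f g w + amul (salg B pp U) f h w"
    by (simp add: salg_mul_eq[OF assms(1) subset_refl fT])
qed

lemma salg_distr:
  fixes f g h :: "'b \<Rightarrow> 'k::field"
  assumes "finite (fsupp f)" "finite (fsupp g)" "finite (fsupp h)"
  shows "amul (salg B pp U) (\<lambda>x. f x + g x) h = (\<lambda>x. amul (salg B pp U) f h x + amul (salg B pp U) g h x)"
proof
  fix w
  let ?T = "fsupp f \<union> fsupp g"
  have fT: "finite ?T" using assms by simp
  have "amul (salg B pp U) (\<lambda>x. f x + g x) h w =
      (\<Sum>u\<in>?T. \<Sum>v\<in>fsupp h. if pp u v = Some w then (f u + g u) * h v else 0)"
    by (rule salg_mul_eq[OF fT _ assms(3) subset_refl]) (use fsupp_add[of f g] in auto)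
  also have "\<dots> = (\<Sum>u\<in>?T. \<Sum>v\<in>fsupp h. if pp u v = Some w then f u * h v else 0)
      + (\<Sum>u\<in>?T. \<Sum>v\<in>fsupp h. if pp u v = Some w then g u * h v else 0)"
    by (simp add: sum.distrib[symmetric] distrib_right if_add_zero cong: if_cong)
  finally show "amul (salg B pp U) (\<lambda>x. f x + g x) h w = amul (salg B pp U) f h w + amul (salg B pp U) g h w"
    by (simp add: salg_mul_eq[OF fT _ assms(3) subset_refl])
qed

lemma salg_sm_mul:
  fixes f g :: "'b \<Rightarrow> 'k::field"
  assumes "finite (fsupp f)" "finite (fsupp g)"
  shows "amul (salg B pp U) (\<lambda>x. c * f x) g = (\<lambda>x. c * amul (salg B pp U) f g x)"
proof
  fix w
  have "amul (salg B pp U) (\<lambda>x. c * f x) g w =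
      (\<Sum>u\<in>fsupp f. \<Sum>v\<in>fsupp g. if pp u v = Some w then (c * f u) * g v else 0)"
    by (rule salg_mul_eq[OF assms(1) _ assms(2) subset_refl]) (use fsupp_sm[of c f] in auto)
  then show "amul (salg B pp U) (\<lambda>x. c * f x) g w = c * amul (salg B pp U) f g w"
    by (simp add: salg_mul_eq[OF assms(1) subset_refl assms(2) subset_refl] sum_distrib_left if_distrib
        mult.assoc cong: if_cong)
qed

lemma salg_mul_sm:
  fixes f g :: "'b \<Rightarrow> 'k::field"
  assumes "finite (fsupp f)" "finite (fsupp g)"
  shows "amul (salg B pp U) f (\<lambda>x. c * g x) = (\<lambda>x. c * amul (salg B pp U) f g x)"
proof
  fix w
  have "amul (salg B pp U) f (\<lambda>x. c * g x) w =
      (\<Sum>u\<in>fsupp f. \<Sum>v\<in>fsupp g. if pp u v = Some w then f u * (c * g v) else 0)"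
    by (rule salg_mul_eq[OF assms(1) subset_refl assms(2)]) (use fsupp_sm[of c g] in auto)
  then show "amul (salg B pp U) f (\<lambda>x. c * g x) w = c * amul (salg B pp U) f g w"
    by (simp add: salg_mul_eq[OF assms(1) subset_refl assms(2) subset_refl] sum_distrib_left if_distrib
        mult.left_commute cong: if_cong)
qed

theorem (in partial_product) salg_kalg: "kalg (salg B pp U :: ('k::field, 'b \<Rightarrow> 'k) alg)"
proof (unfold_locales, goal_cases)
  case (1 x y) then show ?case using fsupp_add[of x y] by (auto simp: salg_simps intro: finite_subset)
next case 2 then show ?case by (rule salg_mul_closed)
next case (3 x c) then show ?case using fsupp_sm[of c x] by (auto simp: salg_simps intro: finite_subset)
next case 10 then show ?case by (rule salg_mul_assoc)
next case 11 then show ?case by (rule salg_one_mul)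
next case 12 then show ?case by (rule salg_mul_one)
next case 13 then show ?case by (simp add: salg_simps salg_distl)
next case 14 then show ?case by (simp add: salg_simps salg_distr)
next case 19 then show ?case by (simp add: salg_simps salg_sm_mul)
next case 20 then show ?case by (simp add: salg_simps salg_mul_sm)
qed (use fU UB in \<open>simp_all add: salg_simps algebra_simps\<close>)

lemma salg_induct [consumes 2, case_names zero add]:
  fixes f :: "'b \<Rightarrow> 'k::field"
  assumes f: "f \<in> acar (salg B pp U)" and fS: "fsupp f \<subseteq> S"
    and zero: "P (\<lambda>_. 0)"
    and add: "\<And>f w c. f \<in> acar (salg B pp U) \<Longrightarrow> fsupp f \<subseteq> S \<Longrightarrow> P f \<Longrightarrow> w \<in> B \<Longrightarrow> w \<in> S \<Longrightarrow>
        P (\<lambda>y. f y + c * delta w y)"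
  shows "P f"
proof -
  have "\<forall>f. fsupp f \<subseteq> T \<longrightarrow> fsupp f \<subseteq> S \<longrightarrow> f \<in> acar (salg B pp U) \<longrightarrow> P f" if "finite T" for T :: "'b set"
    using that
  proof (induction T rule: finite_induct)
    case empty
    have "f = (\<lambda>_. 0)" if "fsupp f \<subseteq> {}" for f :: "'b \<Rightarrow> 'k" using that by (intro ext) (auto simp: fsupp_iff)
    then show ?case using zero by auto
  next
    case (insert w T)
    show ?case
    proof (intro allI impI)
      fix f :: "'b \<Rightarrow> 'k" assume s: "fsupp f \<subseteq> insert w T" and fS: "fsupp f \<subseteq> S"
        and fc: "f \<in> acar (salg B pp U)"
      define f' where "f' = (\<lambda>y. if y = w then 0 else f y)"
      have sub: "fsupp f' \<subseteq> fsupp f" by (auto simp: fsupp_iff f'_def split: if_splits)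
      have s': "fsupp f' \<subseteq> T" using s by (auto simp: fsupp_iff f'_def split: if_splits)
      have fc': "f' \<in> acar (salg B pp U)" using fc sub by (auto simp: salg_simps intro: finite_subset)
      have fS': "fsupp f' \<subseteq> S" using sub fS by blast
      have Pf': "P f'" using insert.IH s' fS' fc' by blast
      show "P f"
      proof (cases "f w = 0")
        case True
        then have "f = f'" by (auto simp: f'_def)
        then show ?thesis using Pf' by simp
      next
        case False
        then have "w \<in> fsupp f" by (simp add: fsupp_iff)
        then have w: "w \<in> B" "w \<in> S" using fc fS by (auto simp: salg_simps)
        have "f = (\<lambda>y. f' y + f w * delta w y)" by (auto simp: f'_def delta_def)
        then show ?thesis using add[OF fc' fS' Pf' w, of "f w"] by simp
      qed
    qed
  qed
  then show ?thesis using f fS by (auto simp: salg_simps)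
qed

lemma fsupp_delta[simp]: "fsupp (delta w :: _ \<Rightarrow> 'k::field) = {w}"
  by (auto simp: fsupp_iff delta_def split: if_splits)

lemma salg_delta_closed: "w \<in> B \<Longrightarrow> (delta w :: _ \<Rightarrow> 'k::field) \<in> acar (salg B pp U)"
  by (simp add: salg_simps)

lemma salg_delta_mul:
  "amul (salg B pp U) (delta x) (delta w :: _ \<Rightarrow> 'k::field) =
     (case pp x w of None \<Rightarrow> (\<lambda>_. 0) | Some y \<Rightarrow> delta y)"
proof (rule ext)
  fix y
  have "amul (salg B pp U) (delta x) (delta w :: _ \<Rightarrow> 'k::field) y =
     (\<Sum>u\<in>{x}. \<Sum>v\<in>{w}. if pp u v = Some y then delta x u * delta w v else 0)"
    unfolding salg_def by (simp only: alg.simps fsupp_delta)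
  also have "\<dots> = (if pp x w = Some y then 1 else 0)" by (simp add: delta_def)
  finally show "amul (salg B pp U) (delta x) (delta w :: _ \<Rightarrow> 'k::field) y =
     (case pp x w of None \<Rightarrow> (\<lambda>_. 0) | Some y \<Rightarrow> delta y) y"
    by (auto simp: delta_def split: option.splits)
qed

section \<open>Paths\<close>

lemma pend_cat: "pend Q p = fst q \<Longrightarrow> pend Q (fst p, snd p @ snd q) = pend Q q"
  by (auto simp: pend_def)

lemma is_path_cat:
  assumes p: "is_path Q p" and q: "is_path Q q" and e: "pend Q p = fst q"
  shows "is_path Q (fst p, snd p @ snd q)"
proof -
  have P: "fst p \<in> qV Q" "set (snd p) \<subseteq> qE Q" "snd p \<noteq> [] \<longrightarrow> qs Q (hd (snd p)) = fst p"
    "\<And>r. Suc r < length (snd p) \<Longrightarrow> qs Q (snd p ! Suc r) = qt Q (snd p ! r)"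
    using p by (auto simp: is_path_def)
  have Qq: "fst q \<in> qV Q" "set (snd q) \<subseteq> qE Q" "snd q \<noteq> [] \<longrightarrow> qs Q (hd (snd q)) = fst q"
    "\<And>r. Suc r < length (snd q) \<Longrightarrow> qs Q (snd q ! Suc r) = qt Q (snd q ! r)"
    using q by (auto simp: is_path_def)
  have hd: "snd p @ snd q \<noteq> [] \<longrightarrow> qs Q (hd (snd p @ snd q)) = fst p"
    using P(3) Qq(3) e by (cases "snd p") (auto simp: pend_def)
  have cons: "qs Q ((snd p @ snd q) ! Suc r) = qt Q ((snd p @ snd q) ! r)"
    if r: "Suc r < length (snd p @ snd q)" for r
  proof (cases "Suc r < length (snd p)")
    case True then show ?thesis using P(4)[OF True] by (simp add: nth_append)
  next
    case False
    show ?thesis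
    proof (cases "Suc r = length (snd p)")
      case True
      then have "snd q \<noteq> []" using r by auto
      moreover have "snd p \<noteq> []" using True by auto
      moreover have "last (snd p) = snd p ! r" using True by (metis diff_Suc_1 last_conv_nth list.size(3) nat.distinct(1))
      ultimately show ?thesis using True Qq(3) e
        by (simp add: nth_append pend_def hd_conv_nth)
    next
      case False2: False
      then have "r \<ge> length (snd p)" using False by auto
      then show ?thesis using Qq(4)[of "r - length (snd p)"] r
        by (simp add: nth_append Suc_diff_le)
    qed
  qed
  show ?thesis unfolding is_path_def using P(1,2) Qq(2) hd cons by auto
qed

lemma pcat_assoc:
  "Option.bind (pcat Q p q) (\<lambda>x. pcat Q x r) = Option.bind (pcat Q q r) (\<lambda>y. pcat Q p y)"
  by (auto simp: pcat_def pend_cat)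

lemma pend_in_vertices:
  assumes "finite_quiver Q" "is_path Q p" shows "pend Q p \<in> qV Q"
proof (cases "snd p = []")
  case True then show ?thesis using assms by (auto simp: is_path_def pend_def)
next
  case False
  then have "last (snd p) \<in> qE Q" using assms by (auto simp: is_path_def)
  then show ?thesis using assms False by (auto simp: finite_quiver_def pend_def)
qed

lemma vtx_in_vertices:
  assumes "finite_quiver Q" "is_path Q p" "r \<le> length (snd p)" shows "vtx Q p r \<in> qV Q"
proof (cases r)
  case 0 then show ?thesis using assms by (simp add: vtx_def is_path_def)
next
  case (Suc k)
  then have "snd p ! k \<in> qE Q" using assms by (auto simp: is_path_def)
  then show ?thesis using assms Suc by (auto simp: vtx_def finite_quiver_def)
qed

lemma vtx_length: "vtx Q p (length (snd p)) = pend Q p"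
  by (cases "snd p" rule: rev_cases) (auto simp: vtx_def pend_def nth_append)

lemma vtx_cat:
  assumes "pend Q p = fst q"
  shows "vtx Q (fst p, snd p @ snd q) r =
     (if r \<le> length (snd p) then vtx Q p r else vtx Q q (r - length (snd p)))"
proof (cases "r \<le> length (snd p)")
  case True
  then show ?thesis
  proof (cases r)
    case 0 then show ?thesis by (simp add: vtx_def)
  next
    case (Suc k) then show ?thesis using True by (simp add: vtx_def nth_append)
  qed
next
  case False
  then show ?thesis by (auto simp: vtx_def nth_append)
qed

theorem path_alg_kalg:
  assumes "finite_quiver Q"
  shows "kalg (path_alg Q :: ('k::field, 'v \<times> 'e list \<Rightarrow> 'k) alg)"
  unfolding path_alg_def
proof (rule partial_product.salg_kalg[OF partial_product.intro])
  show "\<And>u v w. u \<in> {p. is_path Q p} \<Longrightarrow> v \<in> {p. is_path Q p} \<Longrightarrow> pcat Q u v = Some w \<Longrightarrow> w \<in> {p. is_path Q p}"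
    by (auto simp: pcat_def split: if_splits intro: is_path_cat[of Q _ _, simplified])
  show "\<And>u v z. Option.bind (pcat Q u v) (\<lambda>x. pcat Q x z) = Option.bind (pcat Q v z) (pcat Q u)"
    using pcat_assoc by metis
  show "finite {(v, []) |v. v \<in> qV Q}" using assms by (simp add: finite_quiver_def)
  show "{(v, []) |v. v \<in> qV Q} \<subseteq> {p. is_path Q p}" by (auto simp: is_path_def)
  show "\<exists>t\<in>{(v, []) |v. v \<in> qV Q}. pcat Q t v = Some v \<and> (\<forall>t'\<in>{(v, []) |v. v \<in> qV Q}. t' \<noteq> t \<longrightarrow> pcat Q t' v = None)"
    if "v \<in> {p. is_path Q p}" for v
    using that by (rule_tac x="(fst v, [])" in bexI) (auto simp: pcat_def pend_def is_path_def)
  show "\<exists>t\<in>{(v, []) |v. v \<in> qV Q}. pcat Q v t = Some v \<and> (\<forall>t'\<in>{(v, []) |v. v \<in> qV Q}. t' \<noteq> t \<longrightarrow> pcat Q v t' = None)"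
    if "v \<in> {p. is_path Q p}" for v
    using that pend_in_vertices[OF assms, of v] by (rule_tac x="(pend Q v, [])" in bexI) (auto simp: pcat_def pend_def)
qed

section \<open>Words of \<open>\<A>\<close>-paths and the algebra \<open>k(\<Gamma>, \<A>)\<close>\<close>

lemma nth_butlast_merge_tl:
  assumes "as \<noteq> []" "bs \<noteq> []"
  shows "(butlast as @ m # tl bs) ! r =
    (if r < length as - 1 then as ! r else if r = length as - 1 then m else bs ! (r - (length as - 1)))"
proof -
  have "butlast as ! r = as ! r" if "r < length as - 1" using that by (simp add: nth_butlast)
  moreover have "tl bs ! k = bs ! Suc k" for k using assms(2) by (cases bs) auto
  moreover have "Suc (r - length as) = r - (length as - 1)" if "length as - 1 \<le> r" "r \<noteq> length as - 1"
    using that assms(1) by (cases as) auto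
  ultimately show ?thesis using assms
    by (auto simp: nth_append not_less)
qed

locale quiver_algebras =
  fixes \<Gamma> :: "('v, 'e) quiver" and A :: "'v \<Rightarrow> ('k::field, 'a) alg"
  assumes finite_Gamma: "finite_quiver \<Gamma>"
    and vertex_kalg: "\<And>l. l \<in> qV \<Gamma> \<Longrightarrow> kalg (A l)"
begin

lemma valid_wordD:
  assumes "valid_word \<Gamma> A w"
  shows "is_path \<Gamma> (fst w)" "length (snd w) = Suc (length (snd (fst w)))"
    "\<And>r. r \<le> length (snd (fst w)) \<Longrightarrow> snd w ! r \<in> acar (A (vtx \<Gamma> (fst w) r))"
  using assms by (auto simp: valid_word_def)

lemma wprod_valid:
  assumes u: "valid_word \<Gamma> A u" and v: "valid_word \<Gamma> A v" and w: "wprod \<Gamma> A u v = Some w"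
  shows "valid_word \<Gamma> A w"
proof -
  obtain p as where U: "u = (p, as)" by (cases u)
  obtain q bs where V: "v = (q, bs)" by (cases v)
  have e: "pend \<Gamma> p = fst q" and W: "w = ((fst p, snd p @ snd q),
      butlast as @ [amul (A (fst q)) (last as) (hd bs)] @ tl bs)"
    using w by (auto simp: wprod_def U V split: if_splits)
  note uw = valid_wordD[OF u[unfolded U]] and vv = valid_wordD[OF v[unfolded V]]
  have ne: "as \<noteq> []" "bs \<noteq> []" using uw(2) vv(2) by auto
  have path: "is_path \<Gamma> (fst p, snd p @ snd q)" by (rule is_path_cat[OF uw(1)[simplified] vv(1)[simplified] e])
  have la: "last as = as ! length (snd p)" using uw(2) ne by (simp add: last_conv_nth)
  have hb: "hd bs = bs ! 0" using ne by (simp add: hd_conv_nth)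
  have q_vertex: "fst q \<in> qV \<Gamma>" using vv(1) by (simp add: is_path_def)
  have m: "amul (A (fst q)) (last as) (hd bs) \<in> acar (A (fst q))"
  proof -
    have "last as \<in> acar (A (fst q))" using uw(3)[of "length (snd p)"] la vtx_length[of \<Gamma> p] e by simp
    moreover have "hd bs \<in> acar (A (fst q))" using vv(3)[of 0] hb by (simp add: vtx_def)
    ultimately show ?thesis using kalg.mul_closed[OF vertex_kalg[OF q_vertex]] by blast
  qed
  have ent: "(butlast as @ [amul (A (fst q)) (last as) (hd bs)] @ tl bs) ! r
      \<in> acar (A (vtx \<Gamma> (fst p, snd p @ snd q) r))" if r: "r \<le> length (snd p @ snd q)" for r
  proof -
    have la1: "length as - Suc 0 = length (snd p)" using uw(2) by simp
    show ?thesis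
    proof (cases "r < length (snd p)")
      case True then show ?thesis
        using uw(3)[of r] by (simp add: nth_butlast_merge_tl[OF ne] vtx_cat[OF e] la1)
    next
      case False
      show ?thesis
      proof (cases "r = length (snd p)")
        case True then show ?thesis
          using m vtx_length[of \<Gamma> p] e by (simp add: nth_butlast_merge_tl[OF ne] vtx_cat[OF e] la1)
      next
        case False2: False
        then show ?thesis
          using False vv(3)[of "r - length (snd p)"] r by (simp add: nth_butlast_merge_tl[OF ne] vtx_cat[OF e] la1)
      qed
    qed
  qed
  show ?thesis unfolding W valid_word_def using path ent uw(2) vv(2) ne by auto
qed

lemma wprod_assoc:
  assumes u: "valid_word \<Gamma> A u" and v: "valid_word \<Gamma> A v" and z: "valid_word \<Gamma> A z"
  shows "Option.bind (wprod \<Gamma> A u v) (\<lambda>x. wprod \<Gamma> A x z) = Option.bind (wprod \<Gamma> A v z) (\<lambda>y. wprod \<Gamma> A u y)"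
proof -
  obtain p as where U: "u = (p, as)" by (cases u)
  obtain q bs where V: "v = (q, bs)" by (cases v)
  obtain r cs where Z: "z = (r, cs)" by (cases z)
  note uw = valid_wordD[OF u[unfolded U]] and vv = valid_wordD[OF v[unfolded V]]
    and zz = valid_wordD[OF z[unfolded Z]]
  have ne: "as \<noteq> []" "bs \<noteq> []" "cs \<noteq> []" using uw(2) vv(2) zz(2) by auto
  show ?thesis
  proof (cases "pend \<Gamma> p = fst q \<and> pend \<Gamma> q = fst r")
    case False
    then show ?thesis by (auto simp: wprod_def U V Z pend_cat)
  next
    case True
    then have e1: "pend \<Gamma> p = fst q" and e2: "pend \<Gamma> q = fst r" by auto
    have q_vertex: "fst q \<in> qV \<Gamma>" using vv(1) by (simp add: is_path_def)
    interpret Aq: kalg "A (fst q)" using vertex_kalg[OF q_vertex] .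
    have la: "last as \<in> acar (A (fst q))"
      using uw(3)[of "length (snd p)"] uw(2) ne vtx_length[of \<Gamma> p] e1 by (simp add: last_conv_nth)
    have hb: "hd bs \<in> acar (A (fst q))" using vv(3)[of 0] ne by (simp add: hd_conv_nth vtx_def)
    have lb: "last bs \<in> acar (A (fst r))"
      using vv(3)[of "length (snd q)"] vv(2) ne vtx_length[of \<Gamma> q] e2 by (simp add: last_conv_nth)
    have hc: "hd cs \<in> acar (A (fst r))" using zz(3)[of 0] ne by (simp add: hd_conv_nth vtx_def)
    show ?thesis
    proof (cases "tl bs = []")
      case True
      then obtain b where b: "bs = [b]" using ne by (cases bs) auto
      then have "snd q = []" using vv(2) by simp
      then have qr: "fst r = fst q" using e2 by (simp add: pend_def)
      have bA: "b \<in> acar (A (fst q))" using hb b by simp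
      have hcq: "hd cs \<in> acar (A (fst q))" using hc qr by simp
      show ?thesis using e1 e2 b qr Aq.mul_assoc[OF la bA hcq]
        by (simp add: wprod_def U V Z pend_cat)
    next
      case False
      then obtain b b' bs' where b: "bs = b # b' # bs'" using ne by (cases bs; cases "tl bs") auto
      show ?thesis using e1 e2 b
        by (simp add: wprod_def U V Z pend_cat butlast_append)
    qed
  qed
qed

definition "unit_word l = ((l, []), [aone (A l)])"

lemma unit_word_valid: "l \<in> qV \<Gamma> \<Longrightarrow> valid_word \<Gamma> A (unit_word l)"
  using kalg.one_closed[OF vertex_kalg] by (simp add: unit_word_def valid_word_def is_path_def vtx_def)

lemma wprod_unit_l:
  assumes v: "valid_word \<Gamma> A v"
  shows "wprod \<Gamma> A (unit_word l) v = (if l = fst (fst v) then Some v else None)"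
proof -
  obtain q bs where V: "v = (q, bs)" by (cases v)
  note vv = valid_wordD[OF v[unfolded V]]
  have ne: "bs \<noteq> []" using vv(2) by auto
  have q_vertex: "fst q \<in> qV \<Gamma>" using vv(1) by (simp add: is_path_def)
  have hb: "hd bs \<in> acar (A (fst q))" using vv(3)[of 0] ne by (simp add: hd_conv_nth vtx_def)
  show ?thesis using kalg.one_mul[OF vertex_kalg[OF q_vertex] hb] ne
    by (auto simp: wprod_def unit_word_def V pend_def)
qed

lemma wprod_unit_r:
  assumes v: "valid_word \<Gamma> A v"
  shows "wprod \<Gamma> A v (unit_word l) = (if l = pend \<Gamma> (fst v) then Some v else None)"
proof -
  obtain q bs where V: "v = (q, bs)" by (cases v)
  note vv = valid_wordD[OF v[unfolded V]]
  have ne: "bs \<noteq> []" using vv(2) by auto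
  have end_vertex: "pend \<Gamma> q \<in> qV \<Gamma>" using pend_in_vertices[OF finite_Gamma vv(1)] by simp
  have lb: "last bs \<in> acar (A (pend \<Gamma> q))"
    using vv(3)[of "length (snd q)"] vv(2) ne vtx_length[of \<Gamma> q] by (simp add: last_conv_nth)
  show ?thesis using kalg.mul_one[OF vertex_kalg[OF end_vertex] lb] ne
    by (auto simp: wprod_def unit_word_def V)
qed

lemma free_alg_unit_words: "{((l, []), [aone (A l)]) | l. l \<in> qV \<Gamma>} = unit_word ` qV \<Gamma>"
  by (auto simp: unit_word_def)

lemma unit_word_inj: "unit_word l = unit_word l' \<longleftrightarrow> l = l'" by (auto simp: unit_word_def)

theorem free_alg_kalg: "kalg (free_alg \<Gamma> A)"
  unfolding free_alg_def free_alg_unit_words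
proof (rule partial_product.salg_kalg[OF partial_product.intro])
  show "\<And>u v w. u \<in> {w. valid_word \<Gamma> A w} \<Longrightarrow> v \<in> {w. valid_word \<Gamma> A w} \<Longrightarrow>
      wprod \<Gamma> A u v = Some w \<Longrightarrow> w \<in> {w. valid_word \<Gamma> A w}"
    using wprod_valid by blast
  show "\<And>u v z. u \<in> {w. valid_word \<Gamma> A w} \<Longrightarrow> v \<in> {w. valid_word \<Gamma> A w} \<Longrightarrow> z \<in> {w. valid_word \<Gamma> A w} \<Longrightarrow>
      Option.bind (wprod \<Gamma> A u v) (\<lambda>x. wprod \<Gamma> A x z) = Option.bind (wprod \<Gamma> A v z) (wprod \<Gamma> A u)"
    using wprod_assoc by simp
  show "finite (unit_word ` qV \<Gamma>)" using finite_Gamma by (simp add: finite_quiver_def)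
  show "unit_word ` qV \<Gamma> \<subseteq> {w. valid_word \<Gamma> A w}" using unit_word_valid by auto
  show "\<exists>t\<in>unit_word ` qV \<Gamma>. wprod \<Gamma> A t v = Some v \<and> (\<forall>t'\<in>unit_word ` qV \<Gamma>. t' \<noteq> t \<longrightarrow> wprod \<Gamma> A t' v = None)"
    if "v \<in> {w. valid_word \<Gamma> A w}" for v
  proof -
    have v: "valid_word \<Gamma> A v" using that by simp
    have "fst (fst v) \<in> qV \<Gamma>" using valid_wordD(1)[OF v] by (simp add: is_path_def)
    then show ?thesis using wprod_unit_l[OF v] unit_word_inj by (intro bexI[of _ "unit_word (fst (fst v))"]) auto
  qed
  show "\<exists>t\<in>unit_word ` qV \<Gamma>. wprod \<Gamma> A v t = Some v \<and> (\<forall>t'\<in>unit_word ` qV \<Gamma>. t' \<noteq> t \<longrightarrow> wprod \<Gamma> A v t' = None)"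
    if "v \<in> {w. valid_word \<Gamma> A w}" for v
  proof -
    have v: "valid_word \<Gamma> A v" using that by simp
    have "pend \<Gamma> (fst v) \<in> qV \<Gamma>" using pend_in_vertices[OF finite_Gamma valid_wordD(1)[OF v]] .
    then show ?thesis using wprod_unit_r[OF v] unit_word_inj by (intro bexI[of _ "unit_word (pend \<Gamma> (fst v))"]) auto
  qed
qed

end

definition lin_endo :: "('k::field, 'a) alg \<Rightarrow> ('a \<Rightarrow> 'a) \<Rightarrow> bool" where
  "lin_endo B h \<longleftrightarrow> (\<forall>a\<in>acar B. h a \<in> acar B) \<and>
     (\<forall>a\<in>acar B. \<forall>a'\<in>acar B. h (aadd B a a') = aadd B (h a) (h a')) \<and>
     (\<forall>c. \<forall>a\<in>acar B. h (asmul B c a) = asmul B c (h a))"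

lemma lin_endo_id: "lin_endo B (\<lambda>a. a)" by (simp add: lin_endo_def)

lemma (in kalg) lin_endo_mul_right: "b \<in> acar A \<Longrightarrow> lin_endo A (\<lambda>a. amul A a b)"
  by (simp add: lin_endo_def mul_closed distr sm_mul)

lemma (in kalg) lin_endo_mul_left: "b \<in> acar A \<Longrightarrow> lin_endo A (\<lambda>a. amul A b a)"
  by (simp add: lin_endo_def mul_closed distl mul_sm)

context quiver_algebras begin

lemma valid_word_update:
  assumes "valid_word \<Gamma> A (p, as)" "a \<in> acar (A (vtx \<Gamma> p r))"
  shows "valid_word \<Gamma> A (p, as[r := a])"
proof -
  have "as[r := a] ! k \<in> acar (A (vtx \<Gamma> p k))" if "k \<le> length (snd p)" for k
  proof (cases "k = r \<and> r < length as")
    case True then show ?thesis using assms by simp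
  next
    case False
    then have "as[r := a] ! k = as ! k" by (metis list_update_beyond not_less nth_list_update_neq)
    then show ?thesis using assms that by (simp add: valid_word_def)
  qed
  then show ?thesis using assms by (simp add: valid_word_def)
qed

lemma wprod_update_mul_right:
  assumes u: "valid_word \<Gamma> A (p, as)" and r: "r < length as" and w: "valid_word \<Gamma> A w"
    and e: "pend \<Gamma> p = fst (fst w)"
  shows "\<exists>L r' h. valid_word \<Gamma> A ((fst p, snd p @ snd (fst w)), L) \<and> r' < length L \<and>
     vtx \<Gamma> (fst p, snd p @ snd (fst w)) r' = vtx \<Gamma> p r \<and> lin_endo (A (vtx \<Gamma> p r)) h \<and>
     (\<forall>a. wprod \<Gamma> A (p, as[r := a]) w = Some ((fst p, snd p @ snd (fst w)), L[r' := h a]))"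
proof -
  obtain q bs where W: "w = (q, bs)" by (cases w)
  note uw = valid_wordD[OF u] and ww = valid_wordD[OF w[unfolded W]]
  have ne: "as \<noteq> []" "bs \<noteq> []" using uw(2) ww(2) by auto
  have lb: "0 < length bs" using ne by simp
  define L where "L = butlast as @ amul (A (fst q)) (last as) (hd bs) # tl bs"
  have wp: "wprod \<Gamma> A (p, as) w = Some ((fst p, snd p @ snd q), L)"
    using e by (simp add: wprod_def W L_def)
  have vL: "valid_word \<Gamma> A ((fst p, snd p @ snd q), L)"
    using wprod_valid[OF u w wp] .
  have lenL: "length L = length as + length bs - 1" using ne by (cases as) (auto simp: L_def)
  have q_vertex: "fst q \<in> qV \<Gamma>" using ww(1) by (simp add: is_path_def)
  have rL: "r < length L" using lenL r lb by linarith
  show ?thesis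
  proof (cases "r < length as - 1")
    case True
    have "wprod \<Gamma> A (p, as[r := a]) w = Some ((fst p, snd p @ snd q), L[r := a])" for a
    proof -
      have "butlast (as[r := a]) = (butlast as)[r := a]" using True
        by (simp add: butlast_list_update)
      moreover have "last (as[r := a]) = last as" using True ne
        by (simp add: last_list_update)
      ultimately show ?thesis using e True
        by (simp add: wprod_def W L_def list_update_append)
    qed
    moreover have "vtx \<Gamma> (fst p, snd p @ snd q) r = vtx \<Gamma> p r"
      using True uw(2) e W by (simp add: vtx_cat)
    ultimately show ?thesis using vL W r rL lin_endo_id by (intro exI[of _ L] exI[of _ r]) auto
  next
    case False
    then have rl: "r = length as - 1" using r by simp
    then have rp: "r = length (snd p)" using uw(2) by simp
    have vr: "vtx \<Gamma> p r = fst q" using rp vtx_length[of \<Gamma> p] e W by simp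
    have hb: "hd bs \<in> acar (A (fst q))" using ww(3)[of 0] ne by (simp add: hd_conv_nth vtx_def)
    have "wprod \<Gamma> A (p, as[r := a]) w = Some ((fst p, snd p @ snd q), L[r := amul (A (fst q)) a (hd bs)])" for a
    proof -
      have "butlast (as[r := a]) = butlast as" using rl ne
        by (simp add: butlast_list_update)
      moreover have "last (as[r := a]) = a" using rl ne
        by (simp add: last_list_update)
      ultimately show ?thesis using e rl ne
        by (simp add: wprod_def W L_def list_update_append)
    qed
    moreover have "vtx \<Gamma> (fst p, snd p @ snd q) r = vtx \<Gamma> p r"
      using rp e W by (simp add: vtx_cat)
    ultimately show ?thesis using vL W r rL kalg.lin_endo_mul_right[OF vertex_kalg[OF q_vertex] hb] vr
      by (intro exI[of _ L] exI[of _ r] exI[of _ "\<lambda>a. amul (A (fst q)) a (hd bs)"]) auto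
  qed
qed

lemma wprod_update_mul_left:
  assumes u: "valid_word \<Gamma> A (p, as)" and r: "r < length as" and w: "valid_word \<Gamma> A w"
    and e: "pend \<Gamma> (fst w) = fst p"
  shows "\<exists>L r' h. valid_word \<Gamma> A ((fst (fst w), snd (fst w) @ snd p), L) \<and> r' < length L \<and>
     vtx \<Gamma> (fst (fst w), snd (fst w) @ snd p) r' = vtx \<Gamma> p r \<and> lin_endo (A (vtx \<Gamma> p r)) h \<and>
     (\<forall>a. wprod \<Gamma> A w (p, as[r := a]) = Some ((fst (fst w), snd (fst w) @ snd p), L[r' := h a]))"
proof -
  obtain q bs where W: "w = (q, bs)" by (cases w)
  note uw = valid_wordD[OF u] and ww = valid_wordD[OF w[unfolded W]]
  have ne: "as \<noteq> []" "bs \<noteq> []" using uw(2) ww(2) by auto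
  have e': "pend \<Gamma> q = fst p" using e W by simp
  define L where "L = butlast bs @ amul (A (fst p)) (last bs) (hd as) # tl as"
  have wp: "wprod \<Gamma> A w (p, as) = Some ((fst q, snd q @ snd p), L)"
    using e' by (simp add: wprod_def W L_def)
  have vL: "valid_word \<Gamma> A ((fst q, snd q @ snd p), L)"
    using wprod_valid[OF w u wp] .
  have lenL: "length L = length bs - 1 + length as" using ne by (cases as) (auto simp: L_def)
  have lbq: "length bs - 1 = length (snd q)" using ww(2) by simp
  have fp: "fst p \<in> qV \<Gamma>" using uw(1) by (simp add: is_path_def)
  have rL: "length bs - 1 + r < length L" using lenL r by linarith
  show ?thesis
  proof (cases r)
    case (Suc k)
    have "wprod \<Gamma> A w (p, as[r := a]) = Some ((fst q, snd q @ snd p), L[length bs - 1 + r := a])" for a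
    proof -
      obtain x xs where as: "as = x # xs" using ne by (cases as) auto
      show ?thesis using e' Suc as
        by (simp add: wprod_def W L_def list_update_append)
    qed
    moreover have "vtx \<Gamma> (fst q, snd q @ snd p) (length bs - 1 + r) = vtx \<Gamma> p r"
      using Suc lbq e' by (simp add: vtx_cat)
    ultimately show ?thesis using vL W rL lin_endo_id
      by (intro exI[of _ L] exI[of _ "length bs - 1 + r"]) auto
  next
    case 0
    have lb: "last bs \<in> acar (A (fst p))"
      using ww(3)[of "length (snd q)"] ww(2) ne vtx_length[of \<Gamma> q] e' by (simp add: last_conv_nth)
    have "wprod \<Gamma> A w (p, as[r := a]) = Some ((fst q, snd q @ snd p), L[length bs - 1 := amul (A (fst p)) (last bs) a])" for a
    proof -
      obtain x xs where as: "as = x # xs" using ne by (cases as) auto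
      show ?thesis using e' 0 as
        by (simp add: wprod_def W L_def list_update_append)
    qed
    moreover have "vtx \<Gamma> (fst q, snd q @ snd p) (length bs - 1) = vtx \<Gamma> p r"
      using 0 lbq e' vtx_length[of \<Gamma> q] vtx_cat[OF e', of "length (snd q)"] by (simp add: vtx_def)
    moreover have "vtx \<Gamma> p 0 = fst p" by (simp add: vtx_def)
    ultimately show ?thesis using vL W rL 0 kalg.lin_endo_mul_left[OF vertex_kalg[OF fp] lb]
      by (intro exI[of _ L] exI[of _ "length bs - 1"] exI[of _ "\<lambda>a. amul (A (fst p)) (last bs) a"]) auto
  qed
qed

end

section \<open>The multilinearity relations span an ideal\<close>

context quiver_algebras begin

abbreviation "FA \<equiv> free_alg \<Gamma> A"
abbreviation "MLgens \<equiv> multilin_gens \<Gamma> A"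
abbreviation "MLspan \<equiv> span FA MLgens"

sublocale F: kalg FA by (rule free_alg_kalg)

lemma free_alg_simps:
  "acar FA = {f. finite (fsupp f) \<and> fsupp f \<subseteq> {w. valid_word \<Gamma> A w}}"
  "aadd FA = (\<lambda>f g x. f x + g x)"
  "asmul FA = (\<lambda>c f x. c * f x)"
  "azero FA = (\<lambda>x. 0)"
  by (simp_all add: free_alg_def salg_def)

lemma delta_closed: "valid_word \<Gamma> A w \<Longrightarrow> delta w \<in> acar FA"
  by (simp add: free_alg_simps)

lemma free_alg_induct [consumes 2, case_names zero add]:
  assumes "f \<in> acar FA" "fsupp f \<subseteq> S" "P (azero FA)"
    "\<And>f w c. f \<in> acar FA \<Longrightarrow> fsupp f \<subseteq> S \<Longrightarrow> P f \<Longrightarrow> valid_word \<Gamma> A w \<Longrightarrow> w \<in> S \<Longrightarrow>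
      P (aadd FA f (asmul FA c (delta w)))"
  shows "P f"
  using assms unfolding free_alg_def by (induction rule: salg_induct) (auto simp: salg_simps)

lemma diff3_eq_alg: "(\<lambda>x. f1 x - f2 x - f3 x) = aadd FA (aadd FA f1 (F.neg f2)) (F.neg f3)"
  by (simp add: free_alg_simps)

lemma diff_sm_eq_alg: "(\<lambda>x. f1 x - c * f2 x) = aadd FA f1 (F.neg (asmul FA c f2))"
  by (simp add: free_alg_simps)

lemma delta_mul: "amul FA (delta x) (delta w) = (case wprod \<Gamma> A x w of None \<Rightarrow> (\<lambda>_. 0) | Some y \<Rightarrow> delta y)"
  unfolding free_alg_def by (rule salg_delta_mul)

lemma delta_update_closed: "valid_word \<Gamma> A (p, as) \<Longrightarrow> r < length as \<Longrightarrow> a \<in> acar (A (vtx \<Gamma> p r)) \<Longrightarrow>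
   delta (p, as[r := a]) \<in> acar FA"
  by (rule delta_closed, rule valid_word_update)

lemma vtx_word_in_vertices: "valid_word \<Gamma> A (p, as) \<Longrightarrow> r < length as \<Longrightarrow> vtx \<Gamma> p r \<in> qV \<Gamma>"
  by (rule vtx_in_vertices[OF finite_Gamma]) (auto dest: valid_wordD)

lemma MLgens_closed: "MLgens \<subseteq> acar FA"
proof
  fix g assume "g \<in> MLgens"
  then show "g \<in> acar FA"
  proof (unfold multilin_gens_def, elim UnE CollectE exE conjE)
    fix p as r a a' assume h: "valid_word \<Gamma> A (p, as)" "r < length as" "a \<in> acar (A (vtx \<Gamma> p r))"
      "a' \<in> acar (A (vtx \<Gamma> p r))"
      "g = (\<lambda>x. delta (p, as[r := aadd (A (vtx \<Gamma> p r)) a a']) x - delta (p, as[r := a]) x - delta (p, as[r := a']) x)"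
    interpret V: kalg "A (vtx \<Gamma> p r)" by (rule vertex_kalg[OF vtx_word_in_vertices[OF h(1,2)]])
    show "g \<in> acar FA" unfolding h(5) diff3_eq_alg
      using h delta_update_closed V.add_closed by (intro F.add_closed F.sm_closed) auto
  next
    fix p as r a c assume h: "valid_word \<Gamma> A (p, as)" "r < length as" "a \<in> acar (A (vtx \<Gamma> p r))"
      "g = (\<lambda>x. delta (p, as[r := asmul (A (vtx \<Gamma> p r)) c a]) x - c * delta (p, as[r := a]) x)"
    interpret V: kalg "A (vtx \<Gamma> p r)" by (rule vertex_kalg[OF vtx_word_in_vertices[OF h(1,2)]])
    show "g \<in> acar FA" unfolding h(4) diff_sm_eq_alg
      using h delta_update_closed V.sm_closed by (intro F.add_closed F.sm_closed) auto
  qed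
qed

lemma MLspan_subspace: "is_subspace FA MLspan" by (rule F.span_subspace[OF MLgens_closed])

lemma MLspan_closed: "MLspan \<subseteq> acar FA" using MLspan_subspace by (simp add: is_subspace_def)

lemma MLgens_in_span: "g \<in> MLgens \<Longrightarrow> g \<in> MLspan" using F.span_inc[of MLgens] by (rule subsetD)

lemma add_gen_in_MLgens:
  assumes "valid_word \<Gamma> A (p, as)" "r < length as" "a \<in> acar (A (vtx \<Gamma> p r))" "a' \<in> acar (A (vtx \<Gamma> p r))"
  shows "(\<lambda>x. delta (p, as[r := aadd (A (vtx \<Gamma> p r)) a a']) x - delta (p, as[r := a]) x - delta (p, as[r := a']) x) \<in> MLgens"
  unfolding multilin_gens_def using assms by blast

lemma sm_gen_in_MLgens:
  assumes "valid_word \<Gamma> A (p, as)" "r < length as" "a \<in> acar (A (vtx \<Gamma> p r))"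
  shows "(\<lambda>x. delta (p, as[r := asmul (A (vtx \<Gamma> p r)) c a]) x - c * delta (p, as[r := a]) x) \<in> MLgens"
  unfolding multilin_gens_def using assms by blast

lemma MLgens_cases:
  assumes "g \<in> MLgens"
  obtains (add) p as r a a' where "valid_word \<Gamma> A (p, as)" "r < length as" "a \<in> acar (A (vtx \<Gamma> p r))"
    "a' \<in> acar (A (vtx \<Gamma> p r))"
    "g = (\<lambda>x. delta (p, as[r := aadd (A (vtx \<Gamma> p r)) a a']) x - delta (p, as[r := a]) x - delta (p, as[r := a']) x)"
  | (sm) p as r a c where "valid_word \<Gamma> A (p, as)" "r < length as" "a \<in> acar (A (vtx \<Gamma> p r))"
    "g = (\<lambda>x. delta (p, as[r := asmul (A (vtx \<Gamma> p r)) c a]) x - c * delta (p, as[r := a]) x)"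
  using assms unfolding multilin_gens_def by blast

lemma MLspan_zero: "(\<lambda>_. 0) \<in> MLspan" using MLspan_subspace by (simp add: is_subspace_def free_alg_simps)

lemma MLgen_image:
  assumes lin: "\<And>f f'. f \<in> acar FA \<Longrightarrow> f' \<in> acar FA \<Longrightarrow> \<Phi> (aadd FA f f') = aadd FA (\<Phi> f) (\<Phi> f')"
      "\<And>c f. f \<in> acar FA \<Longrightarrow> \<Phi> (asmul FA c f) = asmul FA c (\<Phi> f)"
    and shape: "\<And>p as r. valid_word \<Gamma> A (p, as) \<Longrightarrow> r < length as \<Longrightarrow>
      (\<forall>b. \<Phi> (delta (p, as[r := b])) = azero FA) \<or>
      (\<exists>q L r' h. valid_word \<Gamma> A (q, L) \<and> r' < length L \<and> vtx \<Gamma> q r' = vtx \<Gamma> p r \<and>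
         lin_endo (A (vtx \<Gamma> p r)) h \<and> (\<forall>b. \<Phi> (delta (p, as[r := b])) = delta (q, L[r' := h b])))"
    and g: "g \<in> MLgens"
  shows "\<Phi> g \<in> MLspan"
  using g
proof (cases rule: MLgens_cases)
  case (add p as r a a')
  interpret V: kalg "A (vtx \<Gamma> p r)" by (rule vertex_kalg[OF vtx_word_in_vertices[OF add(1,2)]])
  have "\<Phi> g = aadd FA (aadd FA (\<Phi> (delta (p, as[r := aadd (A (vtx \<Gamma> p r)) a a'])))
      (F.neg (\<Phi> (delta (p, as[r := a]))))) (F.neg (\<Phi> (delta (p, as[r := a']))))"
    unfolding add(5) diff3_eq_alg using add V.add_closed delta_update_closed
    by (simp add: lin F.add_closed F.sm_closed)
  then have \<Phi>g: "\<Phi> g = (\<lambda>x. \<Phi> (delta (p, as[r := aadd (A (vtx \<Gamma> p r)) a a'])) x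
      - \<Phi> (delta (p, as[r := a])) x - \<Phi> (delta (p, as[r := a'])) x)"
    by (simp add: free_alg_simps)
  from shape[OF add(1,2)] show ?thesis
  proof (elim disjE exE conjE)
    assume "\<forall>b. \<Phi> (delta (p, as[r := b])) = azero FA"
    then show ?thesis using MLspan_zero by (simp add: \<Phi>g free_alg_simps)
  next
    fix q L r' h assume L: "valid_word \<Gamma> A (q, L)" "r' < length L" "vtx \<Gamma> q r' = vtx \<Gamma> p r"
      "lin_endo (A (vtx \<Gamma> p r)) h" "\<forall>b. \<Phi> (delta (p, as[r := b])) = delta (q, L[r' := h b])"
    have "h a \<in> acar (A (vtx \<Gamma> p r))" "h a' \<in> acar (A (vtx \<Gamma> p r))"
      "h (aadd (A (vtx \<Gamma> p r)) a a') = aadd (A (vtx \<Gamma> p r)) (h a) (h a')"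
      using L(4) add(3,4) by (auto simp: lin_endo_def)
    then show ?thesis using add_gen_in_MLgens[OF L(1,2), of "h a" "h a'"] L(3,5) MLgens_in_span
      by (simp add: \<Phi>g)
  qed
next
  case (sm p as r a c)
  interpret V: kalg "A (vtx \<Gamma> p r)" by (rule vertex_kalg[OF vtx_word_in_vertices[OF sm(1,2)]])
  have "\<Phi> g = aadd FA (\<Phi> (delta (p, as[r := asmul (A (vtx \<Gamma> p r)) c a])))
      (F.neg (asmul FA c (\<Phi> (delta (p, as[r := a])))))"
    unfolding sm(4) diff_sm_eq_alg using sm V.sm_closed delta_update_closed
    by (simp add: lin F.add_closed F.sm_closed)
  then have \<Phi>g: "\<Phi> g = (\<lambda>x. \<Phi> (delta (p, as[r := asmul (A (vtx \<Gamma> p r)) c a])) x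
      - c * \<Phi> (delta (p, as[r := a])) x)"
    by (simp add: free_alg_simps)
  from shape[OF sm(1,2)] show ?thesis
  proof (elim disjE exE conjE)
    assume "\<forall>b. \<Phi> (delta (p, as[r := b])) = azero FA"
    then show ?thesis using MLspan_zero by (simp add: \<Phi>g free_alg_simps)
  next
    fix q L r' h assume L: "valid_word \<Gamma> A (q, L)" "r' < length L" "vtx \<Gamma> q r' = vtx \<Gamma> p r"
      "lin_endo (A (vtx \<Gamma> p r)) h" "\<forall>b. \<Phi> (delta (p, as[r := b])) = delta (q, L[r' := h b])"
    have "h a \<in> acar (A (vtx \<Gamma> p r))"
      "h (asmul (A (vtx \<Gamma> p r)) c a) = asmul (A (vtx \<Gamma> p r)) c (h a)"
      using L(4) sm(3) by (auto simp: lin_endo_def)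
    then show ?thesis using sm_gen_in_MLgens[OF L(1,2), of "h a" c] L(3,5) MLgens_in_span
      by (simp add: \<Phi>g)
  qed
qed

lemma MLgen_mul_right:
  assumes g: "g \<in> MLgens" and w: "valid_word \<Gamma> A w"
  shows "amul FA g (delta w) \<in> MLspan"
proof (rule MLgen_image[OF _ _ _ g])
  have d: "delta w \<in> acar FA" using delta_closed[OF w] .
  show "amul FA (aadd FA f f') (delta w) = aadd FA (amul FA f (delta w)) (amul FA f' (delta w))"
    if "f \<in> acar FA" "f' \<in> acar FA" for f f' using that d by (rule F.distr)
  show "amul FA (asmul FA c f) (delta w) = asmul FA c (amul FA f (delta w))" if "f \<in> acar FA" for c f
    using that d by (rule F.sm_mul)
next
  fix p as r assume pa: "valid_word \<Gamma> A (p, as)" "r < length as"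
  show "(\<forall>b. amul FA (delta (p, as[r := b])) (delta w) = azero FA) \<or>
      (\<exists>q L r' h. valid_word \<Gamma> A (q, L) \<and> r' < length L \<and> vtx \<Gamma> q r' = vtx \<Gamma> p r \<and>
         lin_endo (A (vtx \<Gamma> p r)) h \<and> (\<forall>b. amul FA (delta (p, as[r := b])) (delta w) = delta (q, L[r' := h b])))"
  proof (cases "pend \<Gamma> p = fst (fst w)")
    case False
    then show ?thesis by (simp add: delta_mul wprod_def free_alg_simps)
  next
    case True
    then show ?thesis using wprod_update_mul_right[OF pa w True] by (force simp: delta_mul)
  qed
qed

lemma MLgen_mul_left:
  assumes g: "g \<in> MLgens" and w: "valid_word \<Gamma> A w"
  shows "amul FA (delta w) g \<in> MLspan"
proof (rule MLgen_image[OF _ _ _ g])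
  have d: "delta w \<in> acar FA" using delta_closed[OF w] .
  show "amul FA (delta w) (aadd FA f f') = aadd FA (amul FA (delta w) f) (amul FA (delta w) f')"
    if "f \<in> acar FA" "f' \<in> acar FA" for f f' using d that by (rule F.distl)
  show "amul FA (delta w) (asmul FA c f) = asmul FA c (amul FA (delta w) f)" if "f \<in> acar FA" for c f
    using d that by (rule F.mul_sm)
next
  fix p as r assume pa: "valid_word \<Gamma> A (p, as)" "r < length as"
  show "(\<forall>b. amul FA (delta w) (delta (p, as[r := b])) = azero FA) \<or>
      (\<exists>q L r' h. valid_word \<Gamma> A (q, L) \<and> r' < length L \<and> vtx \<Gamma> q r' = vtx \<Gamma> p r \<and>
         lin_endo (A (vtx \<Gamma> p r)) h \<and> (\<forall>b. amul FA (delta w) (delta (p, as[r := b])) = delta (q, L[r' := h b])))"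
  proof (cases "pend \<Gamma> (fst w) = fst p")
    case False
    then show ?thesis by (simp add: delta_mul wprod_def free_alg_simps)
  next
    case True
    then show ?thesis using wprod_update_mul_left[OF pa w True] by (force simp: delta_mul)
  qed
qed

lemma MLspan_add: "x \<in> MLspan \<Longrightarrow> y \<in> MLspan \<Longrightarrow> aadd FA x y \<in> MLspan"
  using MLspan_subspace by (simp add: is_subspace_def)
lemma MLspan_sm: "x \<in> MLspan \<Longrightarrow> asmul FA c x \<in> MLspan"
  using MLspan_subspace by (simp add: is_subspace_def)

lemma MLgen_mul:
  assumes g: "g \<in> MLgens" and f: "f \<in> acar FA"
  shows "amul FA g f \<in> MLspan \<and> amul FA f g \<in> MLspan"
proof -
  have gC: "g \<in> acar FA" using MLgens_closed g by (rule subsetD)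
  from f subset_UNIV show ?thesis
  proof (induction rule: free_alg_induct)
    case zero
    show ?case using F.mul_zero[OF gC] F.zero_mul[OF gC] MLspan_zero by (simp add: free_alg_simps)
  next
    case (add f w c)
    note w = \<open>valid_word \<Gamma> A w\<close>
    then show ?case
      using add MLgen_mul_right[OF g w] MLgen_mul_left[OF g w] gC delta_closed[OF w]
      by (simp add: F.distl F.distr F.mul_sm F.sm_mul F.sm_closed MLspan_add MLspan_sm)
  qed
qed

theorem MLspan_ideal: "is_ideal FA MLspan"
proof -
  define T where "T = {x \<in> MLspan. \<forall>r\<in>acar FA. amul FA x r \<in> MLspan \<and> amul FA r x \<in> MLspan}"
  have TC: "T \<subseteq> acar FA" using MLspan_closed by (auto simp: T_def)
  have Tsub: "is_subspace FA T"
    unfolding is_subspace_def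
  proof (intro conjI ballI allI)
    show "T \<subseteq> acar FA" by (rule TC)
    have "amul FA (azero FA) r \<in> MLspan \<and> amul FA r (azero FA) \<in> MLspan" if "r \<in> acar FA" for r
      using F.mul_zero[OF that] F.zero_mul[OF that] MLspan_zero by (simp add: free_alg_simps)
    then show "azero FA \<in> T" unfolding T_def using MLspan_zero by (simp add: free_alg_simps)
  next
    fix x y assume xy: "x \<in> T" "y \<in> T"
    then have xC: "x \<in> acar FA" and yC: "y \<in> acar FA" using TC by auto
    have "amul FA (aadd FA x y) r \<in> MLspan \<and> amul FA r (aadd FA x y) \<in> MLspan" if r: "r \<in> acar FA" for r
      using xy r by (simp add: F.distl[OF r xC yC] F.distr[OF xC yC r] MLspan_add T_def)
    then show "aadd FA x y \<in> T" using xy unfolding T_def by (simp add: MLspan_add)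
  next
    fix c x assume x: "x \<in> T"
    then have xC: "x \<in> acar FA" using TC by auto
    have "amul FA (asmul FA c x) r \<in> MLspan \<and> amul FA r (asmul FA c x) \<in> MLspan" if r: "r \<in> acar FA" for r
      using x r by (simp add: F.mul_sm[OF r xC] F.sm_mul[OF xC r] MLspan_sm T_def)
    then show "asmul FA c x \<in> T" using x unfolding T_def by (simp add: MLspan_sm)
  qed
  have "MLgens \<subseteq> T"
  proof
    fix g assume g: "g \<in> MLgens"
    show "g \<in> T" unfolding T_def using MLgen_mul[OF g] MLgens_in_span[OF g] by simp
  qed
  then have ST: "MLspan \<subseteq> T" by (rule F.span_least[OF Tsub])
  have "\<forall>x\<in>MLspan. \<forall>r\<in>acar FA. amul FA r x \<in> MLspan \<and> amul FA x r \<in> MLspan"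
    using ST unfolding T_def by blast
  then show ?thesis unfolding is_ideal_def using MLspan_subspace by simp
qed

end

section \<open>Radicals of cyclic projective modules and corners\<close>

lemma submodI:
  assumes "N \<subseteq> M" "azero A \<in> N" "\<And>x y. x \<in> N \<Longrightarrow> y \<in> N \<Longrightarrow> aadd A x y \<in> N"
    "\<And>x r. x \<in> N \<Longrightarrow> r \<in> acar A \<Longrightarrow> amul A x r \<in> N"
  shows "submod A M N"
  using assms by (auto simp: submod_def)

lemma submodE:
  assumes "submod A M N"
  shows "N \<subseteq> M" "azero A \<in> N" "\<And>x y. x \<in> N \<Longrightarrow> y \<in> N \<Longrightarrow> aadd A x y \<in> N"
    "\<And>x r. x \<in> N \<Longrightarrow> r \<in> acar A \<Longrightarrow> amul A x r \<in> N"
  using assms by (auto simp: submod_def)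

lemma maxsubE:
  assumes "maxsub A M N"
  shows "submod A M N" "N \<noteq> M" "\<And>N'. submod A M N' \<Longrightarrow> N \<subseteq> N' \<Longrightarrow> N' = N \<or> N' = M"
  using assms by (auto simp: maxsub_def)

lemma rad_subset: "mod_rad A M \<subseteq> M"
  by (simp add: mod_rad_def)

lemma mem_radI: "x \<in> M \<Longrightarrow> (\<And>N. maxsub A M N \<Longrightarrow> x \<in> N) \<Longrightarrow> x \<in> mod_rad A M"
  by (auto simp: mod_rad_def)

lemma mem_radD: "x \<in> mod_rad A M \<Longrightarrow> maxsub A M N \<Longrightarrow> x \<in> N"
  by (auto simp: mod_rad_def)

context kalg begin

lemma eA_subset: "e \<in> acar A \<Longrightarrow> eA A e \<subseteq> acar A"
  by (auto simp: eA_def mul_closed)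

lemma mem_eA_self: "e \<in> acar A \<Longrightarrow> e \<in> eA A e"
  unfolding eA_def using mul_one one_closed by force

lemma eA_mul_closed: "e \<in> acar A \<Longrightarrow> x \<in> eA A e \<Longrightarrow> r \<in> acar A \<Longrightarrow> amul A x r \<in> eA A e"
  unfolding eA_def by (auto simp: mul_assoc mul_closed)

lemma eA_sub_closed: "e \<in> acar A \<Longrightarrow> x \<in> eA A e \<Longrightarrow> y \<in> eA A e \<Longrightarrow> sub x y \<in> eA A e"
  unfolding eA_def by (auto simp: mul_sub[symmetric] sm_closed add_closed)

lemma eA_mul_left: "e \<in> acar A \<Longrightarrow> u \<in> acar A \<Longrightarrow> amul A u e = e \<Longrightarrow> x \<in> eA A e \<Longrightarrow> amul A u x = x"
  unfolding eA_def by (auto simp: mul_assoc[symmetric])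

lemma submod_eA: assumes e: "e \<in> acar A" shows "submod A (eA A e) (eA A e)"
proof (rule submodI)
  show "azero A \<in> eA A e" using mul_zero[OF e] zero_closed unfolding eA_def by force
next
  fix x y assume "x \<in> eA A e" "y \<in> eA A e"
  then show "aadd A x y \<in> eA A e" using e by (auto simp: eA_def distl[symmetric] add_closed)
qed (simp_all add: eA_mul_closed e)

lemma submod_eA_eqI: "submod A (eA A e) N \<Longrightarrow> e \<in> N \<Longrightarrow> N = eA A e"
  unfolding submod_def eA_def by blast

lemma submod_add_cyclic:
  assumes M: "submod A M M" "M \<subseteq> acar A" and N: "submod A M N" and z: "z \<in> M"
  shows "submod A M {aadd A n (amul A z r) | n r. n \<in> N \<and> r \<in> acar A}"
proof -
  define S where "S = {aadd A n (amul A z r) | n r. n \<in> N \<and> r \<in> acar A}"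
  note NM = submodE[OF N] and MM = submodE[OF M(1)]
  have NC: "n \<in> acar A" if "n \<in> N" for n using that NM(1) M(2) by blast
  have zC: "z \<in> acar A" using z M(2) by blast
  have "S \<subseteq> M" unfolding S_def using NM(1) MM(3,4) z by blast
  moreover have "azero A \<in> S"
  proof -
    have "azero A = aadd A (azero A) (amul A z (azero A))" using zC by (simp add: mul_zero add_zero zero_closed)
    then show ?thesis unfolding S_def using NM(2) zero_closed by blast
  qed
  moreover have "aadd A s t \<in> S" if st: "s \<in> S" "t \<in> S" for s t
  proof -
    obtain n r n' r' where h: "n \<in> N" "r \<in> acar A" "s = aadd A n (amul A z r)"
      "n' \<in> N" "r' \<in> acar A" "t = aadd A n' (amul A z r')" using st unfolding S_def by blast
    have "aadd A s t = aadd A (aadd A n n') (amul A z (aadd A r r'))"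
      using h NC zC by (simp add: distl ac_closed add_add_swap)
    then show ?thesis unfolding S_def using h NM(3) add_closed by blast
  qed
  moreover have "amul A s r0 \<in> S" if s: "s \<in> S" and r0: "r0 \<in> acar A" for s r0
  proof -
    obtain n r where h: "n \<in> N" "r \<in> acar A" "s = aadd A n (amul A z r)" using s unfolding S_def by blast
    have "amul A s r0 = aadd A (amul A n r0) (amul A z (amul A r r0))"
      using h r0 NC zC by (simp add: distr mul_assoc ac_closed)
    then show ?thesis unfolding S_def using h r0 NM(4) mul_closed by blast
  qed
  ultimately show ?thesis unfolding S_def[symmetric] by (rule submodI)
qed

text \<open>If \<open>z\<close> were outside a maximal submodule \<open>N\<close>, then \<open>e = n + z r\<close> with \<open>n \<in> N\<close>, and
  \<open>e = e e = n e \<in> N\<close>.\<close>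

lemma mem_rad_eA:
  assumes e: "e \<in> acar A" "amul A e e = e" and z: "z \<in> eA A e"
    and unreachable: "\<And>r. r \<in> acar A \<Longrightarrow> amul A (amul A z r) e = azero A"
  shows "z \<in> mod_rad A (eA A e)"
proof (rule mem_radI[OF z])
  fix N assume N: "maxsub A (eA A e) N"
  note ND = maxsubE[OF N] and NN = submodE[OF maxsubE(1)[OF N]]
  have PC: "eA A e \<subseteq> acar A" using eA_subset[OF e(1)] .
  have zC: "z \<in> acar A" using z PC by blast
  show "z \<in> N"
  proof (rule ccontr)
    assume zN: "z \<notin> N"
    define N' where "N' = {aadd A n (amul A z r) | n r. n \<in> N \<and> r \<in> acar A}"
    have sub: "submod A (eA A e) N'"
      unfolding N'_def by (rule submod_add_cyclic[OF submod_eA[OF e(1)] PC ND(1) z])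
    have "n = aadd A n (amul A z (azero A))" if "n \<in> N" for n
      using that NN(1) PC zC by (auto simp: mul_zero add_zero_r)
    then have NN': "N \<subseteq> N'" unfolding N'_def using zero_closed by blast
    have "z = aadd A (azero A) (amul A z (aone A))" using zC by (simp add: mul_one add_zero)
    then have "z \<in> N'" unfolding N'_def using NN(2) one_closed by blast
    then have "N' = eA A e" using ND(3)[OF sub NN'] zN by blast
    then obtain n r where h: "n \<in> N" "r \<in> acar A" "e = aadd A n (amul A z r)"
      using mem_eA_self[OF e(1)] unfolding N'_def by blast
    have nC: "n \<in> acar A" using h(1) NN(1) PC by blast
    have "e = aadd A (amul A n e) (amul A (amul A z r) e)"
      using e h(2,3) nC zC by (metis distr mul_closed)
    then have "e = amul A n e" using unreachable[OF h(2)] nC e(1) by (simp add: add_zero_r mul_closed)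
    then have "e \<in> N" using NN(4)[OF h(1) e(1)] by simp
    then show False using submod_eA_eqI[OF ND(1)] ND(2) by blast
  qed
qed

end

text \<open>For \<open>\<epsilon>\<close> the unit at a vertex of an acyclic quiver, \<open>corner_gap_zero\<close> says that no path
  returns to its starting vertex.\<close>

locale corner_embedding = L: kalg L + B: kalg B
  for L :: "('k::field, 'x) alg" and B :: "('k, 'y) alg" +
  fixes \<iota> :: "'y \<Rightarrow> 'x" and \<epsilon> :: 'x and eB :: 'y
  assumes \<iota>_closed: "a \<in> acar B \<Longrightarrow> \<iota> a \<in> acar L"
    and \<iota>_add: "a \<in> acar B \<Longrightarrow> b \<in> acar B \<Longrightarrow> \<iota> (aadd B a b) = aadd L (\<iota> a) (\<iota> b)"
    and \<iota>_sm: "a \<in> acar B \<Longrightarrow> \<iota> (asmul B c a) = asmul L c (\<iota> a)"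
    and \<iota>_mul: "a \<in> acar B \<Longrightarrow> b \<in> acar B \<Longrightarrow> \<iota> (amul B a b) = amul L (\<iota> a) (\<iota> b)"
    and \<iota>_inj: "a \<in> acar B \<Longrightarrow> b \<in> acar B \<Longrightarrow> \<iota> a = \<iota> b \<Longrightarrow> a = b"
    and \<iota>_one: "\<iota> (aone B) = \<epsilon>"
    and eB_closed: "eB \<in> acar B" and eB_idem: "amul B eB eB = eB"
    and corner_in_image: "x \<in> acar L \<Longrightarrow> \<exists>a\<in>acar B. amul L \<epsilon> (amul L x \<epsilon>) = \<iota> a"
    and corner_gap_zero: "x \<in> acar L \<Longrightarrow> y \<in> acar L \<Longrightarrow>
        amul L \<epsilon> (amul L x (amul L (L.sub (aone L) \<epsilon>) (amul L y \<epsilon>))) = azero L"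
begin

abbreviation mul_L (infixl "\<odot>" 70) where "x \<odot> y \<equiv> amul L x y"
abbreviation add_L (infixl "\<oplus>" 65) where "x \<oplus> y \<equiv> aadd L x y"
abbreviation "CL \<equiv> acar L"
abbreviation "e \<equiv> \<iota> eB"
abbreviation "\<epsilon>c \<equiv> L.sub (aone L) \<epsilon>"
abbreviation "P \<equiv> eA L e"
abbreviation "PB \<equiv> eA B eB"

lemma \<epsilon>_closed: "\<epsilon> \<in> CL" using \<iota>_closed[OF B.one_closed] \<iota>_one by simp
lemma e_closed: "e \<in> CL" using \<iota>_closed[OF eB_closed] .
lemma \<epsilon>c_closed: "\<epsilon>c \<in> CL" using \<epsilon>_closed by (simp add: L.sub_closed L.one_closed)

lemmas CL_closed = L.mul_closed L.add_closed L.sm_closed L.zero_closed L.one_closed \<epsilon>_closed e_closed \<epsilon>c_closed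

lemma \<iota>_zero: "\<iota> (azero B) = azero L"
proof -
  have "\<iota> (azero B) \<oplus> \<iota> (azero B) = \<iota> (azero B) \<oplus> azero L"
    using \<iota>_add[OF B.zero_closed B.zero_closed] B.add_zero[OF B.zero_closed] L.add_zero_r \<iota>_closed B.zero_closed
    by simp
  then show ?thesis using L.add_left_cancel \<iota>_closed B.zero_closed L.zero_closed by blast
qed

lemma \<iota>_sub: "a \<in> acar B \<Longrightarrow> b \<in> acar B \<Longrightarrow> \<iota> (B.sub a b) = L.sub (\<iota> a) (\<iota> b)"
  by (simp add: \<iota>_add \<iota>_sm B.sm_closed)

lemma \<iota>_\<epsilon>: "a \<in> acar B \<Longrightarrow> \<iota> a \<odot> \<epsilon> = \<iota> a"
  using \<iota>_mul[OF _ B.one_closed, of a] B.mul_one \<iota>_one by simp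

lemma \<epsilon>_e: "\<epsilon> \<odot> e = e" using \<iota>_mul[OF B.one_closed eB_closed] B.one_mul[OF eB_closed] \<iota>_one by simp
lemma e_idem: "e \<odot> e = e" using \<iota>_mul[OF eB_closed eB_closed] eB_idem by simp

lemma \<epsilon>c_\<epsilon>: "\<epsilon>c \<odot> \<epsilon> = azero L"
proof -
  have "\<epsilon> \<odot> \<epsilon> = \<epsilon>" using \<iota>_mul[OF B.one_closed B.one_closed] B.one_mul[OF B.one_closed] \<iota>_one by simp
  then show ?thesis using \<epsilon>_closed by (simp add: L.sub_mul L.one_closed L.one_mul L.add_neg_r)
qed

lemma split_by_\<epsilon>: "x \<in> CL \<Longrightarrow> x = (x \<odot> \<epsilon>) \<oplus> (x \<odot> \<epsilon>c)"
  using L.distl[of x \<epsilon> \<epsilon>c] L.add_sub_cancel[of \<epsilon> "aone L"] L.mul_one[of x] by (simp add: CL_closed)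

lemma P_closed: "P \<subseteq> CL" by (rule L.eA_subset[OF e_closed])
lemma PB_closed: "PB \<subseteq> acar B" by (rule B.eA_subset[OF eB_closed])

lemma \<iota>_PB: "a \<in> PB \<Longrightarrow> \<iota> a \<in> P"
  unfolding eA_def using \<iota>_mul eB_closed \<iota>_closed by blast

lemma P_\<epsilon>_in_image: "x \<in> P \<Longrightarrow> \<exists>a\<in>PB. x \<odot> \<epsilon> = \<iota> a"
proof -
  assume "x \<in> P"
  then obtain w where w: "w \<in> CL" "x = e \<odot> w" by (auto simp: eA_def)
  obtain b where b: "b \<in> acar B" "\<epsilon> \<odot> (w \<odot> \<epsilon>) = \<iota> b" using corner_in_image[OF w(1)] by blast
  have "x \<odot> \<epsilon> = e \<odot> (\<epsilon> \<odot> (w \<odot> \<epsilon>))"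
    using w \<iota>_\<epsilon>[OF eB_closed] by (simp add: L.mul_assoc[symmetric] CL_closed)
  also have "\<dots> = \<iota> (amul B eB b)" using b \<iota>_mul eB_closed by simp
  finally show ?thesis using b unfolding eA_def by blast
qed

lemma mul_through_\<epsilon>: "x \<in> P \<Longrightarrow> r \<in> CL \<Longrightarrow> x \<odot> r \<odot> \<epsilon> = x \<odot> \<epsilon> \<odot> r \<odot> \<epsilon>"
proof -
  assume x: "x \<in> P" and r: "r \<in> CL"
  have xC: "x \<in> CL" using x P_closed by blast
  have "x \<odot> r \<odot> \<epsilon> = x \<odot> (\<epsilon> \<oplus> \<epsilon>c) \<odot> r \<odot> \<epsilon>"
    using L.add_sub_cancel[of \<epsilon> "aone L"] xC by (simp add: L.mul_one CL_closed)
  also have "\<dots> = (x \<odot> \<epsilon> \<odot> r \<odot> \<epsilon>) \<oplus> (\<epsilon> \<odot> x \<odot> \<epsilon>c \<odot> r \<odot> \<epsilon>)"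
    using xC r L.eA_mul_left[OF e_closed \<epsilon>_closed \<epsilon>_e x] by (simp add: L.distr L.distl CL_closed)
  also have "\<epsilon> \<odot> x \<odot> \<epsilon>c \<odot> r \<odot> \<epsilon> = azero L"
    using corner_gap_zero[OF xC r] xC r by (simp add: L.mul_assoc CL_closed)
  finally show ?thesis using xC r by (simp add: L.add_zero_r CL_closed)
qed

lemma corner_gap_zero_left: "x \<in> CL \<Longrightarrow> y \<in> CL \<Longrightarrow> \<epsilon> \<odot> x \<odot> \<epsilon>c \<odot> y \<odot> \<epsilon> = azero L"
  using corner_gap_zero by (simp add: L.mul_assoc CL_closed)

lemma corner_orth_zero:
  assumes u: "u \<in> CL" "u \<odot> \<epsilon> = azero L" and x: "x \<in> CL" and y: "y \<in> CL"
  shows "\<epsilon> \<odot> x \<odot> u \<odot> y \<odot> \<epsilon> = azero L"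
proof -
  have "u \<odot> \<epsilon>c = u" using u by (simp add: L.mul_sub L.mul_one L.add_zero_r L.sm_zero CL_closed)
  then have "\<epsilon> \<odot> x \<odot> u \<odot> y \<odot> \<epsilon> = \<epsilon> \<odot> (x \<odot> u) \<odot> \<epsilon>c \<odot> y \<odot> \<epsilon>"
    using u x y by (simp add: L.mul_assoc CL_closed)
  also have "\<dots> = azero L" using corner_gap_zero_left u x y CL_closed by simp
  finally show ?thesis .
qed

theorem rad_mul_orth_idem:
  assumes u: "u \<in> CL" "u \<odot> u = u" "u \<odot> \<epsilon> = azero L"
  shows "{x \<odot> u | x. x \<in> mod_rad L P} = {x \<odot> u | x. x \<in> P}"
proof
  show "{x \<odot> u | x. x \<in> mod_rad L P} \<subseteq> {x \<odot> u | x. x \<in> P}" using rad_subset[of L P] by blast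
next
  show "{x \<odot> u | x. x \<in> P} \<subseteq> {x \<odot> u | x. x \<in> mod_rad L P}"
  proof
    fix y assume "y \<in> {x \<odot> u | x. x \<in> P}"
    then obtain x where x: "x \<in> P" and y: "y = x \<odot> u" by blast
    have xC: "x \<in> CL" using x P_closed by blast
    have "x \<odot> u \<in> mod_rad L P"
    proof (rule L.mem_rad_eA[OF e_closed e_idem L.eA_mul_closed[OF e_closed x u(1)]])
      fix r assume r: "r \<in> CL"
      have "x \<odot> u \<odot> r \<odot> e = \<epsilon> \<odot> x \<odot> u \<odot> r \<odot> \<epsilon> \<odot> e"
        using L.eA_mul_left[OF e_closed \<epsilon>_closed \<epsilon>_e x] xC u r by (simp add: L.mul_assoc CL_closed \<epsilon>_e)
      also have "\<dots> = azero L" using corner_orth_zero[OF u(1) u(3) xC r] by (simp add: L.zero_mul e_closed)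
      finally show "x \<odot> u \<odot> r \<odot> e = azero L" .
    qed
    moreover have "y = (x \<odot> u) \<odot> u" using y xC u by (simp add: L.mul_assoc)
    ultimately show "y \<in> {x \<odot> u | x. x \<in> mod_rad L P}" by blast
  qed
qed

text \<open>Submodules of \<open>P\<close> and of \<open>eB B\<close> correspond through \<open>x \<mapsto> x \<epsilon>\<close>; \<open>lift N N'\<close> is the
  submodule of \<open>P\<close> generated by \<open>N\<close> together with the lift of \<open>N'\<close>.\<close>

definition lift :: "'x set \<Rightarrow> 'y set \<Rightarrow> 'x set" where
  "lift N N' = {y \<in> P. \<exists>n\<in>N. \<exists>b\<in>N'. y \<odot> \<epsilon> = (n \<odot> \<epsilon>) \<oplus> \<iota> b}"

definition restr :: "'x set \<Rightarrow> 'y set" where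
  "restr N = {b \<in> PB. \<iota> b \<in> N}"

lemma submod_restr:
  assumes N: "submod L P N" shows "submod B PB (restr N)"
proof -
  note ND = submodE[OF N] and PBD = submodE[OF B.submod_eA[OF eB_closed]]
  have "restr N \<subseteq> PB" by (auto simp: restr_def)
  moreover have "azero B \<in> restr N" unfolding restr_def using PBD(2) \<iota>_zero ND(2) by simp
  moreover have "aadd B a b \<in> restr N" if ab: "a \<in> restr N" "b \<in> restr N" for a b
  proof -
    have h: "a \<in> PB" "b \<in> PB" "\<iota> a \<in> N" "\<iota> b \<in> N" using ab by (auto simp: restr_def)
    then have "\<iota> (aadd B a b) \<in> N" using ND(3) \<iota>_add PB_closed by (simp add: subset_iff)
    then show ?thesis unfolding restr_def using PBD(3)[OF h(1,2)] by simp
  qed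
  moreover have "amul B a r \<in> restr N" if a: "a \<in> restr N" and r: "r \<in> acar B" for a r
  proof -
    have h: "a \<in> PB" "\<iota> a \<in> N" using a by (auto simp: restr_def)
    then have "\<iota> (amul B a r) \<in> N" using ND(4) \<iota>_mul \<iota>_closed r PB_closed by (simp add: subset_iff)
    then show ?thesis unfolding restr_def using PBD(4)[OF h(1) r] by simp
  qed
  ultimately show ?thesis by (rule submodI)
qed

lemma submod_lift:
  assumes N: "submod L P N" and N': "submod B PB N'" shows "submod L P (lift N N')"
proof -
  note ND = submodE[OF N] and N'D = submodE[OF N'] and PD = submodE[OF L.submod_eA[OF e_closed]]
  have NC: "n \<in> CL" if "n \<in> N" for n using that ND(1) P_closed by blast
  have N'C: "b \<in> acar B" if "b \<in> N'" for b using that N'D(1) PB_closed by blast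
  have "lift N N' \<subseteq> P" by (auto simp: lift_def)
  moreover have "azero L \<in> lift N N'"
  proof -
    have "azero L \<odot> \<epsilon> = (azero L \<odot> \<epsilon>) \<oplus> \<iota> (azero B)"
      using \<iota>_zero by (simp add: L.zero_mul L.add_zero_r CL_closed)
    then show ?thesis unfolding lift_def using ND(2) N'D(2) PD(2) by blast
  qed
  moreover have "x \<oplus> y \<in> lift N N'" if xy: "x \<in> lift N N'" "y \<in> lift N N'" for x y
  proof -
    obtain n b n' b' where h: "x \<in> P" "y \<in> P" "n \<in> N" "b \<in> N'" "n' \<in> N" "b' \<in> N'"
      "x \<odot> \<epsilon> = (n \<odot> \<epsilon>) \<oplus> \<iota> b" "y \<odot> \<epsilon> = (n' \<odot> \<epsilon>) \<oplus> \<iota> b'"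
      using xy unfolding lift_def by blast
    have C: "x \<in> CL" "y \<in> CL" "n \<in> CL" "n' \<in> CL" "b \<in> acar B" "b' \<in> acar B"
      using h P_closed NC N'C by auto
    have "(x \<oplus> y) \<odot> \<epsilon> = ((n \<oplus> n') \<odot> \<epsilon>) \<oplus> \<iota> (aadd B b b')"
      using h C \<iota>_closed by (simp add: L.distr \<iota>_add CL_closed L.add_add_swap)
    then show ?thesis unfolding lift_def using PD(3)[OF h(1,2)] ND(3)[OF h(3,5)] N'D(3)[OF h(4,6)] by blast
  qed
  moreover have "x \<odot> r \<in> lift N N'" if x: "x \<in> lift N N'" and r: "r \<in> CL" for x r
  proof -
    obtain n b where h: "x \<in> P" "n \<in> N" "b \<in> N'" "x \<odot> \<epsilon> = (n \<odot> \<epsilon>) \<oplus> \<iota> b"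
      using x unfolding lift_def by blast
    have C: "x \<in> CL" "n \<in> CL" "b \<in> acar B" using h P_closed NC N'C by auto
    obtain c where c: "c \<in> acar B" "\<epsilon> \<odot> (r \<odot> \<epsilon>) = \<iota> c" using corner_in_image[OF r] by blast
    have "x \<odot> r \<odot> \<epsilon> = ((n \<odot> \<epsilon> \<odot> r) \<odot> \<epsilon>) \<oplus> (\<iota> b \<odot> r \<odot> \<epsilon>)"
      using mul_through_\<epsilon>[OF h(1) r] h(4) C r \<iota>_closed by (simp add: L.distr CL_closed)
    also have "\<iota> b \<odot> r \<odot> \<epsilon> = \<iota> b \<odot> (\<epsilon> \<odot> (r \<odot> \<epsilon>))"
      using \<iota>_\<epsilon>[OF C(3)] \<iota>_closed[OF C(3)] r by (simp add: L.mul_assoc[symmetric] CL_closed)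
    also have "\<dots> = \<iota> (amul B b c)" using C c \<iota>_mul by simp
    finally have "x \<odot> r \<odot> \<epsilon> = (n \<odot> \<epsilon> \<odot> r) \<odot> \<epsilon> \<oplus> \<iota> (amul B b c)" .
    moreover have "n \<odot> \<epsilon> \<odot> r \<in> N" using ND(4) h(2) r \<epsilon>_closed by blast
    ultimately show ?thesis unfolding lift_def using PD(4)[OF h(1) r] N'D(4)[OF h(3) c(1)] by blast
  qed
  ultimately show ?thesis by (rule submodI)
qed

lemma subset_lift:
  assumes N: "submod L P N" and N': "submod B PB N'" shows "N \<subseteq> lift N N'"
proof
  fix y assume y: "y \<in> N"
  have yC: "y \<in> CL" using y submodE(1)[OF N] P_closed by blast
  have "y \<odot> \<epsilon> = (y \<odot> \<epsilon>) \<oplus> \<iota> (azero B)" using yC \<iota>_zero by (simp add: L.add_zero_r CL_closed)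
  then show "y \<in> lift N N'" unfolding lift_def using y submodE(1)[OF N] submodE(2)[OF N'] by blast
qed

lemma mem_lift_zero:
  assumes N': "N' \<subseteq> PB" shows "y \<in> lift {azero L} N' \<longleftrightarrow> y \<in> P \<and> (\<exists>b\<in>N'. y \<odot> \<epsilon> = \<iota> b)"
proof -
  have "(azero L \<odot> \<epsilon>) \<oplus> \<iota> b = \<iota> b" if "b \<in> N'" for b
  proof -
    have "b \<in> acar B" using that N' PB_closed by blast
    then show ?thesis by (simp add: L.zero_mul L.add_zero \<iota>_closed CL_closed)
  qed
  then show ?thesis unfolding lift_def by auto
qed

lemma submod_zero: "submod L P {azero L}"
  by (rule submodI) (simp_all add: L.add_zero L.zero_mul L.zero_closed submodE(2)[OF L.submod_eA[OF e_closed]])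

lemma subset_lift_restr:
  assumes N: "submod L P N" shows "N \<subseteq> lift {azero L} (restr N)"
proof
  fix y assume y: "y \<in> N"
  have yP: "y \<in> P" using y submodE(1)[OF N] by blast
  obtain a where a: "a \<in> PB" "y \<odot> \<epsilon> = \<iota> a" using P_\<epsilon>_in_image[OF yP] by blast
  have "a \<in> restr N" using a submodE(4)[OF N y \<epsilon>_closed] unfolding restr_def by auto
  then show "y \<in> lift {azero L} (restr N)" using mem_lift_zero[of "restr N"] yP a by (auto simp: restr_def)
qed

lemma subset_restr_lift:
  assumes "N' \<subseteq> PB" and "azero L \<in> N" shows "N' \<subseteq> restr (lift N N')"
proof
  fix b assume b: "b \<in> N'"
  have bP: "b \<in> PB" and bC: "b \<in> acar B" using b assms(1) PB_closed by auto
  have "\<iota> b \<odot> \<epsilon> = (azero L \<odot> \<epsilon>) \<oplus> \<iota> b"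
    using \<iota>_\<epsilon>[OF bC] \<iota>_closed[OF bC] by (simp add: L.zero_mul L.add_zero CL_closed)
  then show "b \<in> restr (lift N N')" unfolding lift_def restr_def using \<iota>_PB[OF bP] bP assms(2) b by blast
qed

lemma eq_P_if_restr_full:
  assumes N: "submod L P N" and full: "restr N = PB" and ker: "{y \<in> P. y \<odot> \<epsilon> = azero L} \<subseteq> N"
  shows "N = P"
proof -
  have "y \<in> N" if yP: "y \<in> P" for y
  proof -
    have yC: "y \<in> CL" using yP P_closed by blast
    obtain a where a: "a \<in> PB" "y \<odot> \<epsilon> = \<iota> a" using P_\<epsilon>_in_image[OF yP] by blast
    have "y \<odot> \<epsilon> \<in> N" using a full unfolding restr_def by auto
    moreover have "y \<odot> \<epsilon>c \<odot> \<epsilon> = azero L" using yC \<epsilon>c_\<epsilon> by (simp add: L.mul_assoc CL_closed L.mul_zero)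
    then have "y \<odot> \<epsilon>c \<in> N" using ker L.eA_mul_closed[OF e_closed yP \<epsilon>c_closed] by blast
    ultimately show ?thesis using submodE(3)[OF N] split_by_\<epsilon>[OF yC] by metis
  qed
  then show ?thesis using submodE(1)[OF N] by blast
qed

lemma eq_PB_if_lift_full:
  assumes N: "submod L P N" and N': "submod B PB N'" and sub: "restr N \<subseteq> N'" and full: "lift N N' = P"
  shows "N' = PB"
proof -
  have "m \<in> N'" if m: "m \<in> PB" for m
  proof -
    have mC: "m \<in> acar B" using m PB_closed by blast
    have "\<iota> m \<in> lift N N'" using full \<iota>_PB[OF m] by simp
    then obtain n b where h: "n \<in> N" "b \<in> N'" "\<iota> m \<odot> \<epsilon> = (n \<odot> \<epsilon>) \<oplus> \<iota> b"
      unfolding lift_def by blast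
    have C: "n \<in> CL" "b \<in> PB" "b \<in> acar B"
      using h(1,2) submodE(1)[OF N] submodE(1)[OF N'] P_closed PB_closed by auto
    have "L.sub (\<iota> m) (\<iota> b) = n \<odot> \<epsilon>"
      by (rule L.add_eq_sub) (use h(3) C mC \<iota>_closed \<iota>_\<epsilon>[OF mC] in \<open>auto simp: CL_closed\<close>)
    then have "\<iota> (B.sub m b) \<in> N" using submodE(4)[OF N h(1) \<epsilon>_closed] \<iota>_sub[OF mC C(3)] by simp
    then have "B.sub m b \<in> N'" using B.eA_sub_closed[OF eB_closed m C(2)] sub unfolding restr_def by blast
    then have "aadd B (B.sub m b) b \<in> N'" using submodE(3)[OF N'] h(2) by blast
    moreover have "aadd B (B.sub m b) b = m" using mC C by (simp add: B.add_assoc B.sm_closed B.add_neg B.add_zero_r)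
    ultimately show ?thesis by simp
  qed
  then show ?thesis using submodE(1)[OF N'] by blast
qed

lemma maxsub_lift:
  assumes N': "maxsub B PB N'" shows "maxsub L P (lift {azero L} N')"
proof -
  note N'D = maxsubE[OF N'] and N'S = submodE[OF maxsubE(1)[OF N']]
  have mem: "y \<in> lift {azero L} N' \<longleftrightarrow> y \<in> P \<and> (\<exists>b\<in>N'. y \<odot> \<epsilon> = \<iota> b)" for y
    by (rule mem_lift_zero[OF N'S(1)])
  have restr_lift: "restr (lift {azero L} N') = N'"
  proof
    show "N' \<subseteq> restr (lift {azero L} N')" by (rule subset_restr_lift[OF N'S(1)]) simp
    show "restr (lift {azero L} N') \<subseteq> N'"
    proof
      fix b assume "b \<in> restr (lift {azero L} N')"
      then have bP: "b \<in> PB" and "\<iota> b \<in> lift {azero L} N'" by (auto simp: restr_def)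
      then obtain b' where b': "b' \<in> N'" "\<iota> b \<odot> \<epsilon> = \<iota> b'" using mem by blast
      have bC: "b \<in> acar B" and b'C: "b' \<in> acar B" using bP b'(1) N'S(1) PB_closed by auto
      have "b = b'" using \<iota>_inj[OF bC b'C] \<iota>_\<epsilon>[OF bC] b'(2) by simp
      then show "b \<in> N'" using b' by simp
    qed
  qed
  have proper: "lift {azero L} N' \<noteq> P"
  proof
    assume eq: "lift {azero L} N' = P"
    have "restr P = PB" unfolding restr_def using \<iota>_PB by auto
    then show False using restr_lift eq N'D(2) by simp
  qed
  have "N2 = lift {azero L} N' \<or> N2 = P" if N2: "submod L P N2" "lift {azero L} N' \<subseteq> N2" for N2
  proof -
    have "N' \<subseteq> restr N2" using restr_lift N2(2) unfolding restr_def by blast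
    then consider "restr N2 = N'" | "restr N2 = PB" using N'D(3) submod_restr[OF N2(1)] by blast
    then show ?thesis
    proof cases
      case 1
      then show ?thesis using subset_lift_restr[OF N2(1)] N2(2) by blast
    next
      case 2
      have "{y \<in> P. y \<odot> \<epsilon> = azero L} \<subseteq> lift {azero L} N'"
      proof
        fix y assume "y \<in> {y \<in> P. y \<odot> \<epsilon> = azero L}"
        then show "y \<in> lift {azero L} N'" using mem[of y] N'S(2) \<iota>_zero by force
      qed
      then show ?thesis using eq_P_if_restr_full[OF N2(1) 2] N2(2) by blast
    qed
  qed
  then show ?thesis using submod_lift[OF submod_zero N'D(1)] proper by (simp add: maxsub_def)
qed

lemma maxsub_restrict:
  assumes N: "maxsub L P N" shows "maxsub B PB (restr N)"
proof -
  note ND = maxsubE[OF N] and NS = submodE[OF maxsubE(1)[OF N]]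
  have proper: "restr N \<noteq> PB"
  proof
    assume "restr N = PB"
    then have "eB \<in> restr N" using B.mem_eA_self[OF eB_closed] by simp
    then have "e \<in> N" by (simp add: restr_def)
    then show False using L.submod_eA_eqI[OF ND(1)] ND(2) by blast
  qed
  have "N2' = restr N \<or> N2' = PB" if N2': "submod B PB N2'" "restr N \<subseteq> N2'" for N2'
  proof -
    consider "lift N N2' = N" | "lift N N2' = P"
      using ND(3)[OF submod_lift[OF ND(1) N2'(1)] subset_lift[OF ND(1) N2'(1)]] by blast
    then show ?thesis
    proof cases
      case 1
      then show ?thesis using subset_restr_lift[OF submodE(1)[OF N2'(1)] NS(2)] N2'(2) by simp
    next
      case 2
      then show ?thesis using eq_PB_if_lift_full[OF ND(1) N2'] by blast
    qed
  qed
  then show ?thesis using submod_restr[OF ND(1)] proper by (simp add: maxsub_def)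
qed

theorem rad_mul_\<epsilon>: "{x \<odot> \<epsilon> | x. x \<in> mod_rad L P} = \<iota> ` mod_rad B PB"
proof
  show "{x \<odot> \<epsilon> | x. x \<in> mod_rad L P} \<subseteq> \<iota> ` mod_rad B PB"
  proof
    fix y assume "y \<in> {x \<odot> \<epsilon> | x. x \<in> mod_rad L P}"
    then obtain x where x: "x \<in> mod_rad L P" "y = x \<odot> \<epsilon>" by blast
    obtain a where a: "a \<in> PB" "x \<odot> \<epsilon> = \<iota> a" using P_\<epsilon>_in_image rad_subset[of L P] x(1) by blast
    have "a \<in> mod_rad B PB"
    proof (rule mem_radI[OF a(1)])
      fix N' assume N': "maxsub B PB N'"
      have N'S: "N' \<subseteq> PB" using submodE(1)[OF maxsubE(1)[OF N']] .
      obtain n where "n \<in> N'" "x \<odot> \<epsilon> = \<iota> n"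
        using mem_radD[OF x(1) maxsub_lift[OF N']] mem_lift_zero[OF N'S] by blast
      then show "a \<in> N'" using \<iota>_inj a N'S PB_closed by (metis subsetD)
    qed
    then show "y \<in> \<iota> ` mod_rad B PB" using x a by auto
  qed
next
  show "\<iota> ` mod_rad B PB \<subseteq> {x \<odot> \<epsilon> | x. x \<in> mod_rad L P}"
  proof
    fix y assume "y \<in> \<iota> ` mod_rad B PB"
    then obtain a where a: "a \<in> mod_rad B PB" "y = \<iota> a" by blast
    have aP: "a \<in> PB" using a(1) rad_subset[of B PB] by blast
    have "\<iota> a \<in> mod_rad L P"
    proof (rule mem_radI[OF \<iota>_PB[OF aP]])
      fix N assume "maxsub L P N"
      then show "\<iota> a \<in> N" using mem_radD[OF a(1) maxsub_restrict] by (auto simp: restr_def)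
    qed
    moreover have "y = \<iota> a \<odot> \<epsilon>" using a(2) \<iota>_\<epsilon> aP PB_closed by auto
    ultimately show "y \<in> {x \<odot> \<epsilon> | x. x \<in> mod_rad L P}" by blast
  qed
qed

end

section \<open>The generalized bound path algebra\<close>

locale gbpa_setting =
  fixes \<Gamma> :: "('v, 'e) quiver" and \<Sigma> :: "'v \<Rightarrow> ('w, 'f) quiver"
    and \<Omega> :: "'v \<Rightarrow> ('w \<times> 'f list \<Rightarrow> 'k::field) set" and I :: "('v \<times> 'e list \<Rightarrow> 'k) set"
  assumes fin_Gamma: "finite_quiver \<Gamma>" and acyc_Gamma: "acyclic_quiver \<Gamma>"
    and vertex_algs: "\<forall>l\<in>qV \<Gamma>. finite_quiver (\<Sigma> l) \<and> admissible (\<Sigma> l) (\<Omega> l)"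
    and relations_I: "\<forall>\<rho>\<in>I. is_relation \<Gamma> \<rho>"
begin

abbreviation "Al \<equiv> Aalg \<Sigma> \<Omega>"

lemma Omega_kalg_ideal: "l \<in> qV \<Gamma> \<Longrightarrow> kalg_ideal (path_alg (\<Sigma> l)) (\<Omega> l)"
  unfolding kalg_ideal_def kalg_ideal_axioms_def
  using vertex_algs path_alg_kalg by (auto simp: admissible_def)

lemma vertex_alg_kalg: "l \<in> qV \<Gamma> \<Longrightarrow> kalg (Al l)"
  unfolding Aalg_def using kalg_ideal.quot_kalg[OF Omega_kalg_ideal] by blast

sublocale quiver_algebras \<Gamma> Al
  by (rule quiver_algebras.intro[OF fin_Gamma vertex_alg_kalg])

abbreviation "KGA \<equiv> kGA \<Gamma> Al"
abbreviation "IA \<equiv> ideal_gen KGA (AI \<Gamma> \<Sigma> \<Omega> I)"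
abbreviation "\<Lambda> \<equiv> gbpa \<Gamma> \<Sigma> \<Omega> I"

lemma KGA_quot: "KGA = quot FA MLspan" by (simp add: kGA_def)

sublocale KI: kalg_ideal FA MLspan
  unfolding kalg_ideal_def kalg_ideal_axioms_def using F.kalg_axioms MLspan_ideal by simp

sublocale K: kalg KGA unfolding KGA_quot by (rule KI.quot_kalg)

definition cls where "cls f = cos FA MLspan f"

lemma cls_closed: "f \<in> acar FA \<Longrightarrow> cls f \<in> acar KGA"
  by (simp add: KGA_quot KI.quot_carrier cls_def)

lemma KGA_carrier: "acar KGA = cls ` acar FA"
  by (simp add: KGA_quot KI.quot_carrier cls_def image_def)

lemma cls_add: "f \<in> acar FA \<Longrightarrow> g \<in> acar FA \<Longrightarrow> cls (aadd FA f g) = aadd KGA (cls f) (cls g)"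
  by (simp add: KGA_quot KI.quot_add cls_def)
lemma cls_mul: "f \<in> acar FA \<Longrightarrow> g \<in> acar FA \<Longrightarrow> cls (amul FA f g) = amul KGA (cls f) (cls g)"
  by (simp add: KGA_quot KI.quot_mul cls_def)
lemma cls_sm: "f \<in> acar FA \<Longrightarrow> cls (asmul FA c f) = asmul KGA c (cls f)"
  by (simp add: KGA_quot KI.quot_sm cls_def)
lemma cls_zero: "cls (azero FA) = azero KGA" by (simp add: KGA_quot KI.quot_zero cls_def)
lemma cls_one: "cls (aone FA) = aone KGA" by (simp add: KGA_quot KI.quot_one cls_def)
lemma cls_eq_iff: "f \<in> acar FA \<Longrightarrow> g \<in> acar FA \<Longrightarrow> cls f = cls g \<longleftrightarrow> F.sub f g \<in> MLspan"
  by (simp add: cls_def KI.coset_eq_iff)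

lemma quot_carrier_eq: "acar (quot A J) = cos A J ` acar A" by (simp add: quot_def)

lemma rel_word_valid:
  assumes p: "is_path \<Gamma> p" and g: "\<And>r. 0 < r \<Longrightarrow> r < length (snd p) \<Longrightarrow> is_path (\<Sigma> (vtx \<Gamma> p r)) (g r)"
  shows "valid_word \<Gamma> Al (rel_word \<Gamma> \<Sigma> \<Omega> p g)"
proof -
  define f where "f = (\<lambda>r. if r = 0 \<or> r = length (snd p) then aone (Al (vtx \<Gamma> p r))
        else cos (path_alg (\<Sigma> (vtx \<Gamma> p r))) (\<Omega> (vtx \<Gamma> p r)) (delta (g r)))"
  have rw: "rel_word \<Gamma> \<Sigma> \<Omega> p g = (p, map f [0..<Suc (length (snd p))])"
    by (simp add: rel_word_def f_def)
  have ent: "f r \<in> acar (Al (vtx \<Gamma> p r))" if r: "r \<le> length (snd p)" for r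
  proof -
    have V: "vtx \<Gamma> p r \<in> qV \<Gamma>" using vtx_in_vertices[OF fin_Gamma p r] .
    show ?thesis
    proof (cases "r = 0 \<or> r = length (snd p)")
      case True then show ?thesis using kalg.one_closed[OF vertex_alg_kalg[OF V]] by (simp add: f_def)
    next
      case False
      then have "is_path (\<Sigma> (vtx \<Gamma> p r)) (g r)" using g r by simp
      then have "(delta (g r) :: _ \<Rightarrow> 'k) \<in> acar (path_alg (\<Sigma> (vtx \<Gamma> p r)))"
        unfolding path_alg_def by (intro salg_delta_closed) simp
      then show ?thesis using False by (simp add: f_def Aalg_def quot_carrier_eq imageI)
    qed
  qed
  have "\<forall>r\<le>length (snd p). map f [0..<Suc (length (snd p))] ! r \<in> acar (Al (vtx \<Gamma> p r))"
  proof (intro allI impI)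
    fix r assume r: "r \<le> length (snd p)"
    have "map f [0..<Suc (length (snd p))] ! r = f r" using r by (simp add: nth_map_upt del: upt_Suc)
    then show "map f [0..<Suc (length (snd p))] ! r \<in> acar (Al (vtx \<Gamma> p r))" using ent[OF r] by simp
  qed
  then show ?thesis unfolding rw valid_word_def using p by simp
qed

lemma AI_rep_closed:
  assumes rho: "\<rho> \<in> I" and G: "\<forall>p\<in>fsupp \<rho>. \<forall>r. 0 < r \<and> r < length (snd p) \<longrightarrow> is_path (\<Sigma> (vtx \<Gamma> p r)) (G p r)"
  shows "(\<lambda>x. \<Sum>p\<in>fsupp \<rho>. if x = rel_word \<Gamma> \<Sigma> \<Omega> p (G p) then \<rho> p else 0) \<in> acar FA"
proof -
  have rC: "\<rho> \<in> acar (path_alg \<Gamma>)" using relations_I rho by (simp add: is_relation_def)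
  then have fin: "finite (fsupp \<rho>)" and paths: "fsupp \<rho> \<subseteq> {p. is_path \<Gamma> p}"
    by (auto simp: path_alg_def salg_simps)
  let ?f = "(\<lambda>x. \<Sum>p\<in>fsupp \<rho>. if x = rel_word \<Gamma> \<Sigma> \<Omega> p (G p) then \<rho> p else 0)"
  have s: "fsupp ?f \<subseteq> (\<lambda>p. rel_word \<Gamma> \<Sigma> \<Omega> p (G p)) ` fsupp \<rho>"
  proof
    fix x assume x: "x \<in> fsupp ?f"
    show "x \<in> (\<lambda>p. rel_word \<Gamma> \<Sigma> \<Omega> p (G p)) ` fsupp \<rho>"
    proof (rule ccontr)
      assume "x \<notin> (\<lambda>p. rel_word \<Gamma> \<Sigma> \<Omega> p (G p)) ` fsupp \<rho>"
      then have "?f x = 0" by (intro sum.neutral) auto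
      then show False using x by (simp add: fsupp_iff)
    qed
  qed
  have v: "(\<lambda>p. rel_word \<Gamma> \<Sigma> \<Omega> p (G p)) ` fsupp \<rho> \<subseteq> {w. valid_word \<Gamma> Al w}"
  proof
    fix x assume "x \<in> (\<lambda>p. rel_word \<Gamma> \<Sigma> \<Omega> p (G p)) ` fsupp \<rho>"
    then obtain p where p: "p \<in> fsupp \<rho>" "x = rel_word \<Gamma> \<Sigma> \<Omega> p (G p)" by blast
    have "valid_word \<Gamma> Al (rel_word \<Gamma> \<Sigma> \<Omega> p (G p))"
      by (rule rel_word_valid) (use p paths G in auto)
    then show "x \<in> {w. valid_word \<Gamma> Al w}" using p by simp
  qed
  have "finite (fsupp ?f)" using finite_subset[OF s finite_imageI[OF fin]] .
  then show ?thesis unfolding free_alg_simps using s v by blast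
qed

lemma AI_closed: "AI \<Gamma> \<Sigma> \<Omega> I \<subseteq> acar KGA"
proof
  fix X assume "X \<in> AI \<Gamma> \<Sigma> \<Omega> I"
  then obtain \<rho> G where h: "\<rho> \<in> I" "\<forall>p\<in>fsupp \<rho>. \<forall>r. 0 < r \<and> r < length (snd p) \<longrightarrow> is_path (\<Sigma> (vtx \<Gamma> p r)) (G p r)"
    "X = cls (\<lambda>x. \<Sum>p\<in>fsupp \<rho>. if x = rel_word \<Gamma> \<Sigma> \<Omega> p (G p) then \<rho> p else 0)"
    unfolding AI_def cls_def by blast
  show "X \<in> acar KGA" using h(3) cls_closed AI_rep_closed[OF h(1,2)] by simp
qed

sublocale LI: kalg_ideal KGA IA
  unfolding kalg_ideal_def kalg_ideal_axioms_def using K.kalg_axioms K.ideal_gen_ideal[OF AI_closed] by simp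

lemma \<Lambda>_quot: "\<Lambda> = quot KGA IA" by (simp add: gbpa_def)

sublocale Lm: kalg \<Lambda> unfolding \<Lambda>_quot by (rule LI.quot_kalg)

definition \<pi> where "\<pi> f = cos KGA IA (cls f)"

lemma \<Lambda>_carrier: "acar \<Lambda> = \<pi> ` acar FA"
  by (auto simp: \<Lambda>_quot LI.quot_carrier \<pi>_def KGA_carrier)
lemma \<pi>_closed: "f \<in> acar FA \<Longrightarrow> \<pi> f \<in> acar \<Lambda>" using \<Lambda>_carrier by blast
lemma \<pi>_add: "f \<in> acar FA \<Longrightarrow> g \<in> acar FA \<Longrightarrow> \<pi> (aadd FA f g) = aadd \<Lambda> (\<pi> f) (\<pi> g)"
  by (simp add: \<pi>_def cls_add cls_closed \<Lambda>_quot LI.quot_add)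
lemma \<pi>_mul: "f \<in> acar FA \<Longrightarrow> g \<in> acar FA \<Longrightarrow> \<pi> (amul FA f g) = amul \<Lambda> (\<pi> f) (\<pi> g)"
  by (simp add: \<pi>_def cls_mul cls_closed \<Lambda>_quot LI.quot_mul)
lemma \<pi>_sm: "f \<in> acar FA \<Longrightarrow> \<pi> (asmul FA c f) = asmul \<Lambda> c (\<pi> f)"
  by (simp add: \<pi>_def cls_sm cls_closed \<Lambda>_quot LI.quot_sm)
lemma \<pi>_zero: "\<pi> (azero FA) = azero \<Lambda>" by (simp add: \<pi>_def cls_zero \<Lambda>_quot LI.quot_zero)
lemma \<pi>_one: "\<pi> (aone FA) = aone \<Lambda>" by (simp add: \<pi>_def cls_one \<Lambda>_quot LI.quot_one)

lemma lcls_\<pi>: "lcls \<Gamma> \<Sigma> \<Omega> I w = \<pi> (delta w)"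
  by (simp add: lcls_def wcls_def \<pi>_def cls_def)

end

section \<open>Vertex algebras and vertex units in \<open>\<Lambda>\<close>\<close>

context gbpa_setting begin

abbreviation "emb l a \<equiv> iota \<Gamma> \<Sigma> \<Omega> I l a"
abbreviation "vunit l \<equiv> unit_at \<Gamma> \<Sigma> \<Omega> I l"

definition "vword l a = ((l, []), [a])"

lemma vword_valid: "l \<in> qV \<Gamma> \<Longrightarrow> a \<in> acar (Al l) \<Longrightarrow> valid_word \<Gamma> Al (vword l a)"
  by (simp add: vword_def valid_word_def is_path_def vtx_def)

lemma emb_\<pi>: "emb l a = \<pi> (delta (vword l a))" by (simp add: iota_def lcls_\<pi> vword_def)
lemma vunit_\<pi>: "vunit l = \<pi> (delta (unit_word l))" by (simp add: unit_at_def emb_\<pi> vword_def unit_word_def)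

lemma emb_closed: "l \<in> qV \<Gamma> \<Longrightarrow> a \<in> acar (Al l) \<Longrightarrow> emb l a \<in> acar \<Lambda>"
  by (simp add: emb_\<pi> \<pi>_closed delta_closed vword_valid)

lemma vunit_closed: "l \<in> qV \<Gamma> \<Longrightarrow> vunit l \<in> acar \<Lambda>"
  by (simp add: vunit_\<pi> \<pi>_closed delta_closed unit_word_valid)

lemma emb_add:
  assumes l: "l \<in> qV \<Gamma>" and a: "a \<in> acar (Al l)" and b: "b \<in> acar (Al l)"
  shows "emb l (aadd (Al l) a b) = aadd \<Lambda> (emb l a) (emb l b)"
proof -
  interpret V: kalg "Al l" using vertex_alg_kalg[OF l] .
  have v: "valid_word \<Gamma> Al ((l, []), [a])" using vword_valid[OF l a] by (simp add: vword_def)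
  have g: "(\<lambda>x. delta (vword l (aadd (Al l) a b)) x - delta (vword l a) x - delta (vword l b) x) \<in> MLgens"
    using add_gen_in_MLgens[OF v, of 0 a b] a b by (simp add: vword_def vtx_def)
  have C: "delta (vword l (aadd (Al l) a b)) \<in> acar FA" "delta (vword l a) \<in> acar FA" "delta (vword l b) \<in> acar FA"
    using delta_closed vword_valid l a b V.add_closed by auto
  have "F.sub (delta (vword l (aadd (Al l) a b))) (aadd FA (delta (vword l a)) (delta (vword l b)))
     = (\<lambda>x. delta (vword l (aadd (Al l) a b)) x - delta (vword l a) x - delta (vword l b) x)"
    by (simp add: free_alg_simps algebra_simps)
  then have "cls (delta (vword l (aadd (Al l) a b))) = cls (aadd FA (delta (vword l a)) (delta (vword l b)))"
    using cls_eq_iff C F.add_closed g MLgens_in_span by simp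
  then have "\<pi> (delta (vword l (aadd (Al l) a b))) = \<pi> (aadd FA (delta (vword l a)) (delta (vword l b)))"
    by (simp add: \<pi>_def)
  then show ?thesis using C by (simp add: emb_\<pi> \<pi>_add)
qed

lemma emb_sm:
  assumes l: "l \<in> qV \<Gamma>" and a: "a \<in> acar (Al l)"
  shows "emb l (asmul (Al l) c a) = asmul \<Lambda> c (emb l a)"
proof -
  interpret V: kalg "Al l" using vertex_alg_kalg[OF l] .
  have v: "valid_word \<Gamma> Al ((l, []), [a])" using vword_valid[OF l a] by (simp add: vword_def)
  have g: "(\<lambda>x. delta (vword l (asmul (Al l) c a)) x - c * delta (vword l a) x) \<in> MLgens"
    using sm_gen_in_MLgens[OF v, of 0 a c] a by (simp add: vword_def vtx_def)
  have C: "delta (vword l (asmul (Al l) c a)) \<in> acar FA" "delta (vword l a) \<in> acar FA"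
    using delta_closed vword_valid l a V.sm_closed by auto
  have "F.sub (delta (vword l (asmul (Al l) c a))) (asmul FA c (delta (vword l a)))
     = (\<lambda>x. delta (vword l (asmul (Al l) c a)) x - c * delta (vword l a) x)"
    by (simp add: free_alg_simps algebra_simps)
  then have "cls (delta (vword l (asmul (Al l) c a))) = cls (asmul FA c (delta (vword l a)))"
    using cls_eq_iff C F.sm_closed g MLgens_in_span by simp
  then have "\<pi> (delta (vword l (asmul (Al l) c a))) = \<pi> (asmul FA c (delta (vword l a)))"
    by (simp add: \<pi>_def)
  then show ?thesis using C by (simp add: emb_\<pi> \<pi>_sm)
qed

lemma emb_mul:
  assumes l: "l \<in> qV \<Gamma>" and a: "a \<in> acar (Al l)" and b: "b \<in> acar (Al l)"
  shows "emb l (amul (Al l) a b) = amul \<Lambda> (emb l a) (emb l b)"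
proof -
  have "wprod \<Gamma> Al (vword l a) (vword l b) = Some (vword l (amul (Al l) a b))"
    by (simp add: wprod_def vword_def pend_def)
  then have "amul FA (delta (vword l a)) (delta (vword l b)) = delta (vword l (amul (Al l) a b))"
    by (simp add: delta_mul)
  then show ?thesis using delta_closed vword_valid l a b by (simp add: emb_\<pi> \<pi>_mul[symmetric])
qed

lemma emb_zero: assumes l: "l \<in> qV \<Gamma>" shows "emb l (azero (Al l)) = azero \<Lambda>"
proof -
  interpret V: kalg "Al l" using vertex_alg_kalg[OF l] .
  have "aadd \<Lambda> (emb l (azero (Al l))) (emb l (azero (Al l))) = aadd \<Lambda> (emb l (azero (Al l))) (azero \<Lambda>)"
    using emb_add[OF l V.zero_closed V.zero_closed] V.add_zero[OF V.zero_closed] Lm.add_zero_r emb_closed[OF l V.zero_closed] by simp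
  then show ?thesis using Lm.add_left_cancel emb_closed[OF l V.zero_closed] Lm.zero_closed by blast
qed

lemma vunit_idem: "l \<in> qV \<Gamma> \<Longrightarrow> amul \<Lambda> (vunit l) (vunit l) = vunit l"
proof -
  assume l: "l \<in> qV \<Gamma>"
  have "wprod \<Gamma> Al (unit_word l) (unit_word l) = Some (unit_word l)"
    using wprod_unit_l[OF unit_word_valid[OF l]] by (simp add: unit_word_def)
  then show ?thesis using delta_closed unit_word_valid l
    by (simp add: vunit_\<pi> \<pi>_mul[symmetric] delta_mul)
qed

lemma vunit_orth: "l \<in> qV \<Gamma> \<Longrightarrow> i \<in> qV \<Gamma> \<Longrightarrow> l \<noteq> i \<Longrightarrow> amul \<Lambda> (vunit l) (vunit i) = azero \<Lambda>"
proof -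
  assume l: "l \<in> qV \<Gamma>" and i: "i \<in> qV \<Gamma>" and ne: "l \<noteq> i"
  have "wprod \<Gamma> Al (unit_word l) (unit_word i) = None"
    using wprod_unit_l[OF unit_word_valid[OF i], of l] ne by (simp add: unit_word_def)
  then have "amul FA (delta (unit_word l)) (delta (unit_word i)) = azero FA" by (simp add: delta_mul free_alg_simps)
  then show ?thesis using delta_closed unit_word_valid l i
    by (simp add: vunit_\<pi> \<pi>_mul[symmetric] \<pi>_zero)
qed

lemma fsupp_free_mul: "fsupp (amul FA f g) \<subseteq> {y. \<exists>u\<in>fsupp f. \<exists>v\<in>fsupp g. wprod \<Gamma> Al u v = Some y}"
  unfolding free_alg_def by (rule salg_mul_supp)

lemma fsupp_free_valid: "f \<in> acar FA \<Longrightarrow> w \<in> fsupp f \<Longrightarrow> valid_word \<Gamma> Al w"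
  by (auto simp: free_alg_simps)

lemma fsupp_unit_mul:
  assumes f: "f \<in> acar FA"
  shows "fsupp (amul FA (delta (unit_word l)) f) \<subseteq> {v \<in> fsupp f. fst (fst v) = l}"
proof
  fix y assume "y \<in> fsupp (amul FA (delta (unit_word l)) f)"
  then obtain v where v: "v \<in> fsupp f" "wprod \<Gamma> Al (unit_word l) v = Some y" using fsupp_free_mul by fastforce
  have "valid_word \<Gamma> Al v" using fsupp_free_valid[OF f v(1)] .
  then have "y = v \<and> l = fst (fst v)" using v(2) wprod_unit_l by (auto split: if_splits)
  then show "y \<in> {v \<in> fsupp f. fst (fst v) = l}" using v(1) by auto
qed

lemma fsupp_mul_unit:
  assumes f: "f \<in> acar FA"
  shows "fsupp (amul FA f (delta (unit_word l))) \<subseteq> {v \<in> fsupp f. pend \<Gamma> (fst v) = l}"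
proof
  fix y assume "y \<in> fsupp (amul FA f (delta (unit_word l)))"
  then obtain v where v: "v \<in> fsupp f" "wprod \<Gamma> Al v (unit_word l) = Some y" using fsupp_free_mul by fastforce
  have "valid_word \<Gamma> Al v" using fsupp_free_valid[OF f v(1)] .
  then have "y = v \<and> l = pend \<Gamma> (fst v)" using v(2) wprod_unit_r by (auto split: if_splits)
  then show "y \<in> {v \<in> fsupp f. pend \<Gamma> (fst v) = l}" using v(1) by auto
qed

lemma closed_word_trivial:
  assumes "valid_word \<Gamma> Al w" "pend \<Gamma> (fst w) = fst (fst w)"
  shows "snd (fst w) = []"
  using acyc_Gamma assms valid_wordD(1)[OF assms(1)] unfolding acyclic_quiver_def by blast

lemma closed_word_vword:
  assumes "valid_word \<Gamma> Al w" "fst (fst w) = l" "pend \<Gamma> (fst w) = l"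
  shows "\<exists>a\<in>acar (Al l). w = vword l a"
proof -
  have e: "snd (fst w) = []" using closed_word_trivial assms by simp
  obtain p as where W: "w = (p, as)" by (cases w)
  have "length as = 1" using valid_wordD(2)[OF assms(1)] e W by simp
  then obtain a where as: "as = [a]" by (cases as) auto
  have "a \<in> acar (Al (vtx \<Gamma> p 0))" using valid_wordD(3)[OF assms(1), of 0] W as by simp
  then show ?thesis using W as e assms(2) by (auto simp: vword_def vtx_def prod_eq_iff)
qed

lemma vword_supported_emb:
  assumes l: "l \<in> qV \<Gamma>" and g: "g \<in> acar FA" and s: "fsupp g \<subseteq> {vword l a | a. a \<in> acar (Al l)}"
  shows "\<exists>a\<in>acar (Al l). \<pi> g = emb l a"
  using g s
proof (induction rule: free_alg_induct)
  case zero
  then show ?case using \<pi>_zero emb_zero[OF l] kalg.zero_closed[OF vertex_alg_kalg[OF l]] by auto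
next
  case (add f w c)
  interpret V: kalg "Al l" using vertex_alg_kalg[OF l] .
  obtain a where a: "a \<in> acar (Al l)" "\<pi> f = emb l a" using add.IH by blast
  obtain b where b: "b \<in> acar (Al l)" "w = vword l b" using \<open>w \<in> _\<close> by blast
  have "\<pi> (aadd FA f (asmul FA c (delta w))) = aadd \<Lambda> (emb l a) (asmul \<Lambda> c (emb l b))"
    using \<open>f \<in> acar FA\<close> delta_closed[OF \<open>valid_word \<Gamma> Al w\<close>] a b by (simp add: \<pi>_add \<pi>_sm F.sm_closed emb_\<pi>)
  also have "\<dots> = emb l (aadd (Al l) a (asmul (Al l) c b))" using a b l by (simp add: emb_add emb_sm V.sm_closed)
  finally show ?case using a b V.add_closed V.sm_closed by blast
qed

lemma \<Lambda>_rep: "x \<in> acar \<Lambda> \<Longrightarrow> \<exists>f\<in>acar FA. x = \<pi> f" using \<Lambda>_carrier by blast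

lemma vunit_corner_in_image:
  assumes i: "i \<in> qV \<Gamma>" and x: "x \<in> acar \<Lambda>"
  shows "\<exists>a\<in>acar (Al i). amul \<Lambda> (vunit i) (amul \<Lambda> x (vunit i)) = emb i a"
proof -
  obtain f where f: "f \<in> acar FA" "x = \<pi> f" using \<Lambda>_rep[OF x] by blast
  have dC: "delta (unit_word i) \<in> acar FA" using delta_closed unit_word_valid i by simp
  define g where "g = amul FA (delta (unit_word i)) (amul FA f (delta (unit_word i)))"
  have gC: "g \<in> acar FA" using f dC by (simp add: g_def F.mul_closed)
  have "fsupp g \<subseteq> {vword i a | a. a \<in> acar (Al i)}"
  proof
    fix y assume "y \<in> fsupp g"
    then have y: "y \<in> fsupp (amul FA f (delta (unit_word i)))" "fst (fst y) = i"
      using fsupp_unit_mul[OF F.mul_closed[OF f(1) dC]] unfolding g_def by auto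
    then have y2: "y \<in> fsupp f" "pend \<Gamma> (fst y) = i" using fsupp_mul_unit[OF f(1)] by auto
    have "valid_word \<Gamma> Al y" using fsupp_free_valid[OF f(1) y2(1)] .
    then show "y \<in> {vword i a | a. a \<in> acar (Al i)}" using closed_word_vword y(2) y2(2) by blast
  qed
  then obtain a where "a \<in> acar (Al i)" "\<pi> g = emb i a" using vword_supported_emb[OF i gC] by blast
  moreover have "\<pi> g = amul \<Lambda> (vunit i) (amul \<Lambda> x (vunit i))"
    using f dC by (simp add: g_def \<pi>_mul F.mul_closed vunit_\<pi>)
  ultimately show ?thesis by auto
qed

lemma fsupp_mul_ends:
  assumes y: "y \<in> fsupp (amul FA f g)"
  shows "\<exists>v\<in>fsupp g. pend \<Gamma> (fst y) = pend \<Gamma> (fst v) \<and> length (snd (fst v)) \<le> length (snd (fst y))"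
proof -
  obtain u v where uv: "u \<in> fsupp f" "v \<in> fsupp g" "wprod \<Gamma> Al u v = Some y"
    using fsupp_free_mul y by blast
  then have e: "pend \<Gamma> (fst u) = fst (fst v)" and yv: "fst y = (fst (fst u), snd (fst u) @ snd (fst v))"
    by (auto simp: wprod_def split: if_splits)
  show ?thesis using uv(2) yv pend_cat[OF e] by auto
qed

lemma fsupp_compl_unit_mul:
  assumes i: "i \<in> qV \<Gamma>" and g: "g \<in> acar FA"
  shows "fsupp (amul FA (F.sub (aone FA) (delta (unit_word i))) g) \<subseteq> {v \<in> fsupp g. fst (fst v) \<noteq> i}"
proof
  fix y assume "y \<in> fsupp (amul FA (F.sub (aone FA) (delta (unit_word i))) g)"
  then obtain t v where tv: "t \<in> fsupp (F.sub (aone FA) (delta (unit_word i)))" "v \<in> fsupp g"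
    "wprod \<Gamma> Al t v = Some y"
    using fsupp_free_mul by blast
  have "aone FA = (\<lambda>x. if x \<in> unit_word ` qV \<Gamma> then 1 else 0)"
    by (simp add: free_alg_def salg_def free_alg_unit_words)
  then obtain l where l: "t = unit_word l" "l \<noteq> i"
    using tv(1) i by (auto simp: free_alg_simps delta_def fsupp_iff split: if_splits)
  have "y = v \<and> l = fst (fst v)"
    using tv(3) wprod_unit_l[OF fsupp_free_valid[OF g tv(2)]] l(1) by (auto split: if_splits)
  then show "y \<in> {v \<in> fsupp g. fst (fst v) \<noteq> i}" using tv(2) l by auto
qed

text \<open>Multiplying on the left by \<open>1 - \<epsilon>\<^sub>i\<close> keeps only words that start away from \<open>i\<close>; if they
  end at \<open>i\<close>, they cannot be prolonged to words starting at \<open>i\<close>, by acyclicity.\<close>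

lemma vunit_gap_zero:
  assumes i: "i \<in> qV \<Gamma>" and x: "x \<in> acar \<Lambda>" and y: "y \<in> acar \<Lambda>"
  shows "amul \<Lambda> (vunit i) (amul \<Lambda> x (amul \<Lambda> (Lm.sub (aone \<Lambda>) (vunit i)) (amul \<Lambda> y (vunit i)))) = azero \<Lambda>"
proof -
  obtain f where f: "f \<in> acar FA" "x = \<pi> f" using \<Lambda>_rep[OF x] by blast
  obtain g where g: "g \<in> acar FA" "y = \<pi> g" using \<Lambda>_rep[OF y] by blast
  have dC: "delta (unit_word i) \<in> acar FA" using delta_closed unit_word_valid i by simp
  define h where "h = F.sub (aone FA) (delta (unit_word i))"
  have hC: "h \<in> acar FA" using dC by (simp add: h_def F.sub_closed F.one_closed)
  have ph: "\<pi> h = Lm.sub (aone \<Lambda>) (vunit i)"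
    using dC by (simp add: h_def \<pi>_add \<pi>_sm F.sm_closed F.one_closed \<pi>_one vunit_\<pi>)
  define G where "G = amul FA f (amul FA h (amul FA g (delta (unit_word i))))"
  have GC: "G \<in> acar FA" using f g dC hC by (simp add: G_def F.mul_closed)
  have returning: "pend \<Gamma> (fst v) = i \<and> snd (fst v) \<noteq> []" if v: "v \<in> fsupp G" for v
  proof -
    obtain w where w: "w \<in> fsupp (amul FA h (amul FA g (delta (unit_word i))))"
      "pend \<Gamma> (fst v) = pend \<Gamma> (fst w)" "length (snd (fst w)) \<le> length (snd (fst v))"
      using fsupp_mul_ends v unfolding G_def by blast
    then have "w \<in> fsupp (amul FA g (delta (unit_word i)))" "fst (fst w) \<noteq> i"
      using fsupp_compl_unit_mul[OF i F.mul_closed[OF g(1) dC]] unfolding h_def by auto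
    then have "pend \<Gamma> (fst w) = i" "fst (fst w) \<noteq> i" using fsupp_mul_unit[OF g(1)] by auto
    then have "snd (fst w) \<noteq> []" by (auto simp: pend_def)
    then show ?thesis using w(2,3) \<open>pend \<Gamma> (fst w) = i\<close> by auto
  qed
  have "fsupp (amul FA (delta (unit_word i)) G) = {}"
    using fsupp_unit_mul[OF GC] returning closed_word_trivial fsupp_free_valid[OF GC] by fastforce
  then have "amul FA (delta (unit_word i)) G = azero FA" by (intro ext) (auto simp: free_alg_simps fsupp_iff)
  then have "\<pi> (amul FA (delta (unit_word i)) G) = azero \<Lambda>" by (simp add: \<pi>_zero)
  moreover have "\<pi> (amul FA (delta (unit_word i)) G) =
      amul \<Lambda> (vunit i) (amul \<Lambda> x (amul \<Lambda> (Lm.sub (aone \<Lambda>) (vunit i)) (amul \<Lambda> y (vunit i))))"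
    using f g dC hC by (simp add: G_def \<pi>_mul F.mul_closed vunit_\<pi> ph)
  ultimately show ?thesis by simp
qed

end

section \<open>Injectivity of the vertex embeddings\<close>

context gbpa_setting begin

definition deg0 :: "(('v \<times> 'e list) \<times> ('w \<times> 'f list \<Rightarrow> 'k) set list \<Rightarrow> 'k) \<Rightarrow> _" where
  "deg0 f = (\<lambda>w. if snd (fst w) = [] then f w else 0)"

lemma fsupp_deg0: "fsupp (deg0 f) \<subseteq> fsupp f" by (auto simp: deg0_def fsupp_iff split: if_splits)

lemma deg0_closed: "f \<in> acar FA \<Longrightarrow> deg0 f \<in> acar FA"
  using fsupp_deg0 by (auto simp: free_alg_simps intro: finite_subset)

lemma deg0_add: "deg0 (aadd FA f g) = aadd FA (deg0 f) (deg0 g)" by (auto simp: deg0_def free_alg_simps)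
lemma deg0_sm: "deg0 (asmul FA c f) = asmul FA c (deg0 f)" by (auto simp: deg0_def free_alg_simps)
lemma deg0_zero: "deg0 (azero FA) = azero FA" by (auto simp: deg0_def free_alg_simps)

lemma wprod_path: "wprod \<Gamma> Al u v = Some w \<Longrightarrow> snd (fst w) = snd (fst u) @ snd (fst v)"
  by (auto simp: wprod_def split: if_splits)

lemma deg0_mul:
  assumes f: "f \<in> acar FA" and g: "g \<in> acar FA"
  shows "deg0 (amul FA f g) = amul FA (deg0 f) (deg0 g)"
proof (rule ext)
  fix w
  have fin: "finite (fsupp f)" "finite (fsupp g)" using f g by (auto simp: free_alg_simps)
  have M: "amul FA f g w = (\<Sum>u\<in>fsupp f. \<Sum>v\<in>fsupp g. if wprod \<Gamma> Al u v = Some w then f u * g v else 0)"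
    unfolding free_alg_def by (rule salg_mul_eq[OF fin(1) subset_refl fin(2) subset_refl])
  have M0: "amul FA (deg0 f) (deg0 g) w = (\<Sum>u\<in>fsupp f. \<Sum>v\<in>fsupp g. if wprod \<Gamma> Al u v = Some w then deg0 f u * deg0 g v else 0)"
    unfolding free_alg_def by (rule salg_mul_eq[OF fin(1) fsupp_deg0 fin(2) fsupp_deg0])
  show "deg0 (amul FA f g) w = amul FA (deg0 f) (deg0 g) w"
  proof (cases "snd (fst w) = []")
    case True
    have "(if wprod \<Gamma> Al u v = Some w then f u * g v else 0) =
          (if wprod \<Gamma> Al u v = Some w then deg0 f u * deg0 g v else 0)" for u v
    proof (cases "wprod \<Gamma> Al u v = Some w")
      case T: True
      then have "snd (fst u) = [] \<and> snd (fst v) = []" using wprod_path True by auto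
      then show ?thesis using T by (simp add: deg0_def)
    qed simp
    then have "amul FA f g w = amul FA (deg0 f) (deg0 g) w" unfolding M M0 by simp
    then show ?thesis using True by (simp add: deg0_def)
  next
    case False
    have "(if wprod \<Gamma> Al u v = Some w then deg0 f u * deg0 g v else 0) = 0" for u v
    proof (cases "wprod \<Gamma> Al u v = Some w")
      case True
      then have "snd (fst u) \<noteq> [] \<or> snd (fst v) \<noteq> []" using wprod_path False by auto
      then show ?thesis by (auto simp: deg0_def)
    qed simp
    then have "amul FA (deg0 f) (deg0 g) w = 0" unfolding M0 by simp
    then show ?thesis using False by (simp add: deg0_def)
  qed
qed

lemma deg0_single_path: "fsupp f \<subseteq> {x. fst x = p} \<Longrightarrow> deg0 f = (if snd p = [] then f else azero FA)"
  by (rule ext) (auto simp: deg0_def free_alg_simps fsupp_iff)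

lemma MLgen_single_path: assumes g: "g \<in> MLgens" shows "\<exists>p. fsupp g \<subseteq> {x. fst x = p}"
  using g
proof (cases rule: MLgens_cases)
  case (add p as r a a')
  then show ?thesis by (intro exI[of _ p]) (auto simp: fsupp_iff delta_def split: if_splits)
next
  case (sm p as r a c)
  then show ?thesis by (intro exI[of _ p]) (auto simp: fsupp_iff delta_def split: if_splits)
qed

lemma deg0_MLspan: "m \<in> MLspan \<Longrightarrow> deg0 m \<in> MLspan"
proof -
  define T where "T = {m \<in> acar FA. deg0 m \<in> MLspan}"
  have Tsub: "is_subspace FA T"
    unfolding is_subspace_def T_def
    using MLspan_zero deg0_zero deg0_add deg0_sm MLspan_add MLspan_sm F.add_closed F.sm_closed F.zero_closed
    by (auto simp: free_alg_simps[symmetric])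
  have "MLgens \<subseteq> T"
  proof
    fix g assume g: "g \<in> MLgens"
    obtain p where p: "fsupp g \<subseteq> {x. fst x = p}" using MLgen_single_path[OF g] by blast
    have "deg0 g \<in> MLspan" using deg0_single_path[OF p] MLgens_in_span[OF g] MLspan_zero by (simp add: free_alg_simps)
    then show "g \<in> T" unfolding T_def using MLgens_closed g by blast
  qed
  then have "MLspan \<subseteq> T" by (rule F.span_least[OF Tsub])
  then show "m \<in> MLspan \<Longrightarrow> deg0 m \<in> MLspan" unfolding T_def by blast
qed

definition "deg0_null = cls ` {f \<in> acar FA. deg0 f \<in> MLspan}"

lemma deg0_null_ideal: "is_ideal KGA deg0_null"
proof -
  have sub: "is_subspace KGA deg0_null"
    unfolding is_subspace_def
  proof (intro conjI ballI allI)
    show "deg0_null \<subseteq> acar KGA" unfolding deg0_null_def using cls_closed by blast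
    show "azero KGA \<in> deg0_null" unfolding deg0_null_def using cls_zero deg0_zero MLspan_zero F.zero_closed
      by (force simp: free_alg_simps)
  next
    fix x y assume "x \<in> deg0_null" "y \<in> deg0_null"
    then obtain f g where h: "f \<in> acar FA" "deg0 f \<in> MLspan" "x = cls f" "g \<in> acar FA" "deg0 g \<in> MLspan" "y = cls g"
      by (auto simp: deg0_null_def)
    then have "aadd KGA x y = cls (aadd FA f g)" by (simp add: cls_add)
    moreover have "deg0 (aadd FA f g) \<in> MLspan" using h deg0_add MLspan_add by simp
    ultimately show "aadd KGA x y \<in> deg0_null" unfolding deg0_null_def using F.add_closed h by blast
  next
    fix c x assume "x \<in> deg0_null"
    then obtain f where h: "f \<in> acar FA" "deg0 f \<in> MLspan" "x = cls f" by (auto simp: deg0_null_def)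
    then have "asmul KGA c x = cls (asmul FA c f)" by (simp add: cls_sm)
    moreover have "deg0 (asmul FA c f) \<in> MLspan" using h deg0_sm MLspan_sm by simp
    ultimately show "asmul KGA c x \<in> deg0_null" unfolding deg0_null_def using F.sm_closed h by blast
  qed
  have "amul KGA r x \<in> deg0_null \<and> amul KGA x r \<in> deg0_null" if x: "x \<in> deg0_null" and r: "r \<in> acar KGA" for x r
  proof -
    obtain f where h: "f \<in> acar FA" "deg0 f \<in> MLspan" "x = cls f" using x by (auto simp: deg0_null_def)
    obtain g where g: "g \<in> acar FA" "r = cls g" using r KGA_carrier by blast
    have "amul KGA r x = cls (amul FA g f)" "amul KGA x r = cls (amul FA f g)"
      using h g by (simp_all add: cls_mul)
    moreover have "deg0 (amul FA g f) \<in> MLspan" "deg0 (amul FA f g) \<in> MLspan"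
      using h g deg0_mul deg0_closed MLspan_ideal by (auto simp: is_ideal_def)
    ultimately show ?thesis unfolding deg0_null_def using F.mul_closed h g by blast
  qed
  then show ?thesis using sub by (simp add: is_ideal_def)
qed

lemma AI_deg0_null: "AI \<Gamma> \<Sigma> \<Omega> I \<subseteq> deg0_null"
proof
  fix X assume "X \<in> AI \<Gamma> \<Sigma> \<Omega> I"
  then obtain \<rho> G where h: "\<rho> \<in> I" "\<forall>p\<in>fsupp \<rho>. \<forall>r. 0 < r \<and> r < length (snd p) \<longrightarrow> is_path (\<Sigma> (vtx \<Gamma> p r)) (G p r)"
    "X = cls (\<lambda>x. \<Sum>p\<in>fsupp \<rho>. if x = rel_word \<Gamma> \<Sigma> \<Omega> p (G p) then \<rho> p else 0)"
    unfolding AI_def cls_def by blast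
  let ?f = "(\<lambda>x. \<Sum>p\<in>fsupp \<rho>. if x = rel_word \<Gamma> \<Sigma> \<Omega> p (G p) then \<rho> p else 0)"
  have "is_relation \<Gamma> \<rho>" using relations_I h(1) by blast
  then obtain a b where ab: "\<forall>p\<in>fsupp \<rho>. fst p = a \<and> pend \<Gamma> p = b \<and> 2 \<le> length (snd p)"
    unfolding is_relation_def by blast
  have "deg0 ?f = azero FA"
  proof (rule ext)
    fix x
    show "deg0 ?f x = azero FA x"
    proof (cases "snd (fst x) = []")
      case True
      have "(if x = rel_word \<Gamma> \<Sigma> \<Omega> p (G p) then \<rho> p else 0) = 0" if "p \<in> fsupp \<rho>" for p
        using ab that True by (auto simp: rel_word_def)
      then show ?thesis by (simp add: deg0_def free_alg_simps)
    qed (simp add: deg0_def free_alg_simps)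
  qed
  then have "deg0 ?f \<in> MLspan" using MLspan_zero by (simp add: free_alg_simps)
  then show "X \<in> deg0_null" unfolding deg0_null_def using h(3) AI_rep_closed[OF h(1,2)] by blast
qed

lemma IA_deg0_null: "IA \<subseteq> deg0_null" by (rule K.ideal_gen_least[OF deg0_null_ideal AI_deg0_null])

definition vcoeff :: "'v \<Rightarrow> ((('v \<times> 'e list) \<times> ('w \<times> 'f list \<Rightarrow> 'k) set list) \<Rightarrow> 'k) \<Rightarrow> ('w \<times> 'f list \<Rightarrow> 'k)" where
  "vcoeff i f = (\<lambda>t. \<Sum>w\<in>fsupp f. if fst w = (i, []) then f w * rep (hd (snd w)) t else 0)"

lemma vcoeff_eq:
  assumes "finite S" "fsupp f \<subseteq> S"
  shows "vcoeff i f = (\<lambda>t. \<Sum>w\<in>S. if fst w = (i, []) then f w * rep (hd (snd w)) t else 0)"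
  unfolding vcoeff_def
  by (rule ext, rule sum.mono_neutral_left[OF assms]) (auto simp: fsupp_iff)

lemma free_fsupp_finite: "f \<in> acar FA \<Longrightarrow> finite (fsupp f)" by (simp add: free_alg_simps)

lemma vcoeff_add: "f \<in> acar FA \<Longrightarrow> g \<in> acar FA \<Longrightarrow> vcoeff i (aadd FA f g) = (\<lambda>t. vcoeff i f t + vcoeff i g t)"
proof -
  assume f: "f \<in> acar FA" and g: "g \<in> acar FA"
  let ?S = "fsupp f \<union> fsupp g"
  have fS: "finite ?S" using free_fsupp_finite f g by simp
  have s: "fsupp (aadd FA f g) \<subseteq> ?S" by (auto simp: free_alg_simps fsupp_iff)
  show ?thesis
    unfolding vcoeff_eq[OF fS s] vcoeff_eq[OF fS Un_upper1] vcoeff_eq[OF fS Un_upper2]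
    by (auto simp: free_alg_simps sum.distrib[symmetric] distrib_right intro!: sum.cong)
qed

lemma vcoeff_sm: "f \<in> acar FA \<Longrightarrow> vcoeff i (asmul FA c f) = (\<lambda>t. c * vcoeff i f t)"
proof -
  assume f: "f \<in> acar FA"
  have fS: "finite (fsupp f)" using free_fsupp_finite f by simp
  have s: "fsupp (asmul FA c f) \<subseteq> fsupp f" by (auto simp: free_alg_simps fsupp_iff)
  show ?thesis
    unfolding vcoeff_eq[OF fS s] vcoeff_eq[OF fS subset_refl]
    by (auto simp: free_alg_simps sum_distrib_left mult.assoc intro!: sum.cong)
qed

lemma vcoeff_zero: "vcoeff i (azero FA) = (\<lambda>t. 0)" by (simp add: vcoeff_def free_alg_simps)

lemma vcoeff_delta: "vcoeff i (delta w) = (\<lambda>t. if fst w = (i, []) then rep (hd (snd w)) t else 0)"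
proof -
  have "delta w w = (1::'k)" by (simp add: delta_def)
  then show ?thesis unfolding vcoeff_def fsupp_delta by (simp cong: if_cong)
qed

lemma path_alg_simps: "aadd (path_alg Q) = (\<lambda>f g x. f x + g x)" "asmul (path_alg Q) = (\<lambda>c f x. c * f x)"
  "azero (path_alg Q) = (\<lambda>x. 0)"
  by (simp_all add: path_alg_def salg_def)

lemma vertex_alg_rep: "i \<in> qV \<Gamma> \<Longrightarrow> a \<in> acar (Al i) \<Longrightarrow> rep a \<in> acar (path_alg (\<Sigma> i)) \<and> cos (path_alg (\<Sigma> i)) (\<Omega> i) (rep a) = a"
proof -
  assume i: "i \<in> qV \<Gamma>" and a: "a \<in> acar (Al i)"
  interpret O: kalg_ideal "path_alg (\<Sigma> i)" "\<Omega> i" by (rule Omega_kalg_ideal[OF i])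
  obtain x where x: "x \<in> acar (path_alg (\<Sigma> i))" "a = cos (path_alg (\<Sigma> i)) (\<Omega> i) x"
    using a by (auto simp: Aalg_def quot_carrier_eq)
  then show ?thesis using O.rep_coset_closed O.coset_rep by simp
qed

lemma vcoeff_delta_update:
  assumes w: "valid_word \<Gamma> Al (p, as)" and r: "r < length as" and p: "p = (i, [])"
  shows "vtx \<Gamma> p r = i" "vcoeff i (delta (p, as[r := x])) = rep x"
proof -
  obtain a0 where "as = [a0]" using valid_wordD(2)[OF w] p by (cases as) auto
  then have "r = 0" "hd (as[r := x]) = x" using r by auto
  then show "vtx \<Gamma> p r = i" "vcoeff i (delta (p, as[r := x])) = rep x" using p by (simp_all add: vtx_def vcoeff_delta)
qed

lemma vcoeff_MLgen:
  assumes i: "i \<in> qV \<Gamma>" and g: "g \<in> MLgens"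
  shows "vcoeff i g \<in> \<Omega> i"
proof -
  interpret O: kalg_ideal "path_alg (\<Sigma> i)" "\<Omega> i" by (rule Omega_kalg_ideal[OF i])
  have zero: "(\<lambda>t. 0) \<in> \<Omega> i" using O.ideal_zero by (simp add: path_alg_simps)
  have rep_diff: "(\<lambda>t. rep (cos (path_alg (\<Sigma> i)) (\<Omega> i) y) t - y t) \<in> \<Omega> i"
    if "y \<in> acar (path_alg (\<Sigma> i))" for y
    using O.rep_coset_sub[OF that] by (simp add: path_alg_simps)
  from g show ?thesis
  proof (cases rule: MLgens_cases)
    case (add p as r a a')
    have "vcoeff i g = (\<lambda>t. vcoeff i (delta (p, as[r := aadd (Al (vtx \<Gamma> p r)) a a'])) t
        - vcoeff i (delta (p, as[r := a])) t - vcoeff i (delta (p, as[r := a'])) t)"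
      unfolding add(5) diff3_eq_alg using add delta_update_closed kalg.add_closed[OF vertex_kalg[OF vtx_word_in_vertices[OF add(1,2)]]]
      by (simp add: vcoeff_add vcoeff_sm F.add_closed F.sm_closed)
    moreover
    { assume p: "p = (i, [])"
      note u = vcoeff_delta_update[OF add(1,2) p]
      have "rep a \<in> acar (path_alg (\<Sigma> i))" "rep a' \<in> acar (path_alg (\<Sigma> i))"
        using add(3,4) u(1) vertex_alg_rep[OF i] by auto
      then have "(\<lambda>t. rep (aadd (Al i) a a') t - (rep a t + rep a' t)) \<in> \<Omega> i"
        using rep_diff[OF O.add_closed] by (simp add: Aalg_def quot_def path_alg_simps)
      then have "(\<lambda>t. rep (aadd (Al i) a a') t - rep a t - rep a' t) \<in> \<Omega> i" by (simp add: diff_diff_eq)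
      then have ?thesis using u \<open>vcoeff i g = _\<close> by simp }
    ultimately show ?thesis using zero by (cases "p = (i, [])") (auto simp: vcoeff_delta)
  next
    case (sm p as r a c)
    have "vcoeff i g = (\<lambda>t. vcoeff i (delta (p, as[r := asmul (Al (vtx \<Gamma> p r)) c a])) t
        - c * vcoeff i (delta (p, as[r := a])) t)"
      unfolding sm(4) diff_sm_eq_alg using sm delta_update_closed kalg.sm_closed[OF vertex_kalg[OF vtx_word_in_vertices[OF sm(1,2)]]]
      by (simp add: vcoeff_add vcoeff_sm F.add_closed F.sm_closed)
    moreover
    { assume p: "p = (i, [])"
      note u = vcoeff_delta_update[OF sm(1,2) p]
      have "rep a \<in> acar (path_alg (\<Sigma> i))" using sm(3) u(1) vertex_alg_rep[OF i] by auto
      then have "(\<lambda>t. rep (asmul (Al i) c a) t - c * rep a t) \<in> \<Omega> i"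
        using rep_diff[OF O.sm_closed] by (simp add: Aalg_def quot_def path_alg_simps)
      then have ?thesis using u \<open>vcoeff i g = _\<close> by simp }
    ultimately show ?thesis using zero by (cases "p = (i, [])") (auto simp: vcoeff_delta)
  qed
qed

lemma vcoeff_MLspan:
  assumes i: "i \<in> qV \<Gamma>" and m: "m \<in> MLspan"
  shows "vcoeff i m \<in> \<Omega> i"
proof -
  interpret O: kalg_ideal "path_alg (\<Sigma> i)" "\<Omega> i" by (rule Omega_kalg_ideal[OF i])
  define Z where "Z = {f \<in> acar FA. vcoeff i f \<in> \<Omega> i}"
  have Zsub: "is_subspace FA Z"
    unfolding is_subspace_def
  proof (intro conjI ballI allI)
    show "Z \<subseteq> acar FA" by (auto simp: Z_def)
    show "azero FA \<in> Z" unfolding Z_def using F.zero_closed O.ideal_zero by (simp add: vcoeff_zero path_alg_simps)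
  next
    fix x y assume "x \<in> Z" "y \<in> Z"
    then show "aadd FA x y \<in> Z" unfolding Z_def using O.ideal_add[of "vcoeff i x" "vcoeff i y"]
      by (simp add: vcoeff_add F.add_closed path_alg_simps)
  next
    fix c x assume "x \<in> Z"
    then show "asmul FA c x \<in> Z" unfolding Z_def using O.ideal_sm[of "vcoeff i x" c]
      by (simp add: vcoeff_sm F.sm_closed path_alg_simps)
  qed
  have "MLgens \<subseteq> Z" unfolding Z_def using vcoeff_MLgen[OF i] MLgens_closed by blast
  then have "MLspan \<subseteq> Z" by (rule F.span_least[OF Zsub])
  then show ?thesis using m by (auto simp: Z_def)
qed

text \<open>The defining relations of \<open>\<Lambda>\<close> only involve words of positive length, so two elements with the
  same image in \<open>\<Lambda>\<close> have length-zero parts that agree modulo multilinearity.\<close>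

lemma \<pi>_eq_deg0_MLspan:
  assumes f: "f \<in> acar FA" and g: "g \<in> acar FA" and eq: "\<pi> f = \<pi> g"
  shows "deg0 (F.sub f g) \<in> MLspan"
proof -
  have d: "F.sub f g \<in> acar FA" using f g by (simp add: F.sub_closed)
  have "K.sub (cls f) (cls g) \<in> IA" using eq LI.coset_eq_iff cls_closed f g unfolding \<pi>_def by blast
  moreover have "K.sub (cls f) (cls g) = cls (F.sub f g)" using f g by (simp add: cls_add cls_sm F.sm_closed)
  ultimately have "cls (F.sub f g) \<in> deg0_null" using IA_deg0_null by auto
  then obtain h where h: "h \<in> acar FA" "deg0 h \<in> MLspan" "cls h = cls (F.sub f g)" by (auto simp: deg0_null_def)
  have "deg0 (F.sub h (F.sub f g)) \<in> MLspan" using cls_eq_iff h d deg0_MLspan by blast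
  moreover have "deg0 (F.sub f g) = F.sub (deg0 h) (deg0 (F.sub h (F.sub f g)))"
    by (rule ext) (simp add: deg0_def free_alg_simps)
  ultimately show ?thesis using MLspan_add MLspan_sm h(2) by simp
qed

lemma emb_inj:
  assumes i: "i \<in> qV \<Gamma>" and a: "a \<in> acar (Al i)" and b: "b \<in> acar (Al i)"
    and eq: "emb i a = emb i b"
  shows "a = b"
proof -
  interpret O: kalg_ideal "path_alg (\<Sigma> i)" "\<Omega> i" by (rule Omega_kalg_ideal[OF i])
  have dC: "delta (vword i a) \<in> acar FA" "delta (vword i b) \<in> acar FA"
    using delta_closed vword_valid i a b by auto
  define d where "d = F.sub (delta (vword i a)) (delta (vword i b))"
  have "deg0 d \<in> MLspan" unfolding d_def using \<pi>_eq_deg0_MLspan[OF dC] eq by (simp add: emb_\<pi>)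
  moreover have "deg0 d = d" by (rule ext) (simp add: deg0_def d_def free_alg_simps delta_def vword_def)
  ultimately have "vcoeff i d \<in> \<Omega> i" using vcoeff_MLspan[OF i] by simp
  moreover have "vcoeff i d = O.sub (rep a) (rep b)"
    using dC by (simp add: d_def vcoeff_add vcoeff_sm F.sm_closed vcoeff_delta vword_def path_alg_simps)
  ultimately have "O.sub (rep a) (rep b) \<in> \<Omega> i" by simp
  then have "cos (path_alg (\<Sigma> i)) (\<Omega> i) (rep a) = cos (path_alg (\<Sigma> i)) (\<Omega> i) (rep b)"
    using O.coset_eq_iff vertex_alg_rep[OF i a] vertex_alg_rep[OF i b] by blast
  then show ?thesis using vertex_alg_rep[OF i a] vertex_alg_rep[OF i b] by simp
qed

end

section \<open>The radical of \<open>P(i, j)\<close>\<close>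

context gbpa_setting begin

lemma corner_embedding_at_vertex:
  assumes i: "i \<in> qV \<Gamma>" and e: "e \<in> acar (Al i)" "amul (Al i) e e = e"
  shows "corner_embedding \<Lambda> (Al i) (emb i) (vunit i) e"
proof -
  interpret Ai: kalg "Al i" by (rule vertex_alg_kalg[OF i])
  show ?thesis
  proof (unfold_locales)
    show "iota \<Gamma> \<Sigma> \<Omega> I i (aone (Al i)) = vunit i" by (simp add: unit_at_def)
    show "a = b" if "a \<in> acar (Al i)" "b \<in> acar (Al i)" "emb i a = emb i b" for a b
      using emb_inj[OF i that] .
  qed (use e in \<open>simp_all add: emb_closed emb_add emb_sm emb_mul vunit_corner_in_image vunit_gap_zero i\<close>)
qed

lemma rspace_rad_eA:
  assumes i: "i \<in> qV \<Gamma>" and e: "e \<in> acar (Al i)" "amul (Al i) e e = e" and l: "l \<in> qV \<Gamma>"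
  shows "rspace \<Gamma> \<Sigma> \<Omega> I (mod_rad \<Lambda> (eA \<Lambda> (emb i e))) l =
    (if l = i then emb i ` mod_rad (Al i) (eA (Al i) e) else rspace \<Gamma> \<Sigma> \<Omega> I (eA \<Lambda> (emb i e)) l)"
proof -
  interpret corner_embedding \<Lambda> "Al i" "emb i" "vunit i" e by (rule corner_embedding_at_vertex[OF i e])
  show ?thesis
  proof (cases "l = i")
    case True
    then show ?thesis using rad_mul_\<epsilon> by (simp add: rspace_def)
  next
    case False
    then show ?thesis
      using rad_mul_orth_idem[OF vunit_closed[OF l] vunit_idem[OF l] vunit_orth[OF l i False]]
      by (simp add: rspace_def)
  qed
qed

end

lemma rmap_mono:
  "X \<subseteq> Y \<Longrightarrow> rmap \<Gamma> \<Sigma> \<Omega> I X \<alpha> = restrict (rmap \<Gamma> \<Sigma> \<Omega> I Y \<alpha>) (rspace \<Gamma> \<Sigma> \<Omega> I X (qs \<Gamma> \<alpha>))"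
  unfolding rmap_def by (rule ext) (auto simp: restrict_def rspace_def)

theorem proposition5p4:
  fixes \<Gamma> :: "('v, 'e) quiver"
    and \<Sigma> :: "'v \<Rightarrow> ('w, 'f) quiver"
    and \<Omega> :: "'v \<Rightarrow> ('w \<times> 'f list \<Rightarrow> 'k::field) set"
    and I :: "('v \<times> 'e list \<Rightarrow> 'k) set"
    and es :: "nat \<Rightarrow> ('w \<times> 'f list \<Rightarrow> 'k) set"
    and s j :: nat and i :: 'v
  assumes alg_closed: "\<forall>p :: 'k poly. 0 < degree p \<longrightarrow> (\<exists>x. poly p x = 0)"
    and "finite_quiver \<Gamma>" and "acyclic_quiver \<Gamma>"
    and "\<forall>l\<in>qV \<Gamma>. finite_quiver (\<Sigma> l) \<and> admissible (\<Sigma> l) (\<Omega> l)"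
    and "finite I" and "\<forall>\<rho>\<in>I. is_relation \<Gamma> \<rho>"
    and "admissible \<Gamma> (ideal_gen (path_alg \<Gamma>) I)"
    and "i \<in> qV \<Gamma>"
    and "complete_prim_idems (Aalg \<Sigma> \<Omega> i) es s" and "j \<in> {1..s}"
  shows "let \<Lambda> = gbpa \<Gamma> \<Sigma> \<Omega> I;
             P = eA \<Lambda> (iota \<Gamma> \<Sigma> \<Omega> I i (es j));
             R = mod_rad \<Lambda> P;
             N = (\<lambda>l. if l = i then iota \<Gamma> \<Sigma> \<Omega> I i ` mod_rad (Aalg \<Sigma> \<Omega> i) (eA (Aalg \<Sigma> \<Omega> i) (es j))
                      else rspace \<Gamma> \<Sigma> \<Omega> I P l)
         in (\<forall>l\<in>qV \<Gamma>. rspace \<Gamma> \<Sigma> \<Omega> I R l = N l) \<and>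
            (\<forall>\<alpha>\<in>qE \<Gamma>. rmap \<Gamma> \<Sigma> \<Omega> I R \<alpha> = restrict (rmap \<Gamma> \<Sigma> \<Omega> I P \<alpha>) (N (qs \<Gamma> \<alpha>)))"
proof -
  interpret gbpa_setting \<Gamma> \<Sigma> \<Omega> I
    by (rule gbpa_setting.intro) (use assms in auto)
  have e: "es j \<in> acar (Al i)" "amul (Al i) (es j) (es j) = es j"
    using assms(9,10) by (auto simp: complete_prim_idems_def primitive_idem_def idem_def)
  have source: "qs \<Gamma> \<alpha> \<in> qV \<Gamma>" if "\<alpha> \<in> qE \<Gamma>" for \<alpha>
    using assms(2) that by (simp add: finite_quiver_def)
  show ?thesis
    by (simp add: Let_def rspace_rad_eA[OF assms(8) e] source rmap_mono[OF rad_subset])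
qed

end
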